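(* Let $[a,b]\subset\mathbb{R}$ be a compact interval, let $m\geq1$, $r\geq2$, $n\geq0$ be integers, let $0<\alpha\leq1$, and let $\varepsilon_0>0$. For each $\varepsilon\in[0,\varepsilon_0)$ let $A_{r-j}(\cdot,\varepsilon)\in(C^{n,\alpha})^{m\times m}$ for $j=1,\dots,r$, and let $B(\varepsilon):(C^{n+r,\alpha})^{m}\to\mathbb{C}^{rm}$ be a continuous linear operator. Put $L(\varepsilon)y:=y^{(r)}+\sum_{j=1}^{r}A_{r-j}(\cdot,\varepsilon)y^{(r-j)}$ and consider the boundary-value problem $L(\varepsilon)y(\cdot,\varepsilon)=f(\cdot,\varepsilon)$ on $[a,b]$, $B(\varepsilon)y(\cdot,\varepsilon)=c(\varepsilon)$, with $f(\cdot,\varepsilon)\in(C^{n,\alpha})^{m}$, $c(\varepsilon)\in\mathbb{C}^{rm}$ and unknown $y(\cdot,\varepsilon)\in(C^{n+r,\alpha})^{m}$. Assume: (0) the problem $L(0)y=0$, $B(0)y=0$ has only the trivial solution in $(C^{n+r,\alpha})^{m}$; (I) $A_{r-j}(\cdot,\varepsilon)\to A_{r-j}(\cdot,0)$ in $(C^{n,\alpha})^{m\times m}$ as $\varepsilon\to0+$ for each $j\in\{1,\dots,r\}$; (II) $B(\varepsilon)y\to B(0)y$ in $\mathbb{C}^{rm}$ as $\varepsilon\to0+$ for every $y\in(C^{n+r,\alpha})^{m}$. Let $\varepsilon_1\in(0,\varepsilon_0)$ be such that for every $\varepsilon\in[0,\varepsilon_1)$ and all right-hand sides $f(\cdot,\varepsilon)$,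 $c(\varepsilon)$ the problem has a unique solution $y(\cdot,\varepsilon)\in(C^{n+r,\alpha})^{m}$ (such $\varepsilon_1$ exists under these assumptions). Then there exist positive numbers $\varepsilon_2<\varepsilon_1$, $\varkappa_1$, $\varkappa_2$ such that for every choice of $f(\cdot,\varepsilon)$, $c(\varepsilon)$ ($\varepsilon\in[0,\varepsilon_1)$), with $y(\cdot,\varepsilon)$ the corresponding unique solutions, $$\varkappa_1\,d_{n,\alpha}(\varepsilon)\leq\|y(\cdot,0)-y(\cdot,\varepsilon)\|_{n+r,\alpha}\leq\varkappa_2\,d_{n,\alpha}(\varepsilon)\quad\text{for every }\varepsilon\in(0,\varepsilon_2),$$ where $d_{n,\alpha}(\varepsilon):=\|L(\varepsilon)y(\cdot,0)-f(\cdot,\varepsilon)\|_{n,\alpha}+|B(\varepsilon)y(\cdot,0)-c(\varepsilon)|$. The numbers $\varepsilon_2,\varkappa_1,\varkappa_2$ do not depend on the functions $y(\cdot,0)$ and $y(\cdot,\varepsilon)$.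
   Context: $C^{n,\alpha}$ denotes the complex Hölder space of all $n$ times continuously differentiable functions $x:[a,b]\to\mathbb{C}$ with $\|x\|'_{n,\alpha}:=\sup_{a\leq t_1<t_2\leq b}|x^{(n)}(t_2)-x^{(n)}(t_1)|/|t_2-t_1|^{\alpha}<\infty$, normed by $\|x\|_{n,\alpha}:=\sum_{j=0}^{n}\max_{[a,b]}|x^{(j)}|+\|x\|'_{n,\alpha}$. $(C^{n,\alpha})^{m}$ and $(C^{n,\alpha})^{m\times m}$ are the spaces of $m$-column vector-valued and $m\times m$ matrix-valued functions with entries in $C^{n,\alpha}$, normed by the sum of the entries' norms (also denoted $\|\cdot\|_{n,\alpha}$). $|\cdot|$ is a norm on $\mathbb{C}^{rm}$. *)

theory Defs
  imports "HOL-Analysis.Analysis"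
begin

fun hderiv :: "real \<Rightarrow> real \<Rightarrow> nat \<Rightarrow> (real \<Rightarrow> complex) \<Rightarrow> real \<Rightarrow> complex" where
  "hderiv a b 0 x = x"
| "hderiv a b (Suc j) x = (\<lambda>t. vector_derivative (hderiv a b j x) (at t within {a..b}))"

definition hquot :: "real \<Rightarrow> real \<Rightarrow> real \<Rightarrow> (real \<Rightarrow> complex) \<Rightarrow> real set" where
  "hquot a b \<alpha> x = {cmod (x t2 - x t1) / (t2 - t1) powr \<alpha> | t1 t2. a \<le> t1 \<and> t1 < t2 \<and> t2 \<le> b}"

text \<open>The complex Hoelder space C^{n,alpha}[a,b] (functions are considered through their values on [a,b]).\<close>
definition Hoelder :: "real \<Rightarrow> real \<Rightarrow> nat \<Rightarrow> real \<Rightarrow> (real \<Rightarrow> complex) set" where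
  "Hoelder a b n \<alpha> = {x.
     (\<forall>j<n. \<forall>t\<in>{a..b}. (hderiv a b j x has_vector_derivative hderiv a b (Suc j) x t) (at t within {a..b}))
   \<and> (\<forall>j\<le>n. continuous_on {a..b} (hderiv a b j x))
   \<and> bdd_above (hquot a b \<alpha> (hderiv a b n x))}"

definition hnorm :: "real \<Rightarrow> real \<Rightarrow> nat \<Rightarrow> real \<Rightarrow> (real \<Rightarrow> complex) \<Rightarrow> real" where
  "hnorm a b n \<alpha> x = (\<Sum>j\<le>n. Sup ((\<lambda>t. cmod (hderiv a b j x t)) ` {a..b}))
                      + Sup (hquot a b \<alpha> (hderiv a b n x))"

definition HoelderV :: "real \<Rightarrow> real \<Rightarrow> nat \<Rightarrow> real \<Rightarrow> (real \<Rightarrow> complex^'m::finite) set" where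
  "HoelderV a b n \<alpha> = {y. \<forall>i. (\<lambda>t. y t $ i) \<in> Hoelder a b n \<alpha>}"

definition hnormV :: "real \<Rightarrow> real \<Rightarrow> nat \<Rightarrow> real \<Rightarrow> (real \<Rightarrow> complex^'m::finite) \<Rightarrow> real" where
  "hnormV a b n \<alpha> y = (\<Sum>i\<in>UNIV. hnorm a b n \<alpha> (\<lambda>t. y t $ i))"

definition HoelderM :: "real \<Rightarrow> real \<Rightarrow> nat \<Rightarrow> real \<Rightarrow> (real \<Rightarrow> complex^'m::finite^'m) set" where
  "HoelderM a b n \<alpha> = {A. \<forall>i k. (\<lambda>t. A t $ i $ k) \<in> Hoelder a b n \<alpha>}"

definition hnormM :: "real \<Rightarrow> real \<Rightarrow> nat \<Rightarrow> real \<Rightarrow> (real \<Rightarrow> complex^'m::finite^'m) \<Rightarrow> real" where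
  "hnormM a b n \<alpha> A = (\<Sum>i\<in>UNIV. \<Sum>k\<in>UNIV. hnorm a b n \<alpha> (\<lambda>t. A t $ i $ k))"

definition hderivV :: "real \<Rightarrow> real \<Rightarrow> nat \<Rightarrow> (real \<Rightarrow> complex^'m::finite) \<Rightarrow> real \<Rightarrow> complex^'m" where
  "hderivV a b j y t = (\<chi> i. hderiv a b j (\<lambda>s. y s $ i) t)"

definition Lop :: "real \<Rightarrow> real \<Rightarrow> nat \<Rightarrow> (nat \<Rightarrow> real \<Rightarrow> complex^'m::finite^'m)
                    \<Rightarrow> (real \<Rightarrow> complex^'m) \<Rightarrow> real \<Rightarrow> complex^'m" where
  "Lop a b r A y t = hderivV a b r y t + (\<Sum>j\<in>{1..r}. A (r - j) t *v hderivV a b (r - j) y t)"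

definition is_cnorm :: "(complex^'k::finite \<Rightarrow> real) \<Rightarrow> bool" where
  "is_cnorm N \<longleftrightarrow> (\<forall>x y. N (x + y) \<le> N x + N y) \<and> (\<forall>c x. N (c *s x) = cmod c * N x)
                  \<and> (\<forall>x. N x = 0 \<longrightarrow> x = 0)"

end

theory Submission
  imports Defs "HOL-Library.Function_Algebras"
begin

text \<open>
  The difference \<open>z = y(\<cdot>,0) - y(\<cdot>,\<epsilon>)\<close> satisfies \<open>L(\<epsilon>) z = L(\<epsilon>) y(\<cdot>,0) - f(\<cdot>,\<epsilon>)\<close> and
  \<open>B(\<epsilon>) z = B(\<epsilon>) y(\<cdot>,0) - c(\<epsilon>)\<close>, so the claim says that the operators \<open>T(\<epsilon>) = (L(\<epsilon>), B(\<epsilon>))\<close>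
  satisfy \<open>\<parallel>z\<parallel> \<approx> \<parallel>T(\<epsilon>) z\<parallel>\<close> uniformly for small \<open>\<epsilon>\<close>.
  Multiplication is continuous on Hoelder spaces, so \<open>L(\<epsilon>) \<rightarrow> L(0)\<close> in operator norm, whereas
  \<open>B(\<epsilon>) \<rightarrow> B(0)\<close> only pointwise; by the uniform boundedness principle the \<open>B(\<epsilon>)\<close> are
  nevertheless uniformly bounded, which gives the lower bound. The bijection \<open>T(0)\<close> has a bounded
  inverse, and since the kernel of \<open>L(0)\<close> is finite dimensional, \<open>B(\<epsilon>) \<rightarrow> B(0)\<close> uniformly on it.
  Splitting \<open>z = u + v\<close> with \<open>L(0) u = L(0) z\<close>, \<open>B(0) u = 0\<close> and \<open>L(0) v = 0\<close> then yields the
  upper bound.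
\<close>

section \<open>Complete normed subsets of a real vector space\<close>

instantiation "fun" :: (type, real_vector) real_vector
begin
definition scaleR_fun :: "real \<Rightarrow> ('a \<Rightarrow> 'b) \<Rightarrow> 'a \<Rightarrow> 'b" where
  "scaleR_fun c f = (\<lambda>x. c *\<^sub>R f x)"
instance
  by standard (auto simp: scaleR_fun_def fun_eq_iff scaleR_add_right scaleR_add_left)
end

lemma scaleR_fun_apply [simp]: "(c *\<^sub>R f) x = c *\<^sub>R f x"
  by (simp add: scaleR_fun_def)

definition linear_on :: "'a::real_vector set \<Rightarrow> ('a \<Rightarrow> 'b::real_vector) \<Rightarrow> bool" where
  "linear_on X T \<longleftrightarrow> (\<forall>x\<in>X. \<forall>y\<in>X. T (x + y) = T x + T y) \<and> (\<forall>c. \<forall>x\<in>X. T (c *\<^sub>R x) = c *\<^sub>R T x)"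

lemma linear_onI:
  assumes "\<And>x y. x \<in> X \<Longrightarrow> y \<in> X \<Longrightarrow> T (x + y) = T x + T y"
    and "\<And>c x. x \<in> X \<Longrightarrow> T (c *\<^sub>R x) = c *\<^sub>R T x"
  shows "linear_on X T"
  using assms unfolding linear_on_def by blast

lemma linear_on_add: "linear_on X T \<Longrightarrow> x \<in> X \<Longrightarrow> y \<in> X \<Longrightarrow> T (x + y) = T x + T y"
  unfolding linear_on_def by blast

lemma linear_on_scaleR: "linear_on X T \<Longrightarrow> x \<in> X \<Longrightarrow> T (c *\<^sub>R x) = c *\<^sub>R T x"
  unfolding linear_on_def by blast

lemma linear_on_Pair: "linear_on X f \<Longrightarrow> linear_on X g \<Longrightarrow> linear_on X (\<lambda>x. (f x, g x))"
  unfolding linear_on_def by auto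

lemma field_le_epsilon_mult:
  fixes x y C :: real
  assumes "\<And>e. e > 0 \<Longrightarrow> x \<le> y + C * e"
  shows "x \<le> y"
proof (rule field_le_epsilon)
  fix e :: real assume e: "e > 0"
  have "x \<le> y + C * (e / (\<bar>C\<bar> + 1))" using assms[of "e / (\<bar>C\<bar> + 1)"] e by simp
  also have "C * (e / (\<bar>C\<bar> + 1)) \<le> \<bar>C\<bar> * (e / (\<bar>C\<bar> + 1))"
    using e by (intro mult_right_mono) auto
  also have "\<dots> \<le> e" using e by (simp add: field_simps)
  finally show "x \<le> y + e" by simp
qed

lemma (in Metric_space) mcomplete_cover_dense_in_ball:
  fixes F :: "nat \<Rightarrow> 'a set"
  assumes mc: "mcomplete" and ne: "M \<noteq> {}" and cov: "\<And>x. x \<in> M \<Longrightarrow> \<exists>k. x \<in> F k"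
  shows "\<exists>k x0 \<rho>. \<rho> > 0 \<and> x0 \<in> M \<and> (\<forall>y\<in>M. d x0 y < \<rho> \<longrightarrow> (\<forall>\<eta>>0. \<exists>z\<in>F k \<inter> M. d y z < \<eta>))"
proof -
  let ?G = "range (\<lambda>k. mtopology closure_of (F k \<inter> M))"
  have "\<Union>?G = M"
  proof
    show "\<Union>?G \<subseteq> M" using closure_of_subset_topspace[of mtopology] by auto
    show "M \<subseteq> \<Union>?G"
      using cov closure_of_subset[of "F _ \<inter> M" mtopology] by fastforce
  qed
  have "\<not> (\<forall>T\<in>?G. closedin mtopology T \<and> mtopology interior_of T = {})"
  proof
    assume "\<forall>T\<in>?G. closedin mtopology T \<and> mtopology interior_of T = {}"
    then have "mtopology interior_of \<Union>?G = {}"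
      by (intro metric_Baire_category_alt[OF mc]) auto
    then show False using \<open>\<Union>?G = M\<close> ne interior_of_topspace[of mtopology] by simp
  qed
  then obtain k x0 where x0: "x0 \<in> mtopology interior_of (mtopology closure_of (F k \<inter> M))"
    by auto
  moreover have "openin mtopology (mtopology interior_of (mtopology closure_of (F k \<inter> M)))" by simp
  ultimately obtain \<rho> where \<rho>: "\<rho> > 0" "mball x0 \<rho> \<subseteq> mtopology interior_of (mtopology closure_of (F k \<inter> M))"
    unfolding openin_mtopology by blast
  have x0M: "x0 \<in> M" using x0 interior_of_subset[of mtopology] closure_of_subset_topspace[of mtopology] by auto
  have "\<forall>\<eta>>0. \<exists>z\<in>F k \<inter> M. d y z < \<eta>" if "y \<in> M" "d x0 y < \<rho>" for y
  proof -
    have "y \<in> mtopology closure_of (F k \<inter> M)"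
      using that x0M \<rho>(2) interior_of_subset[of mtopology "mtopology closure_of (F k \<inter> M)"] by auto
    then show ?thesis unfolding metric_closure_of by auto
  qed
  then show ?thesis using \<rho>(1) x0M by blast
qed

text \<open>Hoelder spaces are sets of functions rather than types, so the Banach space theory needed
  here is developed for complete normed subsets of a real vector space.\<close>

locale banach_set =
  fixes X :: "'a::real_vector set" and p :: "'a \<Rightarrow> real"
  assumes zero_mem: "0 \<in> X"
    and add_mem: "\<And>x y. x \<in> X \<Longrightarrow> y \<in> X \<Longrightarrow> x + y \<in> X"
    and scale_mem: "\<And>x c. x \<in> X \<Longrightarrow> c *\<^sub>R x \<in> X"
    and p_triangle: "\<And>x y. x \<in> X \<Longrightarrow> y \<in> X \<Longrightarrow> p (x + y) \<le> p x + p y"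
    and p_scale: "\<And>x c. x \<in> X \<Longrightarrow> p (c *\<^sub>R x) = \<bar>c\<bar> * p x"
    and p_eq_0: "\<And>x. x \<in> X \<Longrightarrow> p x = 0 \<Longrightarrow> x = 0"
    and complete: "\<And>\<sigma>::nat\<Rightarrow>'a. (\<And>k. \<sigma> k \<in> X) \<Longrightarrow>
                   (\<And>e. e > 0 \<Longrightarrow> \<exists>K. \<forall>k\<ge>K. \<forall>l\<ge>K. p (\<sigma> k - \<sigma> l) < e) \<Longrightarrow>
                   \<exists>x\<in>X. \<forall>e>0. \<exists>K. \<forall>k\<ge>K. p (\<sigma> k - x) < e"
begin

lemma uminus_mem: "x \<in> X \<Longrightarrow> - x \<in> X"
  using scale_mem[of x "-1"] by simp

lemma diff_mem: "x \<in> X \<Longrightarrow> y \<in> X \<Longrightarrow> x - y \<in> X"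
  using add_mem[OF _ uminus_mem, of x y] by simp

lemma sum_mem: "(\<And>i. i \<in> I \<Longrightarrow> x i \<in> X) \<Longrightarrow> (\<Sum>i\<in>I. x i) \<in> X"
  by (induction I rule: infinite_finite_induct) (auto intro: zero_mem add_mem)

lemma p_zero: "p 0 = 0"
  using p_scale[OF zero_mem, of 0] by simp

lemma p_minus: "x \<in> X \<Longrightarrow> p (- x) = p x"
  using p_scale[of x "-1"] by simp

lemma p_nonneg: "x \<in> X \<Longrightarrow> 0 \<le> p x"
  using p_triangle[of x "-x"] p_minus[of x] p_zero uminus_mem[of x] by simp

lemma p_minus_commute: "x \<in> X \<Longrightarrow> y \<in> X \<Longrightarrow> p (x - y) = p (y - x)"
  using p_minus[OF diff_mem[of y x]] by simp

lemma p_triangle_diff: "x \<in> X \<Longrightarrow> y \<in> X \<Longrightarrow> z \<in> X \<Longrightarrow> p (x - z) \<le> p (x - y) + p (y - z)"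
  using p_triangle[OF diff_mem[of x y] diff_mem[of y z]] by simp

lemma linear_on_zero: "linear_on X T \<Longrightarrow> T 0 = 0"
  using linear_on_scaleR[OF _ zero_mem, of T 0] by simp

lemma linear_on_diff: "linear_on X T \<Longrightarrow> x \<in> X \<Longrightarrow> y \<in> X \<Longrightarrow> T (x - y) = T x - T y"
  using linear_on_add[OF _ _ scale_mem, of T x y "-1"] linear_on_scaleR[of X T y "-1"] by simp

lemma linear_on_sum:
  "linear_on X T \<Longrightarrow> (\<And>i. i \<in> I \<Longrightarrow> x i \<in> X) \<Longrightarrow> T (\<Sum>i\<in>I. x i) = (\<Sum>i\<in>I. T (x i))"
  by (induction I rule: infinite_finite_induct) (auto simp: linear_on_zero linear_on_add sum_mem)

lemma linear_on_bound_from_ball: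
  fixes T :: "'a \<Rightarrow> 'b::real_normed_vector"
  assumes lin: "linear_on X T" and \<rho>: "\<rho> > 0"
    and ball: "\<And>y. y \<in> X \<Longrightarrow> p y < \<rho> \<Longrightarrow> norm (T y) \<le> k" and x: "x \<in> X"
  shows "norm (T x) \<le> (2 * k / \<rho>) * p x"
proof (cases "p x = 0")
  case True
  then show ?thesis using p_eq_0[OF x] linear_on_zero[OF lin] by simp
next
  case False
  then have px: "p x > 0" using p_nonneg[OF x] by simp
  define s where "s = \<rho> / (2 * p x)"
  have s: "s > 0" unfolding s_def using px \<rho> by simp
  have "p (s *\<^sub>R x) < \<rho>" using p_scale[OF x, of s] s px \<rho> unfolding s_def by simp
  then have "norm (T (s *\<^sub>R x)) \<le> k" using ball[OF scale_mem[OF x]] by blast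
  then have "s * norm (T x) \<le> k" using linear_on_scaleR[OF lin x] s by simp
  then have "norm (T x) \<le> k / s" using s by (simp add: field_simps)
  also have "k / s = (2 * k / \<rho>) * p x" unfolding s_def using px \<rho> by (simp add: field_simps)
  finally show ?thesis .
qed

definition dist_on :: "'a \<Rightarrow> 'a \<Rightarrow> real" where
  "dist_on x y = (if x \<in> X \<and> y \<in> X then p (x - y) else 0)"

lemma Metric_space_dist_on: "Metric_space X dist_on"
proof
  fix x y z
  show "0 \<le> dist_on x y" unfolding dist_on_def using p_nonneg diff_mem by auto
  show "dist_on x y = dist_on y x" unfolding dist_on_def using p_minus_commute by auto
  show "x \<in> X \<Longrightarrow> y \<in> X \<Longrightarrow> (dist_on x y = 0) = (x = y)"
    unfolding dist_on_def using p_eq_0[OF diff_mem[of x y]] p_zero by auto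
  show "x \<in> X \<Longrightarrow> y \<in> X \<Longrightarrow> z \<in> X \<Longrightarrow> dist_on x z \<le> dist_on x y + dist_on y z"
    unfolding dist_on_def using p_triangle_diff[of x y z] by simp
qed

lemma mcomplete_dist_on: "Metric_space.mcomplete X dist_on"
proof -
  interpret M: Metric_space X dist_on by (rule Metric_space_dist_on)
  show ?thesis
    unfolding M.mcomplete_def
  proof (intro allI impI)
    fix \<sigma> :: "nat \<Rightarrow> 'a" assume "M.MCauchy \<sigma>"
    then have s: "\<And>k. \<sigma> k \<in> X"
      and c: "\<And>e. e > 0 \<Longrightarrow> \<exists>N. \<forall>n n'. N \<le> n \<longrightarrow> N \<le> n' \<longrightarrow> dist_on (\<sigma> n) (\<sigma> n') < e"
      unfolding M.MCauchy_def by auto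
    have "\<exists>K. \<forall>k\<ge>K. \<forall>l\<ge>K. p (\<sigma> k - \<sigma> l) < e" if "e > 0" for e
      using c[OF that] s unfolding dist_on_def by auto
    then obtain x where x: "x \<in> X" "\<And>e. e > 0 \<Longrightarrow> \<exists>K. \<forall>k\<ge>K. p (\<sigma> k - x) < e"
      using complete[of \<sigma>] s by blast
    have "limitin M.mtopology \<sigma> x sequentially"
      unfolding M.limitin_metric eventually_sequentially dist_on_def using x s by fastforce
    then show "\<exists>x. limitin M.mtopology \<sigma> x sequentially" by blast
  qed
qed

lemma uniformly_bounded_on_ball:
  fixes T :: "real \<Rightarrow> 'a \<Rightarrow> 'b::real_normed_vector"
  assumes \<delta>0: "\<delta>0 > 0"
    and lin: "\<And>\<epsilon>. \<epsilon> \<in> {0<..<\<delta>0} \<Longrightarrow> linear_on X (T \<epsilon>)"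
    and bnd: "\<And>\<epsilon>. \<epsilon> \<in> {0<..<\<delta>0} \<Longrightarrow> \<exists>K. \<forall>x\<in>X. norm (T \<epsilon> x) \<le> K * p x"
    and pw: "\<And>x. x \<in> X \<Longrightarrow> \<exists>\<delta>>0. \<exists>M. \<forall>\<epsilon>\<in>{0<..<\<delta>}. norm (T \<epsilon> x) \<le> M"
  shows "\<exists>\<delta> k \<rho>. 0 < \<delta> \<and> \<delta> \<le> \<delta>0 \<and> 0 \<le> k \<and> 0 < \<rho> \<and>
    (\<forall>\<epsilon>\<in>{0<..<\<delta>}. \<forall>y\<in>X. p y < \<rho> \<longrightarrow> norm (T \<epsilon> y) \<le> k)"
proof -
  interpret M: Metric_space X dist_on by (rule Metric_space_dist_on)
  define F where "F k = {x\<in>X. \<forall>\<epsilon>\<in>{0<..<min \<delta>0 (1 / (real k + 1))}. norm (T \<epsilon> x) \<le> real k}" for k :: nat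
  have cov: "\<exists>k. x \<in> F k" if x: "x \<in> X" for x
  proof -
    obtain \<delta> M where \<delta>M: "\<delta> > 0" "\<forall>\<epsilon>\<in>{0<..<\<delta>}. norm (T \<epsilon> x) \<le> M" using pw[OF x] by blast
    obtain k :: nat where k: "max M (1 / \<delta>) < real k" using reals_Archimedean2 by blast
    then have "1 / \<delta> < real k + 1" by simp
    then have "1 / (real k + 1) \<le> \<delta>" using \<delta>M(1) by (simp add: field_simps)
    then have "x \<in> F k" unfolding F_def using x \<delta>M(2) k by force
    then show ?thesis by blast
  qed
  obtain k x0 \<rho> where B: "\<rho> > 0" "x0 \<in> X"
    "\<And>y \<eta>. y \<in> X \<Longrightarrow> dist_on x0 y < \<rho> \<Longrightarrow> \<eta> > 0 \<Longrightarrow> \<exists>z\<in>F k \<inter> X. dist_on y z < \<eta>"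
    using M.mcomplete_cover_dense_in_ball[OF mcomplete_dist_on _ cov] zero_mem by blast
  define \<delta> where "\<delta> = min \<delta>0 (1 / (real k + 1))"
  have near_x0: "norm (T \<epsilon> y) \<le> real k" if e: "\<epsilon> \<in> {0<..<\<delta>}" and y: "y \<in> X" "dist_on x0 y < \<rho>" for \<epsilon> y
  proof -
    have e0: "\<epsilon> \<in> {0<..<\<delta>0}" using e unfolding \<delta>_def by auto
    obtain K where K: "\<forall>x\<in>X. norm (T \<epsilon> x) \<le> K * p x" using bnd[OF e0] by blast
    show ?thesis
    proof (rule field_le_epsilon_mult[where C = "\<bar>K\<bar>"])
      fix \<eta> :: real assume "\<eta> > 0"
      then obtain z where z: "z \<in> F k" "z \<in> X" "dist_on y z < \<eta>" using B(3)[OF y] by blast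
      have "norm (T \<epsilon> z) \<le> real k" using z(1) e unfolding F_def \<delta>_def by auto
      moreover have "norm (T \<epsilon> (y - z)) \<le> \<bar>K\<bar> * \<eta>"
      proof -
        have "norm (T \<epsilon> (y - z)) \<le> K * p (y - z)" using K diff_mem[OF y(1) z(2)] by blast
        also have "\<dots> \<le> \<bar>K\<bar> * p (y - z)"
          using p_nonneg[OF diff_mem[OF y(1) z(2)]] by (intro mult_right_mono) auto
        also have "\<dots> \<le> \<bar>K\<bar> * \<eta>" using z(3) y(1) z(2) unfolding dist_on_def by (intro mult_left_mono) auto
        finally show ?thesis .
      qed
      moreover have "T \<epsilon> y = T \<epsilon> z + T \<epsilon> (y - z)" using linear_on_diff[OF lin[OF e0] y(1) z(2)] by simp
      ultimately show "norm (T \<epsilon> y) \<le> real k + \<bar>K\<bar> * \<eta>"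
        by (metis add_mono norm_triangle_ineq order_trans)
    qed
  qed
  have near_0: "norm (T \<epsilon> y) \<le> 2 * real k" if e: "\<epsilon> \<in> {0<..<\<delta>}" and y: "y \<in> X" "p y < \<rho>" for \<epsilon> y
  proof -
    have "dist_on x0 (x0 + y) = p (- y)" "dist_on x0 x0 = 0"
      unfolding dist_on_def using add_mem[OF B(2) y(1)] B(2) by (simp_all add: p_zero)
    then have "dist_on x0 (x0 + y) < \<rho>" "dist_on x0 x0 < \<rho>" using p_minus[OF y(1)] y(2) B(1) by simp_all
    then have "norm (T \<epsilon> (x0 + y)) \<le> real k" "norm (T \<epsilon> x0) \<le> real k"
      using near_x0[OF e] add_mem[OF B(2) y(1)] B(2) by auto
    moreover have "T \<epsilon> y = T \<epsilon> (x0 + y) - T \<epsilon> x0"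
      using linear_on_add[OF lin B(2) y(1)] e unfolding \<delta>_def by simp
    ultimately show ?thesis using norm_triangle_ineq4[of "T \<epsilon> (x0 + y)" "T \<epsilon> x0"] by simp
  qed
  moreover have "\<delta> > 0" "\<delta> \<le> \<delta>0" "0 \<le> 2 * real k" unfolding \<delta>_def using \<delta>0 by auto
  ultimately show ?thesis using B(1) by blast
qed

lemma uniform_boundedness:
  fixes T :: "real \<Rightarrow> 'a \<Rightarrow> 'b::real_normed_vector"
  assumes \<delta>0: "\<delta>0 > 0"
    and lin: "\<And>\<epsilon>. \<epsilon> \<in> {0<..<\<delta>0} \<Longrightarrow> linear_on X (T \<epsilon>)"
    and bnd: "\<And>\<epsilon>. \<epsilon> \<in> {0<..<\<delta>0} \<Longrightarrow> \<exists>K. \<forall>x\<in>X. norm (T \<epsilon> x) \<le> K * p x"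
    and pw: "\<And>x. x \<in> X \<Longrightarrow> \<exists>\<delta>>0. \<exists>M. \<forall>\<epsilon>\<in>{0<..<\<delta>}. norm (T \<epsilon> x) \<le> M"
  shows "\<exists>\<delta>>0. \<exists>M\<ge>0. \<forall>\<epsilon>\<in>{0<..<\<delta>}. \<forall>x\<in>X. norm (T \<epsilon> x) \<le> M * p x"
proof -
  obtain \<delta> k \<rho> where \<delta>: "0 < \<delta>" "\<delta> \<le> \<delta>0" and k: "0 \<le> k" and \<rho>: "0 < \<rho>"
    and ball: "\<And>\<epsilon> y. \<epsilon> \<in> {0<..<\<delta>} \<Longrightarrow> y \<in> X \<Longrightarrow> p y < \<rho> \<Longrightarrow> norm (T \<epsilon> y) \<le> k"
    using uniformly_bounded_on_ball[OF \<delta>0 lin bnd pw] by blast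
  have "norm (T \<epsilon> x) \<le> (2 * k / \<rho>) * p x" if \<epsilon>: "\<epsilon> \<in> {0<..<\<delta>}" and x: "x \<in> X" for \<epsilon> x
  proof (rule linear_on_bound_from_ball[OF _ \<rho> _ x])
    show "linear_on X (T \<epsilon>)" using lin \<epsilon> \<delta>(2) by simp
    show "\<And>y. y \<in> X \<Longrightarrow> p y < \<rho> \<Longrightarrow> norm (T \<epsilon> y) \<le> k" using ball[OF \<epsilon>] by blast
  qed
  moreover have "2 * k / \<rho> \<ge> 0" using k \<rho> by simp
  ultimately show ?thesis using \<delta>(1) by blast
qed

lemma geometric_series_limit:
  assumes xs: "\<And>i. xs i \<in> X" and bnd: "\<And>i. p (xs i) \<le> C / 2 ^ i"
  shows "\<exists>x\<in>X. p x \<le> 2 * C \<and> (\<forall>e>0. \<exists>K. \<forall>k\<ge>K. p ((\<Sum>i<k. xs i) - x) < e)"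
proof -
  define s where "s n = (\<Sum>i<n. xs i)" for n
  have s_mem: "s n \<in> X" for n unfolding s_def by (rule sum_mem[OF xs])
  have C: "C \<ge> 0" using bnd[of 0] p_nonneg[OF xs] by (metis div_by_1 order_trans power_0)
  have tail: "p (s m - s n) \<le> 2 * C * (1 / 2 ^ n - 1 / 2 ^ m)" if "n \<le> m" for m n
    using that
  proof (induction m rule: dec_induct)
    case base then show ?case by (simp add: p_zero)
  next
    case (step m)
    have eq: "s (Suc m) - s n = (s m - s n) + xs m" unfolding s_def by (simp add: algebra_simps)
    have "p (s (Suc m) - s n) \<le> p (s m - s n) + p (xs m)"
      unfolding eq by (rule p_triangle[OF diff_mem[OF s_mem s_mem] xs])
    also have "\<dots> \<le> 2 * C * (1 / 2 ^ n - 1 / 2 ^ m) + C / 2 ^ m" using step.IH bnd[of m] by simp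
    also have "\<dots> = 2 * C * (1 / 2 ^ n - 1 / 2 ^ Suc m)" by (simp add: field_simps)
    finally show ?case .
  qed
  have tail': "p (s m - s n) \<le> 2 * C / 2 ^ n" if "n \<le> m" for m n
  proof -
    have "2 * C * (1 / 2 ^ n - 1 / 2 ^ m) \<le> 2 * C * (1 / 2 ^ n)" using C by (intro mult_left_mono) auto
    then show ?thesis using tail[OF that] by simp
  qed
  have small: "\<forall>\<^sub>F n in sequentially. 2 * C / 2 ^ n < e" if "e > 0" for e
    using order_tendstoD(2)[OF LIMSEQ_divide_realpow_zero[of 2 "2 * C"] that] by simp
  have "\<exists>K. \<forall>k\<ge>K. \<forall>l\<ge>K. p (s k - s l) < e" if e: "e > 0" for e
  proof -
    obtain K where K: "\<And>n. n \<ge> K \<Longrightarrow> 2 * C / 2 ^ n < e"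
      using small[OF e] unfolding eventually_sequentially by blast
    have "p (s k - s l) < e" if "k \<ge> K" "l \<ge> K" for k l
    proof (cases "l \<le> k")
      case True then show ?thesis using tail'[OF True] K[OF that(2)] by linarith
    next
      case False then show ?thesis
        using tail'[of k l] K[OF that(1)] p_minus_commute[OF s_mem s_mem, of k l] by simp
    qed
    then show ?thesis by blast
  qed
  then obtain x where x: "x \<in> X" "\<And>e. e > 0 \<Longrightarrow> \<exists>K. \<forall>k\<ge>K. p (s k - x) < e"
    using complete[of s, OF s_mem] by blast
  have "p x \<le> 2 * C + e" if e: "e > 0" for e
  proof -
    obtain K where "p (s K - x) < e" using x(2)[OF e] by blast
    moreover have "p x \<le> p (x - s K) + p (s K)" using p_triangle[OF diff_mem[OF x(1) s_mem[of K]] s_mem[of K]] by simp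
    moreover have "p (s K) \<le> 2 * C" using tail'[of 0 K] by (simp add: s_def)
    ultimately show ?thesis using p_minus_commute[OF x(1) s_mem, of K] by linarith
  qed
  then have "p x \<le> 2 * C" by (rule field_le_epsilon)
  then show ?thesis using x unfolding s_def by blast
qed

lemma dense_image_of_ball:
  fixes T :: "'a \<Rightarrow> 'b::real_vector"
  assumes Y: "banach_set Y q" and TY: "\<And>x. x \<in> X \<Longrightarrow> T x \<in> Y" and lin: "linear_on X T"
    and surj: "\<And>y. y \<in> Y \<Longrightarrow> \<exists>x\<in>X. T x = y"
  shows "\<exists>k \<rho>. 0 \<le> k \<and> 0 < \<rho> \<and> (\<forall>y\<in>Y. q y < \<rho> \<longrightarrow> (\<forall>\<eta>>0. \<exists>x\<in>X. p x \<le> k \<and> q (y - T x) < \<eta>))"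
proof -
  interpret Y: banach_set Y q by (rule Y)
  interpret M: Metric_space Y Y.dist_on by (rule Y.Metric_space_dist_on)
  define F where "F k = T ` {x\<in>X. p x \<le> real k}" for k :: nat
  have cov: "\<exists>k. y \<in> F k" if y: "y \<in> Y" for y
  proof -
    obtain x where x: "x \<in> X" "T x = y" using surj[OF y] by blast
    obtain k :: nat where "p x < real k" using reals_Archimedean2 by blast
    then have "y \<in> F k" unfolding F_def using x by (auto intro!: image_eqI[of y T x])
    then show ?thesis by blast
  qed
  obtain k y0 \<rho> where B: "\<rho> > 0" "y0 \<in> Y"
    "\<And>y \<eta>. y \<in> Y \<Longrightarrow> Y.dist_on y0 y < \<rho> \<Longrightarrow> \<eta> > 0 \<Longrightarrow> \<exists>z\<in>F k \<inter> Y. Y.dist_on y z < \<eta>"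
    using M.mcomplete_cover_dense_in_ball[OF Y.mcomplete_dist_on _ cov] Y.zero_mem by blast
  have near_y0: "\<exists>x\<in>X. p x \<le> real k \<and> q (y - T x) < \<eta>"
    if "y \<in> Y" "Y.dist_on y0 y < \<rho>" "\<eta> > 0" for y \<eta>
    using B(3)[OF that] that(1) unfolding F_def Y.dist_on_def by auto
  have near_0: "\<exists>x\<in>X. p x \<le> 2 * real k \<and> q (y - T x) < \<eta>"
    if y: "y \<in> Y" "q y < \<rho>" and \<eta>: "\<eta> > 0" for y \<eta>
  proof -
    have y0y: "y0 + y \<in> Y" using Y.add_mem[OF B(2) y(1)] .
    have "Y.dist_on y0 (y0 + y) < \<rho>" "Y.dist_on y0 y0 < \<rho>"
      unfolding Y.dist_on_def using y0y B Y.p_minus[OF y(1)] y(2) by (simp_all add: Y.p_zero)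
    then obtain x1 x2 where x1: "x1 \<in> X" "p x1 \<le> real k" "q (y0 + y - T x1) < \<eta> / 2"
      and x2: "x2 \<in> X" "p x2 \<le> real k" "q (y0 - T x2) < \<eta> / 2"
      using near_y0[OF y0y, of "\<eta> / 2"] near_y0[OF B(2), of "\<eta> / 2"] \<eta> by auto
    have a: "y0 + y - T x1 \<in> Y" and b: "y0 - T x2 \<in> Y" using Y.diff_mem y0y B(2) TY x1(1) x2(1) by auto
    have eq: "y - T (x1 - x2) = (y0 + y - T x1) + - (y0 - T x2)"
      using linear_on_diff[OF lin x1(1) x2(1)] by (simp add: algebra_simps)
    have "q (y - T (x1 - x2)) \<le> q (y0 + y - T x1) + q (- (y0 - T x2))"
      unfolding eq by (rule Y.p_triangle[OF a Y.uminus_mem[OF b]])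
    then have "q (y - T (x1 - x2)) < \<eta>" using Y.p_minus[OF b] x1(3) x2(3) by simp
    moreover have "p (x1 - x2) \<le> 2 * real k"
      using p_triangle[OF x1(1) uminus_mem[OF x2(1)]] p_minus[OF x2(1)] x1(2) x2(2) by simp
    ultimately show ?thesis using diff_mem[OF x1(1) x2(1)] by blast
  qed
  moreover have "0 \<le> 2 * real k" by simp
  ultimately show ?thesis using B(1) by blast
qed

lemma approximate_preimages:
  fixes T :: "'a \<Rightarrow> 'b::real_vector"
  assumes Y: "banach_set Y q" and TY: "\<And>x. x \<in> X \<Longrightarrow> T x \<in> Y" and lin: "linear_on X T"
    and surj: "\<And>y. y \<in> Y \<Longrightarrow> \<exists>x\<in>X. T x = y"
  shows "\<exists>\<beta>\<ge>0. \<forall>y\<in>Y. \<forall>\<eta>>0. \<exists>x\<in>X. p x \<le> \<beta> * q y \<and> q (y - T x) < \<eta>"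
proof -
  interpret Y: banach_set Y q by (rule Y)
  obtain k \<rho> where k: "0 \<le> k" and \<rho>: "0 < \<rho>"
    and near_0: "\<And>y \<eta>. y \<in> Y \<Longrightarrow> q y < \<rho> \<Longrightarrow> \<eta> > 0 \<Longrightarrow> \<exists>x\<in>X. p x \<le> k \<and> q (y - T x) < \<eta>"
    using dense_image_of_ball[OF Y TY lin surj] by blast
  define \<beta> where "\<beta> = 2 * k / \<rho>"
  have "\<exists>x\<in>X. p x \<le> \<beta> * q y \<and> q (y - T x) < \<eta>" if y: "y \<in> Y" and \<eta>: "\<eta> > 0" for y \<eta>
  proof (cases "q y = 0")
    case True
    then show ?thesis using Y.p_eq_0[OF y] linear_on_zero[OF lin] \<eta>
      by (intro bexI[of _ 0] zero_mem) (simp add: p_zero Y.p_zero)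
  next
    case False
    then have qy: "q y > 0" using Y.p_nonneg[OF y] by simp
    define s where "s = \<rho> / (2 * q y)"
    have s: "s > 0" unfolding s_def using qy \<rho> by simp
    have "q (s *\<^sub>R y) < \<rho>" using Y.p_scale[OF y, of s] s qy \<rho> unfolding s_def by simp
    then obtain x1 where x1: "x1 \<in> X" "p x1 \<le> k" "q (s *\<^sub>R y - T x1) < \<eta> * s"
      using near_0[OF Y.scale_mem[OF y]] \<eta> s by (meson mult_pos_pos)
    define x where "x = (1 / s) *\<^sub>R x1"
    have x: "x \<in> X" unfolding x_def using scale_mem[OF x1(1)] .
    have "p x \<le> k / s" unfolding x_def using p_scale[OF x1(1), of "1 / s"] x1(2) s
      by (simp add: divide_right_mono)
    also have "\<dots> = \<beta> * q y" unfolding s_def \<beta>_def using qy \<rho> by (simp add: field_simps)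
    finally have px: "p x \<le> \<beta> * q y" .
    have "y - T x = (1 / s) *\<^sub>R (s *\<^sub>R y - T x1)"
      unfolding x_def using linear_on_scaleR[OF lin x1(1), of "1 / s"] s by (simp add: algebra_simps)
    then have "q (y - T x) = q (s *\<^sub>R y - T x1) / s"
      using Y.p_scale[OF Y.diff_mem[OF Y.scale_mem[OF y] TY[OF x1(1)]], of "1 / s"] s by simp
    also have "\<dots> < \<eta>" using x1(3) s by (simp add: divide_less_eq)
    finally show ?thesis using x px by blast
  qed
  moreover have "\<beta> \<ge> 0" unfolding \<beta>_def using k \<rho> by simp
  ultimately show ?thesis by blast
qed

lemma approximation_series:
  fixes T :: "'a \<Rightarrow> 'b::real_vector"
  assumes Y: "banach_set Y q" and TY: "\<And>x. x \<in> X \<Longrightarrow> T x \<in> Y" and lin: "linear_on X T"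
    and \<beta>: "\<beta> \<ge> 0"
    and approx: "\<And>y \<eta>. y \<in> Y \<Longrightarrow> \<eta> > 0 \<Longrightarrow> \<exists>x\<in>X. p x \<le> \<beta> * q y \<and> q (y - T x) < \<eta>"
    and y: "y \<in> Y"
  obtains xs where "\<And>i. xs i \<in> X" "\<And>i. p (xs i) \<le> \<beta> * q y / 2 ^ i"
    "\<And>k. q (y - T (\<Sum>i<k. xs i)) \<le> q y / 2 ^ k"
proof (cases "q y = 0")
  case True
  interpret Y: banach_set Y q by (rule Y)
  show ?thesis using True Y.p_eq_0[OF y] linear_on_zero[OF lin]
    by (intro that[of "\<lambda>_. 0"]) (auto simp: zero_mem p_zero Y.p_zero)
next
  case False
  interpret Y: banach_set Y q by (rule Y)
  have qy: "q y > 0" using False Y.p_nonneg[OF y] by simp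
  have "\<forall>y \<eta>. \<exists>x. y \<in> Y \<longrightarrow> \<eta> > 0 \<longrightarrow> x \<in> X \<and> p x \<le> \<beta> * q y \<and> q (y - T x) < \<eta>"
    using approx by blast
  then obtain \<phi> where \<phi>: "\<And>y \<eta>. y \<in> Y \<Longrightarrow> \<eta> > 0 \<Longrightarrow> \<phi> y \<eta> \<in> X \<and> p (\<phi> y \<eta>) \<le> \<beta> * q y \<and> q (y - T (\<phi> y \<eta>)) < \<eta>"
    by metis
  define ys where "ys = rec_nat y (\<lambda>i yi. yi - T (\<phi> yi (q y / 2 ^ Suc i)))"
  define xs where "xs i = \<phi> (ys i) (q y / 2 ^ Suc i)" for i
  have ys_0: "ys 0 = y" and ys_Suc: "ys (Suc i) = ys i - T (xs i)" for i
    unfolding ys_def xs_def by simp_all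
  have ys_mem: "ys i \<in> Y" for i
  proof (induction i)
    case 0 then show ?case using y ys_0 by simp
  next
    case (Suc i)
    have "xs i \<in> X" using \<phi>[OF Suc, of "q y / 2 ^ Suc i"] qy unfolding xs_def by simp
    then show ?case unfolding ys_Suc using Y.diff_mem[OF Suc TY] by blast
  qed
  have xs: "xs i \<in> X" "p (xs i) \<le> \<beta> * q (ys i)" "q (ys (Suc i)) < q y / 2 ^ Suc i" for i
  proof -
    have "q y / 2 ^ Suc i > 0" using qy by simp
    from \<phi>[OF ys_mem[of i] this]
    show "xs i \<in> X" "p (xs i) \<le> \<beta> * q (ys i)" "q (ys (Suc i)) < q y / 2 ^ Suc i"
      unfolding ys_Suc xs_def by auto
  qed
  have q_ys: "q (ys i) \<le> q y / 2 ^ i" for i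
    using xs(3) ys_0 by (cases i) (auto simp: less_imp_le)
  have "ys k = y - T (\<Sum>i<k. xs i)" for k
  proof (induction k)
    case 0 then show ?case using linear_on_zero[OF lin] ys_0 by simp
  next
    case (Suc k)
    have "T (\<Sum>i<Suc k. xs i) = T (\<Sum>i<k. xs i) + T (xs k)"
      using linear_on_add[OF lin sum_mem[of "{..<k}" xs] xs(1)] xs(1) by simp
    then show ?case using Suc ys_Suc by simp
  qed
  moreover have "p (xs i) \<le> \<beta> * q y / 2 ^ i" for i
    using xs(2)[of i] mult_left_mono[OF q_ys \<beta>, of i] by simp
  ultimately show ?thesis using that xs(1) q_ys by metis
qed

lemma exact_preimages:
  fixes T :: "'a \<Rightarrow> 'b::real_vector"
  assumes Y: "banach_set Y q" and TY: "\<And>x. x \<in> X \<Longrightarrow> T x \<in> Y" and lin: "linear_on X T"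
    and bnd: "\<And>x. x \<in> X \<Longrightarrow> q (T x) \<le> K * p x" and \<beta>: "\<beta> \<ge> 0"
    and approx: "\<And>y \<eta>. y \<in> Y \<Longrightarrow> \<eta> > 0 \<Longrightarrow> \<exists>x\<in>X. p x \<le> \<beta> * q y \<and> q (y - T x) < \<eta>"
    and y: "y \<in> Y"
  shows "\<exists>x\<in>X. T x = y \<and> p x \<le> 2 * \<beta> * q y"
proof -
  interpret Y: banach_set Y q by (rule Y)
  obtain xs where xs: "\<And>i. xs i \<in> X" "\<And>i. p (xs i) \<le> \<beta> * q y / 2 ^ i"
    and rest: "\<And>k. q (y - T (\<Sum>i<k. xs i)) \<le> q y / 2 ^ k"
    using approximation_series[OF Y TY lin \<beta> approx y] by blast
  obtain x where x: "x \<in> X" "p x \<le> 2 * (\<beta> * q y)"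
    and lim: "\<And>e. e > 0 \<Longrightarrow> \<exists>k. \<forall>j\<ge>k. p ((\<Sum>i<j. xs i) - x) < e"
    using geometric_series_limit[of xs] xs by blast
  have "q (T x - y) \<le> 0"
  proof (rule field_le_epsilon_mult[where C = "\<bar>K\<bar> + 1"])
    fix e :: real assume e: "e > 0"
    obtain k1 where k1: "\<forall>j\<ge>k1. p ((\<Sum>i<j. xs i) - x) < e" using lim[OF e] by blast
    obtain k2 where k2: "\<forall>j\<ge>k2. q y / 2 ^ j < e"
      using order_tendstoD(2)[OF LIMSEQ_divide_realpow_zero[of 2 "q y"] e] by (auto simp: eventually_sequentially)
    define k where "k = max k1 k2"
    define s where "s = (\<Sum>i<k. xs i)"
    have s: "s \<in> X" unfolding s_def by (rule sum_mem[OF xs(1)])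
    have xs_mem: "x - s \<in> X" using diff_mem[OF x(1) s] .
    have ys_mem: "y - T s \<in> Y" using Y.diff_mem[OF y TY[OF s]] .
    have eq: "T (x - s) + - (y - T s) = T x - y"
      using linear_on_diff[OF lin x(1) s] by (simp add: algebra_simps)
    have "q (T x - y) = q (T (x - s) + - (y - T s))" by (simp only: eq)
    also have "\<dots> \<le> q (T (x - s)) + q (- (y - T s))"
      by (rule Y.p_triangle[OF TY[OF xs_mem] Y.uminus_mem[OF ys_mem]])
    also have "q (- (y - T s)) = q (y - T s)" by (rule Y.p_minus[OF ys_mem])
    also have "q (T (x - s)) \<le> \<bar>K\<bar> * e"
    proof -
      have "p (x - s) < e" using k1 p_minus_commute[OF x(1) s] unfolding k_def s_def by auto
      have "q (T (x - s)) \<le> K * p (x - s)" by (rule bnd[OF xs_mem])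
      also have "\<dots> \<le> \<bar>K\<bar> * p (x - s)" using p_nonneg[OF xs_mem] by (intro mult_right_mono) auto
      also have "\<dots> \<le> \<bar>K\<bar> * e" using \<open>p (x - s) < e\<close> by (intro mult_left_mono) auto
      finally show ?thesis .
    qed
    also have "q (y - T s) < e"
      using rest[of k] k2 unfolding k_def s_def by (meson max.cobounded2 order_le_less_trans)
    finally show "q (T x - y) \<le> 0 + (\<bar>K\<bar> + 1) * e" by (simp add: algebra_simps)
  qed
  then have "q (T x - y) = 0" using Y.p_nonneg[OF Y.diff_mem[OF TY[OF x(1)] y]] by linarith
  then have "T x = y" using Y.p_eq_0[OF Y.diff_mem[OF TY[OF x(1)] y]] by simp
  then show ?thesis using x by auto
qed

lemma bounded_inverse:
  fixes T :: "'a \<Rightarrow> 'b::real_vector"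
  assumes Y: "banach_set Y q" and TY: "\<And>x. x \<in> X \<Longrightarrow> T x \<in> Y" and lin: "linear_on X T"
    and bnd: "\<And>x. x \<in> X \<Longrightarrow> q (T x) \<le> K * p x"
    and surj: "\<And>y. y \<in> Y \<Longrightarrow> \<exists>x\<in>X. T x = y"
    and inj: "\<And>x. x \<in> X \<Longrightarrow> T x = 0 \<Longrightarrow> x = 0"
  shows "\<exists>C\<ge>0. \<forall>x\<in>X. p x \<le> C * q (T x)"
proof -
  obtain \<beta> where \<beta>: "\<beta> \<ge> 0" "\<And>y \<eta>. y \<in> Y \<Longrightarrow> \<eta> > 0 \<Longrightarrow> \<exists>x\<in>X. p x \<le> \<beta> * q y \<and> q (y - T x) < \<eta>"
    using approximate_preimages[OF Y TY lin surj] by blast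
  have "p x \<le> 2 * \<beta> * q (T x)" if x: "x \<in> X" for x
  proof -
    obtain x' where x': "x' \<in> X" "T x' = T x" "p x' \<le> 2 * \<beta> * q (T x)"
      using exact_preimages[OF Y TY lin bnd \<beta> TY[OF x]] by blast
    have "T (x - x') = 0" using linear_on_diff[OF lin x x'(1)] x'(2) by simp
    then have "x - x' = 0" by (rule inj[OF diff_mem[OF x x'(1)]])
    then show ?thesis using x'(3) by simp
  qed
  then show ?thesis using \<beta>(1) by (intro exI[of _ "2 * \<beta>"]) auto
qed

end

lemma banach_set_Times:
  assumes "banach_set X p"
  shows "banach_set (X \<times> (UNIV :: 'b::banach set)) (\<lambda>z. p (fst z) + norm (snd z))"
proof -
  interpret banach_set X p by (rule assms)
  show ?thesis
  proof
    show "0 \<in> X \<times> (UNIV :: 'b set)" using zero_mem by (simp add: zero_prod_def)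
  next
    fix x y :: "'a \<times> 'b" assume x: "x \<in> X \<times> UNIV" and y: "y \<in> X \<times> UNIV"
    show "x + y \<in> X \<times> UNIV" using add_mem x y by (cases x, cases y) auto
    show "p (fst (x + y)) + norm (snd (x + y)) \<le> p (fst x) + norm (snd x) + (p (fst y) + norm (snd y))"
      using p_triangle[of "fst x" "fst y"] norm_triangle_ineq[of "snd x" "snd y"] x y by auto
  next
    fix x :: "'a \<times> 'b" and c :: real assume x: "x \<in> X \<times> UNIV"
    show "c *\<^sub>R x \<in> X \<times> UNIV" using scale_mem x by (cases x) auto
    show "p (fst (c *\<^sub>R x)) + norm (snd (c *\<^sub>R x)) = \<bar>c\<bar> * (p (fst x) + norm (snd x))"
      using p_scale x by (auto simp: distrib_left)
  next
    fix x :: "'a \<times> 'b" assume x: "x \<in> X \<times> UNIV" and z: "p (fst x) + norm (snd x) = 0"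
    have fx: "fst x \<in> X" using x by auto
    have "p (fst x) = 0" "norm (snd x) = 0" using z p_nonneg[OF fx] norm_ge_zero[of "snd x"] by linarith+
    then show "x = 0" using p_eq_0[OF fx] by (simp add: prod_eq_iff)
  next
    fix \<sigma> :: "nat \<Rightarrow> 'a \<times> 'b"
    assume s: "\<And>k. \<sigma> k \<in> X \<times> UNIV"
      and C: "\<And>e. e > 0 \<Longrightarrow> \<exists>K. \<forall>k\<ge>K. \<forall>l\<ge>K. p (fst (\<sigma> k - \<sigma> l)) + norm (snd (\<sigma> k - \<sigma> l)) < e"
    have sX: "fst (\<sigma> k) \<in> X" for k using s[of k] by auto
    have Cfst: "\<exists>K. \<forall>k\<ge>K. \<forall>l\<ge>K. p (fst (\<sigma> k) - fst (\<sigma> l)) < e"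
      and Csnd: "\<exists>K. \<forall>k\<ge>K. \<forall>l\<ge>K. norm (snd (\<sigma> k) - snd (\<sigma> l)) < e" if e: "e > 0" for e
    proof -
      obtain K where K: "\<forall>k\<ge>K. \<forall>l\<ge>K. p (fst (\<sigma> k - \<sigma> l)) + norm (snd (\<sigma> k - \<sigma> l)) < e"
        using C[OF e] by blast
      have "p (fst (\<sigma> k) - fst (\<sigma> l)) < e \<and> norm (snd (\<sigma> k) - snd (\<sigma> l)) < e" if "k \<ge> K" "l \<ge> K" for k l
      proof -
        have "p (fst (\<sigma> k) - fst (\<sigma> l)) + norm (snd (\<sigma> k) - snd (\<sigma> l)) < e" using K that by simp
        then show ?thesis using p_nonneg[OF diff_mem[OF sX sX], of k l] norm_ge_zero[of "snd (\<sigma> k) - snd (\<sigma> l)"]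
          by linarith
      qed
      then show "\<exists>K. \<forall>k\<ge>K. \<forall>l\<ge>K. p (fst (\<sigma> k) - fst (\<sigma> l)) < e"
        "\<exists>K. \<forall>k\<ge>K. \<forall>l\<ge>K. norm (snd (\<sigma> k) - snd (\<sigma> l)) < e" by blast+
    qed
    obtain x where x: "x \<in> X" "\<And>e. e > 0 \<Longrightarrow> \<exists>K. \<forall>k\<ge>K. p (fst (\<sigma> k) - x) < e"
      using complete[of "\<lambda>k. fst (\<sigma> k)", OF sX Cfst] by blast
    have "Cauchy (\<lambda>k. snd (\<sigma> k))" unfolding Cauchy_iff using Csnd by blast
    then obtain c where c: "(\<lambda>k. snd (\<sigma> k)) \<longlonglongrightarrow> c" using Cauchy_convergent_iff convergent_def by blast
    have "\<exists>K. \<forall>k\<ge>K. p (fst (\<sigma> k - (x, c))) + norm (snd (\<sigma> k - (x, c))) < e" if e: "e > 0" for e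
    proof -
      obtain K1 where K1: "\<forall>k\<ge>K1. p (fst (\<sigma> k) - x) < e / 2" using x(2)[of "e/2"] e by auto
      obtain K2 where K2: "\<forall>k\<ge>K2. norm (snd (\<sigma> k) - c) < e / 2"
        using c e unfolding LIMSEQ_iff by (meson half_gt_zero)
      have "p (fst (\<sigma> k - (x, c))) + norm (snd (\<sigma> k - (x, c))) < e" if "k \<ge> max K1 K2" for k
        using K1 K2 that by fastforce
      then show ?thesis by blast
    qed
    then show "\<exists>x\<in>X \<times> UNIV. \<forall>e>0. \<exists>K. \<forall>k\<ge>K. p (fst (\<sigma> k - x)) + norm (snd (\<sigma> k - x)) < e"
      using x(1) by blast
  qed
qed




section \<open>Perturbations of a bijective pair of bounded operators\<close>

locale perturbed_operator_pair =
  X: banach_set X p + Y: banach_set Y q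
  for X :: "'a::real_vector set" and p :: "'a \<Rightarrow> real"
    and Y :: "'b::real_vector set" and q :: "'b \<Rightarrow> real" +
  fixes L :: "real \<Rightarrow> 'a \<Rightarrow> 'b" and B :: "real \<Rightarrow> 'a \<Rightarrow> 'c::euclidean_space" and \<epsilon>0 :: real
  assumes eps0_pos: "0 < \<epsilon>0"
    and L_mem: "\<And>\<epsilon> x. \<epsilon> \<in> {0..<\<epsilon>0} \<Longrightarrow> x \<in> X \<Longrightarrow> L \<epsilon> x \<in> Y"
    and L0_linear: "linear_on X (L 0)"
    and L0_bounded: "\<exists>K. \<forall>x\<in>X. q (L 0 x) \<le> K * p x"
    and L_tendsto: "\<exists>\<eta>. (\<eta> \<longlongrightarrow> 0) (at_right 0) \<and> (\<forall>\<epsilon>\<in>{0<..<\<epsilon>0}. \<forall>x\<in>X. q (L \<epsilon> x - L 0 x) \<le> \<eta> \<epsilon> * p x)"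
    and B_linear: "\<And>\<epsilon>. \<epsilon> \<in> {0..<\<epsilon>0} \<Longrightarrow> linear_on X (B \<epsilon>)"
    and B_bounded: "\<And>\<epsilon>. \<epsilon> \<in> {0..<\<epsilon>0} \<Longrightarrow> \<exists>K. \<forall>x\<in>X. norm (B \<epsilon> x) \<le> K * p x"
    and B_tendsto: "\<And>x. x \<in> X \<Longrightarrow> ((\<lambda>\<epsilon>. B \<epsilon> x) \<longlongrightarrow> B 0 x) (at_right 0)"
    and solvable_0: "\<And>y c. y \<in> Y \<Longrightarrow> \<exists>x\<in>X. L 0 x = y \<and> B 0 x = c"
    and unique_0: "\<And>x. x \<in> X \<Longrightarrow> L 0 x = 0 \<Longrightarrow> B 0 x = 0 \<Longrightarrow> x = 0"
begin

lemma zero_in_eps_range: "0 \<in> {0..<\<epsilon>0}"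
  using eps0_pos by simp

lemma inverse_bound_0:
  obtains C where "C \<ge> 0" "\<And>x. x \<in> X \<Longrightarrow> p x \<le> C * (q (L 0 x) + norm (B 0 x))"
proof -
  obtain K1 where K1: "\<forall>x\<in>X. q (L 0 x) \<le> K1 * p x" using L0_bounded by blast
  obtain K2 where K2: "\<forall>x\<in>X. norm (B 0 x) \<le> K2 * p x" using B_bounded[OF zero_in_eps_range] by blast
  have "\<exists>C\<ge>0. \<forall>x\<in>X. p x \<le> C * (q (fst (L 0 x, B 0 x)) + norm (snd (L 0 x, B 0 x)))"
  proof (rule X.bounded_inverse[where T = "\<lambda>x. (L 0 x, B 0 x)" and K = "K1 + K2"
        and Y = "Y \<times> UNIV" and q = "\<lambda>z. q (fst z) + norm (snd z)"])
    show "banach_set (Y \<times> (UNIV :: 'c set)) (\<lambda>z. q (fst z) + norm (snd z))"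
      by (rule banach_set_Times[OF Y.banach_set_axioms])
    show "linear_on X (\<lambda>x. (L 0 x, B 0 x))"
      by (rule linear_on_Pair[OF L0_linear B_linear[OF zero_in_eps_range]])
    fix x assume x: "x \<in> X"
    show "(L 0 x, B 0 x) \<in> Y \<times> UNIV" using L_mem[OF zero_in_eps_range x] by simp
    show "q (fst (L 0 x, B 0 x)) + norm (snd (L 0 x, B 0 x)) \<le> (K1 + K2) * p x"
      using K1 K2 x by (simp add: distrib_right add_mono)
    show "(L 0 x, B 0 x) = 0 \<Longrightarrow> x = 0" using unique_0[OF x] by (simp add: zero_prod_def)
  next
    fix z :: "'b \<times> 'c" assume "z \<in> Y \<times> UNIV"
    then show "\<exists>x\<in>X. (L 0 x, B 0 x) = z" using solvable_0[of "fst z" "snd z"] by auto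
  qed
  then show ?thesis using that by auto
qed

lemma B_uniformly_bounded:
  obtains \<delta> M where "\<delta> > 0" "M \<ge> 0" "\<And>\<epsilon> x. \<epsilon> \<in> {0<..<\<delta>} \<Longrightarrow> x \<in> X \<Longrightarrow> norm (B \<epsilon> x) \<le> M * p x"
proof -
  have "\<exists>\<delta>>0. \<exists>M. \<forall>\<epsilon>\<in>{0<..<\<delta>}. norm (B \<epsilon> x) \<le> M" if x: "x \<in> X" for x
  proof -
    have "\<forall>\<^sub>F \<epsilon> in at_right 0. dist (B \<epsilon> x) (B 0 x) < 1" using tendstoD[OF B_tendsto[OF x]] by simp
    then obtain d where d: "d > 0" "\<And>\<epsilon>. 0 < \<epsilon> \<Longrightarrow> \<epsilon> < d \<Longrightarrow> dist (B \<epsilon> x) (B 0 x) < 1"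
      unfolding eventually_at_right_field by auto
    have "norm (B \<epsilon> x) \<le> norm (B 0 x) + 1" if "\<epsilon> \<in> {0<..<d}" for \<epsilon>
      using d(2)[of \<epsilon>] that norm_triangle_ineq2[of "B \<epsilon> x" "B 0 x"] unfolding dist_norm by simp
    then show ?thesis using d(1) by blast
  qed
  moreover have "\<And>\<epsilon>. \<epsilon> \<in> {0<..<\<epsilon>0} \<Longrightarrow> linear_on X (B \<epsilon>)"
    and "\<And>\<epsilon>. \<epsilon> \<in> {0<..<\<epsilon>0} \<Longrightarrow> \<exists>K. \<forall>x\<in>X. norm (B \<epsilon> x) \<le> K * p x"
    using B_linear B_bounded by auto
  ultimately have "\<exists>\<delta>>0. \<exists>M\<ge>0. \<forall>\<epsilon>\<in>{0<..<\<delta>}. \<forall>x\<in>X. norm (B \<epsilon> x) \<le> M * p x"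
    by (intro X.uniform_boundedness[OF eps0_pos])
  then show ?thesis using that by blast
qed

text \<open>The kernel of \<open>L 0\<close> is finite dimensional, spanned by solutions with unit boundary data,
  so pointwise convergence of \<open>B \<epsilon>\<close> is uniform on it.\<close>

lemma B_tendsto_on_kernel:
  obtains \<beta> where "(\<beta> \<longlongrightarrow> 0) (at_right 0)"
    "\<And>\<epsilon> v. \<epsilon> \<in> {0..<\<epsilon>0} \<Longrightarrow> v \<in> X \<Longrightarrow> L 0 v = 0 \<Longrightarrow> norm (B \<epsilon> v - B 0 v) \<le> \<beta> \<epsilon> * norm (B 0 v)"
proof -
  have "\<forall>b. \<exists>g. g \<in> X \<and> L 0 g = 0 \<and> B 0 g = b" using solvable_0[OF Y.zero_mem] by blast
  then obtain g where g: "\<And>b. g b \<in> X" "\<And>b. L 0 (g b) = 0" "\<And>b. B 0 (g b) = b" by metis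
  define \<beta> where "\<beta> \<epsilon> = (\<Sum>b\<in>Basis. norm (B \<epsilon> (g b) - B 0 (g b)))" for \<epsilon>
  have "((\<lambda>\<epsilon>. norm (B \<epsilon> (g b) - B 0 (g b))) \<longlongrightarrow> 0) (at_right 0)" for b
    using B_tendsto[OF g(1)] by (intro tendsto_norm_zero LIM_zero)
  then have "(\<beta> \<longlongrightarrow> 0) (at_right 0)"
    unfolding \<beta>_def by (intro tendsto_null_sum)
  moreover have "norm (B \<epsilon> v - B 0 v) \<le> \<beta> \<epsilon> * norm (B 0 v)"
    if \<epsilon>: "\<epsilon> \<in> {0..<\<epsilon>0}" and v: "v \<in> X" and Lv: "L 0 v = 0" for \<epsilon> v
  proof -
    define c where "c = B 0 v"
    define w where "w = (\<Sum>b\<in>Basis. (c \<bullet> b) *\<^sub>R g b)"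
    have gs: "(c \<bullet> b) *\<^sub>R g b \<in> X" for b using X.scale_mem[OF g(1)] .
    have w: "w \<in> X" unfolding w_def by (rule X.sum_mem[OF gs])
    have Bw: "B \<epsilon>' w = (\<Sum>b\<in>Basis. (c \<bullet> b) *\<^sub>R B \<epsilon>' (g b))" if "\<epsilon>' \<in> {0..<\<epsilon>0}" for \<epsilon>'
      unfolding w_def X.linear_on_sum[OF B_linear[OF that] gs]
      using linear_on_scaleR[OF B_linear[OF that] g(1)] by simp
    have "L 0 w = 0"
      unfolding w_def X.linear_on_sum[OF L0_linear gs] using linear_on_scaleR[OF L0_linear g(1)] g(2) by simp
    moreover have "B 0 w = c" using Bw[OF zero_in_eps_range] g(3) by (simp add: euclidean_representation)
    ultimately have "L 0 (v - w) = 0" "B 0 (v - w) = 0"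
      using X.linear_on_diff[OF L0_linear v w] X.linear_on_diff[OF B_linear[OF zero_in_eps_range] v w] Lv c_def
      by simp_all
    then have "v - w = 0" by (rule unique_0[OF X.diff_mem[OF v w]])
    then have "v = w" by simp
    then have "B \<epsilon> v - B 0 v = (\<Sum>b\<in>Basis. (c \<bullet> b) *\<^sub>R (B \<epsilon> (g b) - B 0 (g b)))"
      using Bw[OF \<epsilon>] Bw[OF zero_in_eps_range] by (simp add: scaleR_diff_right sum_subtractf)
    also have "norm \<dots> \<le> (\<Sum>b\<in>Basis. \<bar>c \<bullet> b\<bar> * norm (B \<epsilon> (g b) - B 0 (g b)))"
      using norm_sum[of "\<lambda>b. (c \<bullet> b) *\<^sub>R (B \<epsilon> (g b) - B 0 (g b))" Basis] by simp
    also have "\<dots> \<le> (\<Sum>b\<in>Basis. norm c * norm (B \<epsilon> (g b) - B 0 (g b)))"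
      by (intro sum_mono mult_right_mono Basis_le_norm) auto
    also have "\<dots> = \<beta> \<epsilon> * norm (B 0 v)" unfolding \<beta>_def c_def by (simp add: sum_distrib_left mult.commute)
    finally show ?thesis .
  qed
  ultimately show ?thesis by (rule that)
qed

lemma lower_estimate:
  obtains \<delta> \<kappa> where "\<delta> > 0" "\<kappa> > 0"
    "\<And>\<epsilon> x. \<epsilon> \<in> {0<..<\<delta>} \<Longrightarrow> x \<in> X \<Longrightarrow> q (L \<epsilon> x) + norm (B \<epsilon> x) \<le> \<kappa> * p x"
proof -
  obtain K where K: "\<forall>x\<in>X. q (L 0 x) \<le> K * p x" using L0_bounded by blast
  obtain \<eta> where \<eta>: "(\<eta> \<longlongrightarrow> 0) (at_right 0)" "\<forall>\<epsilon>\<in>{0<..<\<epsilon>0}. \<forall>x\<in>X. q (L \<epsilon> x - L 0 x) \<le> \<eta> \<epsilon> * p x"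
    using L_tendsto by blast
  obtain \<delta>1 M where \<delta>1: "\<delta>1 > 0" "M \<ge> 0" "\<And>\<epsilon> x. \<epsilon> \<in> {0<..<\<delta>1} \<Longrightarrow> x \<in> X \<Longrightarrow> norm (B \<epsilon> x) \<le> M * p x"
    using B_uniformly_bounded by blast
  obtain \<delta>2 where \<delta>2: "\<delta>2 > 0" "\<And>\<epsilon>. 0 < \<epsilon> \<Longrightarrow> \<epsilon> < \<delta>2 \<Longrightarrow> \<eta> \<epsilon> < 1"
    using order_tendstoD(2)[OF \<eta>(1), of 1] unfolding eventually_at_right_field by auto
  define \<delta> where "\<delta> = min \<epsilon>0 (min \<delta>1 \<delta>2)"
  have "q (L \<epsilon> x) + norm (B \<epsilon> x) \<le> (\<bar>K\<bar> + 1 + M) * p x" if \<epsilon>: "\<epsilon> \<in> {0<..<\<delta>}" and x: "x \<in> X" for \<epsilon> x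
  proof -
    have \<epsilon>0: "\<epsilon> \<in> {0..<\<epsilon>0}" and "\<epsilon> \<in> {0<..<\<delta>1}" and \<eta>1: "\<eta> \<epsilon> < 1"
      using \<epsilon> \<delta>2(2)[of \<epsilon>] unfolding \<delta>_def by auto
    have px: "0 \<le> p x" using X.p_nonneg[OF x] .
    have Lx: "L 0 x \<in> Y" "L \<epsilon> x - L 0 x \<in> Y"
      using L_mem[OF zero_in_eps_range x] Y.diff_mem[OF L_mem[OF \<epsilon>0 x] L_mem[OF zero_in_eps_range x]] by auto
    have "q (L \<epsilon> x) = q (L 0 x + (L \<epsilon> x - L 0 x))" by simp
    also have "\<dots> \<le> q (L 0 x) + q (L \<epsilon> x - L 0 x)" by (rule Y.p_triangle[OF Lx])
    also have "q (L 0 x) \<le> \<bar>K\<bar> * p x"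
      using K x mult_right_mono[OF abs_ge_self px, of K] by (meson order_trans)
    also have "q (L \<epsilon> x - L 0 x) \<le> 1 * p x"
    proof -
      have "\<epsilon> \<in> {0<..<\<epsilon>0}" using \<epsilon> unfolding \<delta>_def by auto
      then have "q (L \<epsilon> x - L 0 x) \<le> \<eta> \<epsilon> * p x" using \<eta>(2) x by blast
      also have "\<dots> \<le> 1 * p x" by (rule mult_right_mono[OF less_imp_le[OF \<eta>1] px])
      finally show ?thesis .
    qed
    finally show ?thesis using \<delta>1(3)[OF \<open>\<epsilon> \<in> {0<..<\<delta>1}\<close> x] by (simp add: algebra_simps)
  qed
  moreover have "\<delta> > 0" "\<bar>K\<bar> + 1 + M > 0" unfolding \<delta>_def using eps0_pos \<delta>1 \<delta>2 by auto
  ultimately show ?thesis by (intro that[of \<delta> "\<bar>K\<bar> + 1 + M"])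
qed

lemma boundary_data_bound:
  assumes \<epsilon>: "\<epsilon> \<in> {0..<\<epsilon>0}" and x: "x \<in> X" and M: "M \<ge> 0"
    and C: "\<And>u. u \<in> X \<Longrightarrow> B 0 u = 0 \<Longrightarrow> p u \<le> C * q (L 0 u)"
    and B\<epsilon>: "\<And>u. u \<in> X \<Longrightarrow> norm (B \<epsilon> u) \<le> M * p u"
    and kernel: "\<And>v. v \<in> X \<Longrightarrow> L 0 v = 0 \<Longrightarrow> norm (B \<epsilon> v - B 0 v) \<le> 1/2 * norm (B 0 v)"
  shows "norm (B 0 x) \<le> 2 * norm (B \<epsilon> x) + 2 * M * C * q (L 0 x)"
proof -
  obtain u where u: "u \<in> X" "L 0 u = L 0 x" "B 0 u = 0"
    using solvable_0[OF L_mem[OF zero_in_eps_range x]] by blast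
  define v where "v = x - u"
  have v: "v \<in> X" "L 0 v = 0" "B 0 v = B 0 x"
    unfolding v_def using X.diff_mem[OF x u(1)] X.linear_on_diff[OF L0_linear x u(1)]
      X.linear_on_diff[OF B_linear[OF zero_in_eps_range] x u(1)] u by auto
  have Bu: "norm (B \<epsilon> u) \<le> M * (C * q (L 0 x))"
    using B\<epsilon>[OF u(1)] mult_left_mono[OF C[OF u(1,3)] M] u(2) by simp
  have Bv: "norm (B \<epsilon> v - B 0 v) \<le> 1/2 * norm (B 0 x)" using kernel[OF v(1,2)] v(3) by simp
  have "B \<epsilon> x = B \<epsilon> u + B \<epsilon> v"
    using linear_on_add[OF B_linear[OF \<epsilon>] u(1) v(1)] unfolding v_def by simp
  then have "B 0 x = B \<epsilon> x - (B \<epsilon> u + (B \<epsilon> v - B 0 v))" using v(3) by simp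
  then have "norm (B 0 x) \<le> norm (B \<epsilon> x) + norm (B \<epsilon> u + (B \<epsilon> v - B 0 v))"
    using norm_triangle_ineq4 by metis
  also have "\<dots> \<le> norm (B \<epsilon> x) + (norm (B \<epsilon> u) + norm (B \<epsilon> v - B 0 v))"
    using norm_triangle_ineq by (rule add_left_mono)
  finally show ?thesis using Bu Bv by (simp add: algebra_simps)
qed

lemma upper_estimate:
  obtains \<delta> \<kappa> where "\<delta> > 0" "\<kappa> > 0"
    "\<And>\<epsilon> x. \<epsilon> \<in> {0<..<\<delta>} \<Longrightarrow> x \<in> X \<Longrightarrow> p x \<le> \<kappa> * (q (L \<epsilon> x) + norm (B \<epsilon> x))"
proof -
  obtain C where C: "C \<ge> 0" "\<And>x. x \<in> X \<Longrightarrow> p x \<le> C * (q (L 0 x) + norm (B 0 x))"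
    using inverse_bound_0 by blast
  obtain \<delta>1 M where \<delta>1: "\<delta>1 > 0" "M \<ge> 0" "\<And>\<epsilon> x. \<epsilon> \<in> {0<..<\<delta>1} \<Longrightarrow> x \<in> X \<Longrightarrow> norm (B \<epsilon> x) \<le> M * p x"
    using B_uniformly_bounded by blast
  obtain \<beta> where \<beta>: "(\<beta> \<longlongrightarrow> 0) (at_right 0)"
    "\<And>\<epsilon> v. \<epsilon> \<in> {0..<\<epsilon>0} \<Longrightarrow> v \<in> X \<Longrightarrow> L 0 v = 0 \<Longrightarrow> norm (B \<epsilon> v - B 0 v) \<le> \<beta> \<epsilon> * norm (B 0 v)"
    using B_tendsto_on_kernel by blast
  obtain \<eta> where \<eta>: "(\<eta> \<longlongrightarrow> 0) (at_right 0)" "\<forall>\<epsilon>\<in>{0<..<\<epsilon>0}. \<forall>x\<in>X. q (L \<epsilon> x - L 0 x) \<le> \<eta> \<epsilon> * p x"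
    using L_tendsto by blast
  define D where "D = C * (1 + 2 * M * C)"
  have D: "D \<ge> 0" unfolding D_def using C(1) \<delta>1(2) by simp
  have "\<forall>\<^sub>F \<epsilon> in at_right 0. \<beta> \<epsilon> < 1/2 \<and> D * \<eta> \<epsilon> < 1/2"
    unfolding eventually_conj_iff
    using order_tendstoD(2)[OF \<beta>(1), of "1/2"] order_tendstoD(2)[OF tendsto_mult_right_zero[OF \<eta>(1)], of "1/2"]
    by simp
  then obtain \<delta>2 where \<delta>2: "\<delta>2 > 0" "\<And>\<epsilon>. 0 < \<epsilon> \<Longrightarrow> \<epsilon> < \<delta>2 \<Longrightarrow> \<beta> \<epsilon> < 1/2 \<and> D * \<eta> \<epsilon> < 1/2"
    unfolding eventually_at_right_field by auto
  define \<delta> where "\<delta> = min \<epsilon>0 (min \<delta>1 \<delta>2)"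
  have "p x \<le> (2 * D + 4 * C + 1) * (q (L \<epsilon> x) + norm (B \<epsilon> x))"
    if \<epsilon>: "\<epsilon> \<in> {0<..<\<delta>}" and x: "x \<in> X" for \<epsilon> x
  proof -
    have \<epsilon>0: "\<epsilon> \<in> {0..<\<epsilon>0}" "\<epsilon> \<in> {0<..<\<epsilon>0}" and \<epsilon>1: "\<epsilon> \<in> {0<..<\<delta>1}"
      and \<beta>\<epsilon>: "\<beta> \<epsilon> < 1/2" and D\<eta>: "D * \<eta> \<epsilon> < 1/2"
      using \<epsilon> \<delta>2(2)[of \<epsilon>] unfolding \<delta>_def by auto
    have kernel: "norm (B \<epsilon> v - B 0 v) \<le> 1/2 * norm (B 0 v)" if "v \<in> X" "L 0 v = 0" for v
      using \<beta>(2)[OF \<epsilon>0(1) that] mult_right_mono[OF less_imp_le[OF \<beta>\<epsilon>] norm_ge_zero[of "B 0 v"]]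
      by linarith
    have "p u \<le> C * q (L 0 u)" if "u \<in> X" "B 0 u = 0" for u using C(2)[OF that(1)] that(2) by simp
    then have boundary: "norm (B 0 x) \<le> 2 * norm (B \<epsilon> x) + 2 * M * C * q (L 0 x)"
      by (rule boundary_data_bound[OF \<epsilon>0(1) x \<delta>1(2) _ \<delta>1(3)[OF \<epsilon>1] kernel])
    have Lx: "L 0 x \<in> Y" "L \<epsilon> x \<in> Y" using L_mem[OF zero_in_eps_range x] L_mem[OF \<epsilon>0(1) x] by auto
    have diff: "L \<epsilon> x - L 0 x \<in> Y" using Y.diff_mem[OF Lx(2,1)] .
    have "q (L 0 x) = q (L \<epsilon> x + - (L \<epsilon> x - L 0 x))" by simp
    also have "\<dots> \<le> q (L \<epsilon> x) + q (L \<epsilon> x - L 0 x)"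
      using Y.p_triangle[OF Lx(2) Y.uminus_mem[OF diff]] Y.p_minus[OF diff] by simp
    also have "q (L \<epsilon> x - L 0 x) \<le> \<eta> \<epsilon> * p x" using \<eta>(2) \<epsilon>0(2) x by blast
    finally have L0x: "q (L 0 x) \<le> q (L \<epsilon> x) + \<eta> \<epsilon> * p x" by simp
    have "D * q (L 0 x) \<le> D * q (L \<epsilon> x) + (D * \<eta> \<epsilon>) * p x"
      using mult_left_mono[OF L0x D] by (simp add: algebra_simps)
    also have "(D * \<eta> \<epsilon>) * p x \<le> 1/2 * p x" using D\<eta> X.p_nonneg[OF x] by (intro mult_right_mono) auto
    finally have L0: "D * q (L 0 x) \<le> D * q (L \<epsilon> x) + 1/2 * p x" by simp
    have "p x \<le> C * q (L 0 x) + C * norm (B 0 x)" using C(2)[OF x] by (simp add: distrib_left)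
    also have "\<dots> \<le> C * q (L 0 x) + C * (2 * norm (B \<epsilon> x) + 2 * M * C * q (L 0 x))"
      using mult_left_mono[OF boundary C(1)] by (rule add_left_mono)
    also have "\<dots> = D * q (L 0 x) + 2 * C * norm (B \<epsilon> x)" unfolding D_def by (simp add: algebra_simps)
    finally have "p x \<le> 2 * D * q (L \<epsilon> x) + 4 * C * norm (B \<epsilon> x)" using L0 by linarith
    moreover have "0 \<le> 2 * D * norm (B \<epsilon> x) + 4 * C * q (L \<epsilon> x) + q (L \<epsilon> x) + norm (B \<epsilon> x)"
      using Y.p_nonneg[OF Lx(2)] D C(1) by (intro add_nonneg_nonneg mult_nonneg_nonneg) auto
    ultimately show ?thesis by (simp add: algebra_simps)
  qed
  moreover have "\<delta> > 0" "2 * D + 4 * C + 1 > 0" unfolding \<delta>_def using eps0_pos \<delta>1 \<delta>2 D C(1) by auto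
  ultimately show ?thesis by (intro that[of \<delta> "2 * D + 4 * C + 1"])
qed

theorem two_sided_estimate:
  obtains \<delta> \<kappa>1 \<kappa>2 where "\<delta> > 0" "\<kappa>1 > 0" "\<kappa>2 > 0"
    "\<And>\<epsilon> x. \<epsilon> \<in> {0<..<\<delta>} \<Longrightarrow> x \<in> X \<Longrightarrow>
       \<kappa>1 * (q (L \<epsilon> x) + norm (B \<epsilon> x)) \<le> p x \<and> p x \<le> \<kappa>2 * (q (L \<epsilon> x) + norm (B \<epsilon> x))"
proof -
  obtain \<delta>1 \<kappa> where l: "\<delta>1 > 0" "\<kappa> > 0"
    "\<And>\<epsilon> x. \<epsilon> \<in> {0<..<\<delta>1} \<Longrightarrow> x \<in> X \<Longrightarrow> q (L \<epsilon> x) + norm (B \<epsilon> x) \<le> \<kappa> * p x"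
    using lower_estimate by blast
  obtain \<delta>2 \<kappa>2 where u: "\<delta>2 > 0" "\<kappa>2 > 0"
    "\<And>\<epsilon> x. \<epsilon> \<in> {0<..<\<delta>2} \<Longrightarrow> x \<in> X \<Longrightarrow> p x \<le> \<kappa>2 * (q (L \<epsilon> x) + norm (B \<epsilon> x))"
    using upper_estimate by blast
  have "(1 / \<kappa>) * (q (L \<epsilon> x) + norm (B \<epsilon> x)) \<le> p x" if "\<epsilon> \<in> {0<..<min \<delta>1 \<delta>2}" "x \<in> X" for \<epsilon> x
    using l(3)[of \<epsilon> x] l(2) that by (simp add: field_simps)
  moreover have "p x \<le> \<kappa>2 * (q (L \<epsilon> x) + norm (B \<epsilon> x))" if "\<epsilon> \<in> {0<..<min \<delta>1 \<delta>2}" "x \<in> X" for \<epsilon> x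
    using u(3)[of \<epsilon> x] that by simp
  ultimately show ?thesis using l(1,2) u(1,2) by (intro that[of "min \<delta>1 \<delta>2" "1 / \<kappa>" \<kappa>2]) auto
qed

end

section \<open>Hoelder spaces on a compact interval\<close>

lemma hderiv_hderiv: "hderiv a b j (hderiv a b i f) = hderiv a b (i + j) f"
  by (induction j) auto

lemma vector_derivative_cong_Icc:
  assumes "\<And>s. s \<in> {a..b} \<Longrightarrow> f s = g s" "t \<in> {a..b}"
  shows "vector_derivative f (at t within {a..b}) = vector_derivative g (at t within {a..b})"
proof -
  have "(f has_vector_derivative v) (at t within {a..b}) \<longleftrightarrow> (g has_vector_derivative v) (at t within {a..b})" for v
    using has_vector_derivative_transform[of t "{a..b}" f g v] has_vector_derivative_transform[of t "{a..b}" g f v] assms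
    by metis
  then show ?thesis unfolding vector_derivative_def by simp
qed

lemma hderiv_cong:
  assumes "\<And>s. s \<in> {a..b} \<Longrightarrow> f s = g s" "t \<in> {a..b}"
  shows "hderiv a b j f t = hderiv a b j g t"
  using assms(2)
proof (induction j arbitrary: t)
  case 0 then show ?case using assms(1) by simp
next
  case (Suc j)
  then show ?case using vector_derivative_cong_Icc[of a b "hderiv a b j f" "hderiv a b j g" t] by simp
qed

lemma hquot_cong:
  assumes "\<And>s. s \<in> {a..b} \<Longrightarrow> f s = g s"
  shows "hquot a b \<alpha> f = hquot a b \<alpha> g"
proof -
  have *: "f t1 = g t1 \<and> f t2 = g t2" if "a \<le> t1" "t1 < t2" "t2 \<le> b" for t1 t2
    using assms that by auto
  show ?thesis unfolding hquot_def
  proof (rule Collect_cong, rule iffI)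
    fix u assume "\<exists>t1 t2. u = cmod (f t2 - f t1) / (t2 - t1) powr \<alpha> \<and> a \<le> t1 \<and> t1 < t2 \<and> t2 \<le> b"
    then obtain t1 t2 where "u = cmod (f t2 - f t1) / (t2 - t1) powr \<alpha>" "a \<le> t1" "t1 < t2" "t2 \<le> b" by blast
    then show "\<exists>t1 t2. u = cmod (g t2 - g t1) / (t2 - t1) powr \<alpha> \<and> a \<le> t1 \<and> t1 < t2 \<and> t2 \<le> b"
      using *[of t1 t2] by auto
  next
    fix u assume "\<exists>t1 t2. u = cmod (g t2 - g t1) / (t2 - t1) powr \<alpha> \<and> a \<le> t1 \<and> t1 < t2 \<and> t2 \<le> b"
    then obtain t1 t2 where "u = cmod (g t2 - g t1) / (t2 - t1) powr \<alpha>" "a \<le> t1" "t1 < t2" "t2 \<le> b" by blast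
    then show "\<exists>t1 t2. u = cmod (f t2 - f t1) / (t2 - t1) powr \<alpha> \<and> a \<le> t1 \<and> t1 < t2 \<and> t2 \<le> b"
      using *[of t1 t2] by (intro exI[of _ t1] exI[of _ t2]) auto
  qed
qed

lemma Hoelder_cong:
  assumes "\<And>s. s \<in> {a..b} \<Longrightarrow> f s = g s"
  shows "f \<in> Hoelder a b n \<alpha> \<longleftrightarrow> g \<in> Hoelder a b n \<alpha>"
proof -
  have D: "\<And>j t. t \<in> {a..b} \<Longrightarrow> hderiv a b j f t = hderiv a b j g t"
    using hderiv_cong[of a b f g] assms by blast
  have 1: "(hderiv a b j f has_vector_derivative v) (at t within {a..b}) \<longleftrightarrow>
           (hderiv a b j g has_vector_derivative v) (at t within {a..b})" if "t \<in> {a..b}" for j t v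
    using has_vector_derivative_transform[of t "{a..b}" "hderiv a b j f" "hderiv a b j g" v]
      has_vector_derivative_transform[of t "{a..b}" "hderiv a b j g" "hderiv a b j f" v] D that
    by metis
  have 2: "continuous_on {a..b} (hderiv a b j f) \<longleftrightarrow> continuous_on {a..b} (hderiv a b j g)" for j
    using continuous_on_cong[OF refl, of "{a..b}" "hderiv a b j f" "hderiv a b j g"] D by blast
  have 3: "hquot a b \<alpha> (hderiv a b n f) = hquot a b \<alpha> (hderiv a b n g)"
    using hquot_cong D by blast
  have 4: "(\<forall>t\<in>{a..b}. (hderiv a b j f has_vector_derivative hderiv a b (Suc j) f t) (at t within {a..b})) \<longleftrightarrow>
          (\<forall>t\<in>{a..b}. (hderiv a b j g has_vector_derivative hderiv a b (Suc j) g t) (at t within {a..b}))" for j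
    using 1 D[of _ "Suc j"] by (metis (no_types))
  show ?thesis unfolding Hoelder_def mem_Collect_eq using 2 3 4 by (simp del: hderiv.simps(2))
qed

lemma hnorm_cong:
  assumes "\<And>s. s \<in> {a..b} \<Longrightarrow> f s = g s"
  shows "hnorm a b n \<alpha> f = hnorm a b n \<alpha> g"
proof -
  have D: "\<And>j t. t \<in> {a..b} \<Longrightarrow> hderiv a b j f t = hderiv a b j g t"
    using hderiv_cong[of a b f g] assms by blast
  have "(\<lambda>t. cmod (hderiv a b j f t)) ` {a..b} = (\<lambda>t. cmod (hderiv a b j g t)) ` {a..b}" for j
    using D by auto
  moreover have "hquot a b \<alpha> (hderiv a b n f) = hquot a b \<alpha> (hderiv a b n g)"
    using hquot_cong D by blast
  ultimately show ?thesis unfolding hnorm_def by simp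
qed

declare hderiv.simps(2)[simp del]

definition supnorm :: "real \<Rightarrow> real \<Rightarrow> (real \<Rightarrow> complex) \<Rightarrow> real" where
  "supnorm a b f = Sup ((\<lambda>t. cmod (f t)) ` {a..b})"

lemma Hoelder_0: "f \<in> Hoelder a b 0 \<alpha> \<longleftrightarrow> continuous_on {a..b} f \<and> bdd_above (hquot a b \<alpha> f)"
  unfolding Hoelder_def by simp

lemma hnorm_0: "hnorm a b 0 \<alpha> f = supnorm a b f + Sup (hquot a b \<alpha> f)"
  unfolding hnorm_def supnorm_def by simp

lemma Hoelder_Suc:
  "f \<in> Hoelder a b (Suc n) \<alpha> \<longleftrightarrow> continuous_on {a..b} f
     \<and> (\<forall>t\<in>{a..b}. (f has_vector_derivative hderiv a b 1 f t) (at t within {a..b}))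
     \<and> hderiv a b 1 f \<in> Hoelder a b n \<alpha>"
proof -
  have e: "hderiv a b j (hderiv a b 1 f) = hderiv a b (Suc j) f" for j
    using hderiv_hderiv[of a b j 1 f] by simp
  have A: "(\<forall>j<Suc n. P j) \<longleftrightarrow> P 0 \<and> (\<forall>j<n. P (Suc j))" for P
    using less_Suc_eq_0_disj by auto
  have B: "(\<forall>j\<le>Suc n. P j) \<longleftrightarrow> P 0 \<and> (\<forall>j\<le>n. P (Suc j))" for P
    apply (rule iffI)
     apply simp
    apply clarify
    subgoal for j by (cases j) auto
    done
  show ?thesis
    unfolding Hoelder_def mem_Collect_eq A B e by auto
qed

lemma hnorm_Suc: "hnorm a b (Suc n) \<alpha> f = supnorm a b f + hnorm a b n \<alpha> (hderiv a b 1 f)"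
proof -
  have e: "hderiv a b j (hderiv a b 1 f) = hderiv a b (Suc j) f" for j
    using hderiv_hderiv[of a b j 1 f] by simp
  show ?thesis
    unfolding hnorm_def supnorm_def e sum.atMost_Suc_shift
    by (simp del: hderiv.simps(2) sum.atMost_Suc)
qed


lemma scaleR_vec_eq_smult: "r *\<^sub>R (v :: complex^'m::finite) = complex_of_real r *s v"
  unfolding vec_eq_iff
proof
  fix i
  have "(r *\<^sub>R v) $ i = r *\<^sub>R (v $ i)" by (rule vector_scaleR_component)
  also have "\<dots> = complex_of_real r * v $ i" by (rule scaleR_conv_of_real)
  also have "\<dots> = (complex_of_real r *s v) $ i" by (rule vector_smult_component[symmetric])
  finally show "(r *\<^sub>R v) $ i = (complex_of_real r *s v) $ i" .
qed

locale hoelder_interval =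
  fixes a b \<alpha> :: real
  assumes ab: "a < b" and alpha_pos: "0 < \<alpha>" and alpha_le_1: "\<alpha> \<le> 1"
begin

lemma hquot_nonempty: "hquot a b \<alpha> f \<noteq> {}"
  unfolding hquot_def using ab by blast

lemma hquot_nonneg: "u \<in> hquot a b \<alpha> f \<Longrightarrow> 0 \<le> u"
  unfolding hquot_def by auto

lemma Sup_hquot_nonneg: "bdd_above (hquot a b \<alpha> f) \<Longrightarrow> 0 \<le> Sup (hquot a b \<alpha> f)"
proof -
  assume bdd: "bdd_above (hquot a b \<alpha> f)"
  obtain u where u: "u \<in> hquot a b \<alpha> f" using hquot_nonempty by blast
  have "u \<le> Sup (hquot a b \<alpha> f)" using cSup_upper[OF u bdd] .
  then show ?thesis using hquot_nonneg[OF u] by linarith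
qed

lemma norm_diff_le_Sup_hquot:
  assumes "bdd_above (hquot a b \<alpha> f)" "a \<le> t1" "t1 < t2" "t2 \<le> b"
  shows "cmod (f t2 - f t1) \<le> Sup (hquot a b \<alpha> f) * (t2 - t1) powr \<alpha>"
proof -
  have u: "cmod (f t2 - f t1) / (t2 - t1) powr \<alpha> \<in> hquot a b \<alpha> f"
    unfolding hquot_def using assms by blast
  have "cmod (f t2 - f t1) / (t2 - t1) powr \<alpha> \<le> Sup (hquot a b \<alpha> f)" using cSup_upper[OF u assms(1)] .
  moreover have "(t2 - t1) powr \<alpha> > 0" using assms by simp
  ultimately show ?thesis by (simp add: field_simps)
qed

lemma Sup_hquot_le:
  assumes "\<And>t1 t2. a \<le> t1 \<Longrightarrow> t1 < t2 \<Longrightarrow> t2 \<le> b \<Longrightarrow> cmod (f t2 - f t1) \<le> C * (t2 - t1) powr \<alpha>"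
  shows "bdd_above (hquot a b \<alpha> f) \<and> Sup (hquot a b \<alpha> f) \<le> C"
proof -
  have le: "u \<le> C" if u: "u \<in> hquot a b \<alpha> f" for u
  proof -
    obtain t1 t2 where t: "u = cmod (f t2 - f t1) / (t2 - t1) powr \<alpha>" "a \<le> t1" "t1 < t2" "t2 \<le> b"
      using u unfolding hquot_def by blast
    have p: "(t2 - t1) powr \<alpha> > 0" using t by simp
    have "u * (t2 - t1) powr \<alpha> = cmod (f t2 - f t1)" using t(1) p by simp
    hence "u * (t2 - t1) powr \<alpha> \<le> C * (t2 - t1) powr \<alpha>" using assms[OF t(2-4)] by simp
    then show ?thesis using p by (simp add: mult_le_cancel_right_pos)
  qed
  then have "bdd_above (hquot a b \<alpha> f)" by (meson bdd_aboveI)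
  moreover have "Sup (hquot a b \<alpha> f) \<le> C" using cSup_least[OF hquot_nonempty] le by blast
  ultimately show ?thesis by blast
qed

lemma bdd_above_norm_image: "continuous_on {a..b} f \<Longrightarrow> bdd_above ((\<lambda>t. cmod (f t)) ` {a..b})"
proof -
  assume c: "continuous_on {a..b} f"
  have "compact ((\<lambda>t. cmod (f t)) ` {a..b})"
    by (rule compact_continuous_image[OF continuous_on_norm[OF c] compact_Icc])
  then show ?thesis by (simp add: bounded_imp_bdd_above compact_imp_bounded)
qed

lemma norm_le_supnorm: "continuous_on {a..b} f \<Longrightarrow> t \<in> {a..b} \<Longrightarrow> cmod (f t) \<le> supnorm a b f"
  unfolding supnorm_def by (rule cSup_upper) (auto intro: bdd_above_norm_image)

lemma supnorm_le: "(\<And>t. t \<in> {a..b} \<Longrightarrow> cmod (f t) \<le> C) \<Longrightarrow> supnorm a b f \<le> C"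
  unfolding supnorm_def using ab by (intro cSup_least) auto

lemma supnorm_nonneg: "continuous_on {a..b} f \<Longrightarrow> 0 \<le> supnorm a b f"
  using norm_le_supnorm[of f a] ab by (meson atLeastAtMost_iff dual_order.trans less_imp_le norm_ge_zero order_refl)

lemma Hoelder_continuous_on: "f \<in> Hoelder a b n \<alpha> \<Longrightarrow> continuous_on {a..b} f"
  unfolding Hoelder_def by (metis (no_types, lifting) hderiv.simps(1) le0 mem_Collect_eq)

lemma supnorm_le_hnorm: "f \<in> Hoelder a b n \<alpha> \<Longrightarrow> supnorm a b f \<le> hnorm a b n \<alpha> f"
proof (induction n arbitrary: f)
  case 0
  then show ?case using Sup_hquot_nonneg unfolding Hoelder_0 hnorm_0 by auto
next
  case (Suc n)
  then have "hderiv a b 1 f \<in> Hoelder a b n \<alpha>" unfolding Hoelder_Suc by blast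
  then have "0 \<le> hnorm a b n \<alpha> (hderiv a b 1 f)"
    using Suc.IH supnorm_nonneg Hoelder_continuous_on by (meson order.trans)
  then show ?case unfolding hnorm_Suc by simp
qed

lemma hnorm_nonneg: "f \<in> Hoelder a b n \<alpha> \<Longrightarrow> 0 \<le> hnorm a b n \<alpha> f"
  using supnorm_le_hnorm supnorm_nonneg Hoelder_continuous_on by (meson order.trans)

lemma hnorm_eq_0_imp: "f \<in> Hoelder a b n \<alpha> \<Longrightarrow> hnorm a b n \<alpha> f = 0 \<Longrightarrow> t \<in> {a..b} \<Longrightarrow> f t = 0"
proof -
  assume "f \<in> Hoelder a b n \<alpha>" "hnorm a b n \<alpha> f = 0" "t \<in> {a..b}"
  moreover have "supnorm a b f \<le> hnorm a b n \<alpha> f" using supnorm_le_hnorm calculation(1) .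
  moreover have "cmod (f t) \<le> supnorm a b f" using norm_le_supnorm[OF Hoelder_continuous_on] calculation(1,3) .
  ultimately have "cmod (f t) \<le> 0" by linarith
  then show "f t = 0" by simp
qed

lemma hderiv_1_eq: "t \<in> {a..b} \<Longrightarrow> (f has_vector_derivative v) (at t within {a..b}) \<Longrightarrow> hderiv a b 1 f t = v"
  using vector_derivative_within_closed_interval[OF ab] by (simp add: hderiv.simps(2))

lemma Hoelder_has_vector_derivative: "f \<in> Hoelder a b n \<alpha> \<Longrightarrow> j < n \<Longrightarrow> t \<in> {a..b} \<Longrightarrow>
    (hderiv a b j f has_vector_derivative hderiv a b (Suc j) f t) (at t within {a..b})"
  unfolding Hoelder_def by blast

lemma hderiv_lincomb:
  assumes f: "f \<in> Hoelder a b n \<alpha>" and g: "g \<in> Hoelder a b n \<alpha>" and j: "j \<le> n"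
  shows "t \<in> {a..b} \<Longrightarrow> hderiv a b j (\<lambda>s. c * f s + d * g s) t = c * hderiv a b j f t + d * hderiv a b j g t"
  using j
proof (induction j arbitrary: t)
  case 0 then show ?case by simp
next
  case (Suc j)
  have jn: "j < n" using Suc.prems by simp
  have "hderiv a b (Suc j) (\<lambda>s. c * f s + d * g s) t =
        vector_derivative (\<lambda>s. c * hderiv a b j f s + d * hderiv a b j g s) (at t within {a..b})"
    using vector_derivative_cong_Icc[of a b "hderiv a b j (\<lambda>s. c * f s + d * g s)" "\<lambda>s. c * hderiv a b j f s + d * hderiv a b j g s" t]
      Suc.IH Suc.prems jn by (simp add: hderiv.simps(2))
  also have "\<dots> = c * hderiv a b (Suc j) f t + d * hderiv a b (Suc j) g t"
  proof (rule vector_derivative_within_closed_interval[OF ab Suc.prems(1)])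
    show "((\<lambda>s. c * hderiv a b j f s + d * hderiv a b j g s) has_vector_derivative
          c * hderiv a b (Suc j) f t + d * hderiv a b (Suc j) g t) (at t within {a..b})"
      using Hoelder_has_vector_derivative[OF f jn Suc.prems(1)] Hoelder_has_vector_derivative[OF g jn Suc.prems(1)]
      by (intro has_vector_derivative_add has_vector_derivative_mult_right)
  qed
  finally show ?case .
qed

lemma Hoelder_lincomb:
  assumes "f \<in> Hoelder a b n \<alpha>" "g \<in> Hoelder a b n \<alpha>"
  shows "(\<lambda>s. c * f s + d * g s) \<in> Hoelder a b n \<alpha> \<and>
         hnorm a b n \<alpha> (\<lambda>s. c * f s + d * g s) \<le> cmod c * hnorm a b n \<alpha> f + cmod d * hnorm a b n \<alpha> g"
  using assms
proof (induction n arbitrary: f g)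
  case 0
  let ?h = "\<lambda>s. c * f s + d * g s"
  have cf: "continuous_on {a..b} f" "bdd_above (hquot a b \<alpha> f)"
    and cg: "continuous_on {a..b} g" "bdd_above (hquot a b \<alpha> g)" using 0 unfolding Hoelder_0 by auto
  have ch: "continuous_on {a..b} ?h" using cf cg by (intro continuous_intros)
  have "cmod (?h t2 - ?h t1) \<le> (cmod c * Sup (hquot a b \<alpha> f) + cmod d * Sup (hquot a b \<alpha> g)) * (t2 - t1) powr \<alpha>"
    if "a \<le> t1" "t1 < t2" "t2 \<le> b" for t1 t2
  proof -
    have "?h t2 - ?h t1 = c * (f t2 - f t1) + d * (g t2 - g t1)" by (simp add: algebra_simps)
    hence "cmod (?h t2 - ?h t1) \<le> cmod c * cmod (f t2 - f t1) + cmod d * cmod (g t2 - g t1)"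
      by (metis norm_mult norm_triangle_ineq)
    also have "\<dots> \<le> cmod c * (Sup (hquot a b \<alpha> f) * (t2 - t1) powr \<alpha>) + cmod d * (Sup (hquot a b \<alpha> g) * (t2 - t1) powr \<alpha>)"
      using norm_diff_le_Sup_hquot[OF cf(2) that] norm_diff_le_Sup_hquot[OF cg(2) that] by (intro add_mono mult_left_mono) auto
    finally show ?thesis by (simp add: algebra_simps)
  qed
  then have hh0: "bdd_above (hquot a b \<alpha> ?h) \<and> Sup (hquot a b \<alpha> ?h) \<le> cmod c * Sup (hquot a b \<alpha> f) + cmod d * Sup (hquot a b \<alpha> g)"
    by (rule Sup_hquot_le)
  note hh = conjunct1[OF hh0] conjunct2[OF hh0]
  have "supnorm a b ?h \<le> cmod c * supnorm a b f + cmod d * supnorm a b g"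
  proof (rule supnorm_le)
    fix t assume t: "t \<in> {a..b}"
    have "cmod (?h t) \<le> cmod c * cmod (f t) + cmod d * cmod (g t)" by (metis norm_mult norm_triangle_ineq)
    also have "\<dots> \<le> cmod c * supnorm a b f + cmod d * supnorm a b g"
      using norm_le_supnorm[OF cf(1) t] norm_le_supnorm[OF cg(1) t] by (intro add_mono mult_left_mono) auto
    finally show "cmod (?h t) \<le> cmod c * supnorm a b f + cmod d * supnorm a b g" .
  qed
  then show ?case using hh ch unfolding Hoelder_0 hnorm_0 by (simp add: algebra_simps)
next
  case (Suc n)
  let ?h = "\<lambda>s. c * f s + d * g s"
  let ?h' = "\<lambda>s. c * hderiv a b 1 f s + d * hderiv a b 1 g s"
  have f: "continuous_on {a..b} f" "\<And>t. t \<in> {a..b} \<Longrightarrow> (f has_vector_derivative hderiv a b 1 f t) (at t within {a..b})"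
    "hderiv a b 1 f \<in> Hoelder a b n \<alpha>" using Suc.prems(1) unfolding Hoelder_Suc by auto
  have g: "continuous_on {a..b} g" "\<And>t. t \<in> {a..b} \<Longrightarrow> (g has_vector_derivative hderiv a b 1 g t) (at t within {a..b})"
    "hderiv a b 1 g \<in> Hoelder a b n \<alpha>" using Suc.prems(2) unfolding Hoelder_Suc by auto
  have ch: "continuous_on {a..b} ?h" using f g by (intro continuous_intros)
  have dh: "(?h has_vector_derivative ?h' t) (at t within {a..b})" if "t \<in> {a..b}" for t
    using f(2)[OF that] g(2)[OF that] by (intro has_vector_derivative_add has_vector_derivative_mult_right)
  have D1: "hderiv a b 1 ?h t = ?h' t" if "t \<in> {a..b}" for t using hderiv_1_eq[OF that dh[OF that]] .
  from Suc.IH[OF f(3) g(3)] have IH: "?h' \<in> Hoelder a b n \<alpha>"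
    "hnorm a b n \<alpha> ?h' \<le> cmod c * hnorm a b n \<alpha> (hderiv a b 1 f) + cmod d * hnorm a b n \<alpha> (hderiv a b 1 g)" by auto
  have D1H: "hderiv a b 1 ?h \<in> Hoelder a b n \<alpha>" using Hoelder_cong[of a b "hderiv a b 1 ?h" ?h' n \<alpha>] D1 IH(1) by blast
  have D1n: "hnorm a b n \<alpha> (hderiv a b 1 ?h) = hnorm a b n \<alpha> ?h'" using hnorm_cong[of a b "hderiv a b 1 ?h" ?h' n \<alpha>] D1 by blast
  have "supnorm a b ?h \<le> cmod c * supnorm a b f + cmod d * supnorm a b g"
  proof (rule supnorm_le)
    fix t assume t: "t \<in> {a..b}"
    have "cmod (?h t) \<le> cmod c * cmod (f t) + cmod d * cmod (g t)" by (metis norm_mult norm_triangle_ineq)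
    also have "\<dots> \<le> cmod c * supnorm a b f + cmod d * supnorm a b g"
      using norm_le_supnorm[OF f(1) t] norm_le_supnorm[OF g(1) t] by (intro add_mono mult_left_mono) auto
    finally show "cmod (?h t) \<le> cmod c * supnorm a b f + cmod d * supnorm a b g" .
  qed
  then have "hnorm a b (Suc n) \<alpha> ?h \<le> cmod c * hnorm a b (Suc n) \<alpha> f + cmod d * hnorm a b (Suc n) \<alpha> g"
    unfolding hnorm_Suc D1n using IH(2) by (simp add: algebra_simps)
  moreover have "?h \<in> Hoelder a b (Suc n) \<alpha>" unfolding Hoelder_Suc using ch dh D1 D1H by auto
  ultimately show ?case by blast
qed



lemma Hoelder_add: "f \<in> Hoelder a b n \<alpha> \<Longrightarrow> g \<in> Hoelder a b n \<alpha> \<Longrightarrow>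
  (\<lambda>s. f s + g s) \<in> Hoelder a b n \<alpha> \<and> hnorm a b n \<alpha> (\<lambda>s. f s + g s) \<le> hnorm a b n \<alpha> f + hnorm a b n \<alpha> g"
  using Hoelder_lincomb[of f n g 1 1] by simp

lemma Hoelder_diff: "f \<in> Hoelder a b n \<alpha> \<Longrightarrow> g \<in> Hoelder a b n \<alpha> \<Longrightarrow>
  (\<lambda>s. f s - g s) \<in> Hoelder a b n \<alpha> \<and> hnorm a b n \<alpha> (\<lambda>s. f s - g s) \<le> hnorm a b n \<alpha> f + hnorm a b n \<alpha> g"
  using Hoelder_lincomb[of f n g 1 "-1"] by simp

lemma Hoelder_scale: "f \<in> Hoelder a b n \<alpha> \<Longrightarrow>
  (\<lambda>s. c * f s) \<in> Hoelder a b n \<alpha> \<and> hnorm a b n \<alpha> (\<lambda>s. c * f s) \<le> cmod c * hnorm a b n \<alpha> f"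
  using Hoelder_lincomb[of f n f c 0] by simp

lemma hnorm_scale:
  assumes f: "f \<in> Hoelder a b n \<alpha>"
  shows "hnorm a b n \<alpha> (\<lambda>s. c * f s) = cmod c * hnorm a b n \<alpha> f"
proof (cases "c = 0")
  case True
  have "(\<lambda>s. 0 * f s) \<in> Hoelder a b n \<alpha>" "hnorm a b n \<alpha> (\<lambda>s. 0 * f s) \<le> 0"
    using Hoelder_scale[OF f, of 0] by auto
  then show ?thesis using True hnorm_nonneg by force
next
  case False
  have 1: "hnorm a b n \<alpha> (\<lambda>s. c * f s) \<le> cmod c * hnorm a b n \<alpha> f" using Hoelder_scale[OF f] by blast
  have "hnorm a b n \<alpha> (\<lambda>s. (1 / c) * (c * f s)) \<le> cmod (1 / c) * hnorm a b n \<alpha> (\<lambda>s. c * f s)"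
    using Hoelder_scale[OF conjunct1[OF Hoelder_scale[OF f, of c]], of "1/c"] by blast
  hence "hnorm a b n \<alpha> f \<le> hnorm a b n \<alpha> (\<lambda>s. c * f s) / cmod c" using False by (simp add: norm_divide)
  hence "cmod c * hnorm a b n \<alpha> f \<le> hnorm a b n \<alpha> (\<lambda>s. c * f s)" using False by (simp add: field_simps)
  then show ?thesis using 1 by linarith
qed

lemma hderiv_diff: "f \<in> Hoelder a b n \<alpha> \<Longrightarrow> g \<in> Hoelder a b n \<alpha> \<Longrightarrow> j \<le> n \<Longrightarrow> t \<in> {a..b} \<Longrightarrow>
  hderiv a b j (\<lambda>s. f s - g s) t = hderiv a b j f t - hderiv a b j g t"
  using hderiv_lincomb[of f n g j t 1 "-1"] by simp

lemma norm_diff_le_derivative_bound: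
  assumes d: "\<And>t. t \<in> {a..b} \<Longrightarrow> (f has_vector_derivative f' t) (at t within {a..b})"
    and B: "\<And>t. t \<in> {a..b} \<Longrightarrow> cmod (f' t) \<le> B"
    and x: "x \<in> {a..b}" and y: "y \<in> {a..b}"
  shows "cmod (f x - f y) \<le> B * \<bar>x - y\<bar>"
proof -
  have "norm (f x - f y) \<le> B * norm (x - y)"
  proof (rule differentiable_bound[of "{a..b}" f "\<lambda>t h. h *\<^sub>R f' t" B x y])
    show "convex {a..b}" by simp
    show "\<And>t. t \<in> {a..b} \<Longrightarrow> (f has_derivative (\<lambda>h. h *\<^sub>R f' t)) (at t within {a..b})"
      using d unfolding has_vector_derivative_def by blast
    show "\<And>t. t \<in> {a..b} \<Longrightarrow> onorm (\<lambda>h. h *\<^sub>R f' t) \<le> B"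
    proof -
      fix t assume t: "t \<in> {a..b}"
      have o1: "onorm (\<lambda>x::real. x) = 1" by (rule onorm_id)
      have "onorm (\<lambda>h::real. h *\<^sub>R f' t) = onorm (\<lambda>x::real. x) * cmod (f' t)"
        by (rule onorm_scaleR_left[OF bounded_linear_ident])
      then show "onorm (\<lambda>h. h *\<^sub>R f' t) \<le> B" using o1 B[OF t] by simp
    qed
  qed (use x y in auto)
  then show ?thesis by simp
qed

text \<open>By the mean value theorem, \<open>|f t2 - f t1| \<le> sup |f'| (t2 - t1) \<le> sup |f'| (b - a) powr (1 - \<alpha>) (t2 - t1) powr \<alpha>\<close>.\<close>

definition emb_const :: real where "emb_const = 1 + (b - a) powr (1 - \<alpha>)"

lemma emb_const_ge: "1 \<le> emb_const" "(b - a) powr (1 - \<alpha>) \<le> emb_const"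
  unfolding emb_const_def by auto

lemma Hoelder_embedding: "f \<in> Hoelder a b (Suc n) \<alpha> \<Longrightarrow>
   f \<in> Hoelder a b n \<alpha> \<and> hnorm a b n \<alpha> f \<le> emb_const * hnorm a b (Suc n) \<alpha> f"
proof (induction n arbitrary: f)
  case 0
  have f: "continuous_on {a..b} f" "\<And>t. t \<in> {a..b} \<Longrightarrow> (f has_vector_derivative hderiv a b 1 f t) (at t within {a..b})"
    "hderiv a b 1 f \<in> Hoelder a b 0 \<alpha>" using 0 unfolding Hoelder_Suc by auto
  have cD: "continuous_on {a..b} (hderiv a b 1 f)" using Hoelder_continuous_on[OF f(3)] .
  let ?B = "supnorm a b (hderiv a b 1 f)"
  have "cmod (f t2 - f t1) \<le> (?B * (b - a) powr (1 - \<alpha>)) * (t2 - t1) powr \<alpha>"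
    if t: "a \<le> t1" "t1 < t2" "t2 \<le> b" for t1 t2
  proof -
    have "cmod (f t2 - f t1) \<le> ?B * \<bar>t2 - t1\<bar>"
      by (rule norm_diff_le_derivative_bound[OF f(2) norm_le_supnorm[OF cD]]) (use t in auto)
    also have "\<bar>t2 - t1\<bar> = (t2 - t1) powr (1 - \<alpha>) * (t2 - t1) powr \<alpha>"
      using t by (simp add: powr_add[symmetric])
    also have "?B * ((t2 - t1) powr (1 - \<alpha>) * (t2 - t1) powr \<alpha>) \<le> ?B * ((b - a) powr (1 - \<alpha>) * (t2 - t1) powr \<alpha>)"
      using t alpha_le_1 supnorm_nonneg[OF cD] by (intro mult_left_mono mult_right_mono powr_mono2) auto
    finally show ?thesis by (simp add: algebra_simps)
  qed
  then have hq: "bdd_above (hquot a b \<alpha> f) \<and> Sup (hquot a b \<alpha> f) \<le> ?B * (b - a) powr (1 - \<alpha>)"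
    by (rule Sup_hquot_le)
  have fH: "f \<in> Hoelder a b 0 \<alpha>" using f(1) hq by (simp add: Hoelder_0)
  have "hnorm a b 0 \<alpha> f \<le> supnorm a b f + ?B * (b - a) powr (1 - \<alpha>)" using hq unfolding hnorm_0 by simp
  also have "\<dots> \<le> emb_const * supnorm a b f + emb_const * ?B"
  proof -
    have A: "1 * supnorm a b f \<le> emb_const * supnorm a b f" by (rule mult_right_mono[OF emb_const_ge(1) supnorm_nonneg[OF f(1)]])
    have B: "?B * (b - a) powr (1 - \<alpha>) \<le> ?B * emb_const" by (rule mult_left_mono[OF emb_const_ge(2) supnorm_nonneg[OF cD]])
    show ?thesis using A B by (simp add: mult.commute)
  qed
  also have "\<dots> \<le> emb_const * hnorm a b (Suc 0) \<alpha> f"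
  proof -
    have "emb_const * ?B \<le> emb_const * hnorm a b 0 \<alpha> (hderiv a b 1 f)"
      using supnorm_le_hnorm[OF f(3)] emb_const_ge by (intro mult_left_mono) auto
    then show ?thesis unfolding hnorm_Suc[of a b 0] by (simp add: distrib_left)
  qed
  finally show ?case using fH by simp
next
  case (Suc n)
  have f: "continuous_on {a..b} f" "\<forall>t\<in>{a..b}. (f has_vector_derivative hderiv a b 1 f t) (at t within {a..b})"
    "hderiv a b 1 f \<in> Hoelder a b (Suc n) \<alpha>" using Suc.prems unfolding Hoelder_Suc by auto
  from Suc.IH[OF f(3)] have IH: "hderiv a b 1 f \<in> Hoelder a b n \<alpha>"
    "hnorm a b n \<alpha> (hderiv a b 1 f) \<le> emb_const * hnorm a b (Suc n) \<alpha> (hderiv a b 1 f)" by auto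
  have fH: "f \<in> Hoelder a b (Suc n) \<alpha>" unfolding Hoelder_Suc using f(1,2) IH(1) by blast
  have "hnorm a b (Suc n) \<alpha> f = supnorm a b f + hnorm a b n \<alpha> (hderiv a b 1 f)" by (rule hnorm_Suc)
  hence "hnorm a b (Suc n) \<alpha> f \<le> supnorm a b f + emb_const * hnorm a b (Suc n) \<alpha> (hderiv a b 1 f)"
    using IH(2) by linarith
  also have "\<dots> \<le> emb_const * (supnorm a b f + hnorm a b (Suc n) \<alpha> (hderiv a b 1 f))"
  proof -
    have A: "1 * supnorm a b f \<le> emb_const * supnorm a b f" by (rule mult_right_mono[OF emb_const_ge(1) supnorm_nonneg[OF f(1)]])
    then show ?thesis by (simp add: distrib_left)
  qed
  also have "\<dots> = emb_const * hnorm a b (Suc (Suc n)) \<alpha> f" unfolding hnorm_Suc[of a b "Suc n"] by simp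
  finally show ?case using fH by simp
qed

lemma Hoelder_embedding_iter: "f \<in> Hoelder a b (n + i) \<alpha> \<Longrightarrow>
   f \<in> Hoelder a b n \<alpha> \<and> hnorm a b n \<alpha> f \<le> emb_const ^ i * hnorm a b (n + i) \<alpha> f"
proof (induction i arbitrary: f)
  case 0 then show ?case by simp
next
  case (Suc i)
  have "f \<in> Hoelder a b (n + i) \<alpha>" "hnorm a b (n + i) \<alpha> f \<le> emb_const * hnorm a b (n + Suc i) \<alpha> f"
    using Hoelder_embedding[of f "n + i"] Suc.prems by auto
  moreover from Suc.IH[OF this(1)] have "f \<in> Hoelder a b n \<alpha>" "hnorm a b n \<alpha> f \<le> emb_const ^ i * hnorm a b (n + i) \<alpha> f" by auto
  moreover have "emb_const ^ i \<ge> 0" using emb_const_ge by simp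
  ultimately have "hnorm a b n \<alpha> f \<le> emb_const ^ i * (emb_const * hnorm a b (n + Suc i) \<alpha> f)"
    using mult_left_mono[of "hnorm a b (n + i) \<alpha> f" "emb_const * hnorm a b (n + Suc i) \<alpha> f" "emb_const ^ i"] by linarith
  then show ?case using \<open>f \<in> Hoelder a b n \<alpha>\<close> by (simp add: mult.left_commute)
qed

lemma hderiv_Hoelder: "f \<in> Hoelder a b (n + i) \<alpha> \<Longrightarrow>
   hderiv a b i f \<in> Hoelder a b n \<alpha> \<and> hnorm a b n \<alpha> (hderiv a b i f) \<le> hnorm a b (n + i) \<alpha> f"
proof (induction i arbitrary: f)
  case 0 then show ?case by simp
next
  case (Suc i)
  have f: "continuous_on {a..b} f" "hderiv a b 1 f \<in> Hoelder a b (n + i) \<alpha>"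
    using Suc.prems unfolding add_Suc_right Hoelder_Suc by auto
  have le: "hnorm a b (n + i) \<alpha> (hderiv a b 1 f) \<le> hnorm a b (n + Suc i) \<alpha> f"
    unfolding add_Suc_right hnorm_Suc using supnorm_nonneg[OF f(1)] by simp
  have e: "hderiv a b i (hderiv a b 1 f) = hderiv a b (Suc i) f" using hderiv_hderiv[of a b i 1 f] by simp
  show ?case using Suc.IH[OF f(2)] le unfolding e by auto
qed

lemma hderiv_Hoelder_bound: "f \<in> Hoelder a b (n + r) \<alpha> \<Longrightarrow> i \<le> r \<Longrightarrow>
   hderiv a b i f \<in> Hoelder a b n \<alpha> \<and> hnorm a b n \<alpha> (hderiv a b i f) \<le> emb_const ^ r * hnorm a b (n + r) \<alpha> f"
proof -
  assume f: "f \<in> Hoelder a b (n + r) \<alpha>" and i: "i \<le> r"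
  have f': "f \<in> Hoelder a b ((n + (r - i)) + i) \<alpha>" using f i by simp
  from hderiv_Hoelder[OF f'] have 1: "hderiv a b i f \<in> Hoelder a b (n + (r - i)) \<alpha>"
    "hnorm a b (n + (r - i)) \<alpha> (hderiv a b i f) \<le> hnorm a b (n + r) \<alpha> f" using i by auto
  from Hoelder_embedding_iter[OF 1(1)] have 2: "hderiv a b i f \<in> Hoelder a b n \<alpha>"
    "hnorm a b n \<alpha> (hderiv a b i f) \<le> emb_const ^ (r - i) * hnorm a b (n + (r - i)) \<alpha> (hderiv a b i f)" by auto
  have "emb_const ^ (r - i) \<le> emb_const ^ r" using emb_const_ge by (intro power_increasing) auto
  moreover have "0 \<le> hnorm a b (n + (r - i)) \<alpha> (hderiv a b i f)" using hnorm_nonneg[OF 1(1)] .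
  moreover have "0 \<le> emb_const ^ (r - i)" using emb_const_ge by simp
  moreover have "0 \<le> emb_const ^ r" using emb_const_ge by simp
  ultimately have "emb_const ^ (r - i) * hnorm a b (n + (r - i)) \<alpha> (hderiv a b i f) \<le> emb_const ^ r * hnorm a b (n + r) \<alpha> f"
    using 1(2) by (intro mult_mono) auto
  then show ?thesis using 2 by linarith
qed



lemma Hoelder_0_mult:
  assumes "f \<in> Hoelder a b 0 \<alpha>" "g \<in> Hoelder a b 0 \<alpha>"
  shows "(\<lambda>s. f s * g s) \<in> Hoelder a b 0 \<alpha> \<and>
    hnorm a b 0 \<alpha> (\<lambda>s. f s * g s) \<le> hnorm a b 0 \<alpha> f * hnorm a b 0 \<alpha> g"
proof -
  let ?h = "\<lambda>s. f s * g s"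
  have cf: "continuous_on {a..b} f" "bdd_above (hquot a b \<alpha> f)"
    and cg: "continuous_on {a..b} g" "bdd_above (hquot a b \<alpha> g)" using assms unfolding Hoelder_0 by auto
  define sf where "sf = supnorm a b f"
  define sg where "sg = supnorm a b g"
  define hf where "hf = Sup (hquot a b \<alpha> f)"
  define hg where "hg = Sup (hquot a b \<alpha> g)"
  have nn: "0 \<le> sf" "0 \<le> sg" "0 \<le> hf" "0 \<le> hg"
    unfolding sf_def sg_def hf_def hg_def using supnorm_nonneg cf cg Sup_hquot_nonneg by auto
  have ch: "continuous_on {a..b} ?h" using cf cg by (intro continuous_intros)
  have "cmod (?h t2 - ?h t1) \<le> (sf * hg + hf * sg) * (t2 - t1) powr \<alpha>"
    if t: "a \<le> t1" "t1 < t2" "t2 \<le> b" for t1 t2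
  proof -
    have "?h t2 - ?h t1 = f t2 * (g t2 - g t1) + (f t2 - f t1) * g t1" by (simp add: algebra_simps)
    hence "cmod (?h t2 - ?h t1) \<le> cmod (f t2) * cmod (g t2 - g t1) + cmod (f t2 - f t1) * cmod (g t1)"
      by (metis norm_mult norm_triangle_ineq)
    also have "\<dots> \<le> sf * (hg * (t2 - t1) powr \<alpha>) + (hf * (t2 - t1) powr \<alpha>) * sg"
    proof (intro add_mono mult_mono)
      show "cmod (f t2) \<le> sf" unfolding sf_def using norm_le_supnorm[OF cf(1)] t by auto
      show "cmod (g t1) \<le> sg" unfolding sg_def using norm_le_supnorm[OF cg(1)] t by auto
      show "cmod (g t2 - g t1) \<le> hg * (t2 - t1) powr \<alpha>" unfolding hg_def using norm_diff_le_Sup_hquot[OF cg(2) t] .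
      show "cmod (f t2 - f t1) \<le> hf * (t2 - t1) powr \<alpha>" unfolding hf_def using norm_diff_le_Sup_hquot[OF cf(2) t] .
    qed (use nn in auto)
    finally show ?thesis by (simp add: algebra_simps)
  qed
  then have hq: "bdd_above (hquot a b \<alpha> ?h) \<and> Sup (hquot a b \<alpha> ?h) \<le> sf * hg + hf * sg"
    by (rule Sup_hquot_le)
  have sh: "supnorm a b ?h \<le> sf * sg"
  proof (rule supnorm_le)
    fix t assume t: "t \<in> {a..b}"
    show "cmod (?h t) \<le> sf * sg" unfolding norm_mult sf_def sg_def
      using norm_le_supnorm[OF cf(1) t] norm_le_supnorm[OF cg(1) t] supnorm_nonneg[OF cf(1)] by (intro mult_mono) auto
  qed
  have "hnorm a b 0 \<alpha> ?h \<le> sf * sg + (sf * hg + hf * sg)" unfolding hnorm_0 using sh hq by linarith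
  also have "\<dots> \<le> (sf + hf) * (sg + hg)" using nn by (simp add: algebra_simps)
  finally have "hnorm a b 0 \<alpha> ?h \<le> hnorm a b 0 \<alpha> f * hnorm a b 0 \<alpha> g"
    unfolding hnorm_0 sf_def sg_def hf_def hg_def by simp
  moreover have "?h \<in> Hoelder a b 0 \<alpha>" using ch hq by (simp add: Hoelder_0)
  ultimately show ?thesis by simp
qed

lemma Hoelder_mult: "f \<in> Hoelder a b n \<alpha> \<Longrightarrow> g \<in> Hoelder a b n \<alpha> \<Longrightarrow>
  (\<lambda>s. f s * g s) \<in> Hoelder a b n \<alpha> \<and>
  hnorm a b n \<alpha> (\<lambda>s. f s * g s) \<le> (2 * emb_const) ^ n * hnorm a b n \<alpha> f * hnorm a b n \<alpha> g"
proof (induction n arbitrary: f g)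
  case 0
  then show ?case using Hoelder_0_mult by simp
next
  case (Suc n)
  let ?h = "\<lambda>s. f s * g s"
  let ?Df = "hderiv a b 1 f" and ?Dg = "hderiv a b 1 g"
  have f: "continuous_on {a..b} f" "\<And>t. t \<in> {a..b} \<Longrightarrow> (f has_vector_derivative ?Df t) (at t within {a..b})"
    "?Df \<in> Hoelder a b n \<alpha>" using Suc.prems(1) unfolding Hoelder_Suc by auto
  have g: "continuous_on {a..b} g" "\<And>t. t \<in> {a..b} \<Longrightarrow> (g has_vector_derivative ?Dg t) (at t within {a..b})"
    "?Dg \<in> Hoelder a b n \<alpha>" using Suc.prems(2) unfolding Hoelder_Suc by auto
  have fn: "f \<in> Hoelder a b n \<alpha>" "hnorm a b n \<alpha> f \<le> emb_const * hnorm a b (Suc n) \<alpha> f" using Hoelder_embedding[OF Suc.prems(1)] by auto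
  have gn: "g \<in> Hoelder a b n \<alpha>" "hnorm a b n \<alpha> g \<le> emb_const * hnorm a b (Suc n) \<alpha> g" using Hoelder_embedding[OF Suc.prems(2)] by auto
  let ?P1 = "\<lambda>s. f s * ?Dg s" and ?P2 = "\<lambda>s. ?Df s * g s"
  let ?h' = "\<lambda>s. ?P1 s + ?P2 s"
  have P1: "?P1 \<in> Hoelder a b n \<alpha>" "hnorm a b n \<alpha> ?P1 \<le> (2 * emb_const) ^ n * hnorm a b n \<alpha> f * hnorm a b n \<alpha> ?Dg"
    using Suc.IH[OF fn(1) g(3)] by auto
  have P2: "?P2 \<in> Hoelder a b n \<alpha>" "hnorm a b n \<alpha> ?P2 \<le> (2 * emb_const) ^ n * hnorm a b n \<alpha> ?Df * hnorm a b n \<alpha> g"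
    using Suc.IH[OF f(3) gn(1)] by auto
  have h': "?h' \<in> Hoelder a b n \<alpha>" "hnorm a b n \<alpha> ?h' \<le> hnorm a b n \<alpha> ?P1 + hnorm a b n \<alpha> ?P2"
    using Hoelder_add[OF P1(1) P2(1)] by auto
  have ch: "continuous_on {a..b} ?h" using f g by (intro continuous_intros)
  have dh: "(?h has_vector_derivative ?h' t) (at t within {a..b})" if "t \<in> {a..b}" for t
    using has_vector_derivative_mult[OF f(2)[OF that] g(2)[OF that]] by (simp add: add.commute)
  have D1: "hderiv a b 1 ?h t = ?h' t" if "t \<in> {a..b}" for t using hderiv_1_eq[OF that dh[OF that]] .
  have D1H: "hderiv a b 1 ?h \<in> Hoelder a b n \<alpha>" using Hoelder_cong[of a b "hderiv a b 1 ?h" ?h' n \<alpha>] D1 h'(1) by blast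
  have D1n: "hnorm a b n \<alpha> (hderiv a b 1 ?h) = hnorm a b n \<alpha> ?h'" using hnorm_cong[of a b "hderiv a b 1 ?h" ?h' n \<alpha>] D1 by blast
  have hH: "?h \<in> Hoelder a b (Suc n) \<alpha>" unfolding Hoelder_Suc using ch dh D1 D1H by auto
  define sf where "sf = supnorm a b f"
  define sg where "sg = supnorm a b g"
  define Df where "Df = hnorm a b n \<alpha> ?Df"
  define Dg where "Dg = hnorm a b n \<alpha> ?Dg"
  define Cn where "Cn = (2 * emb_const) ^ n"
  have F: "hnorm a b (Suc n) \<alpha> f = sf + Df" unfolding sf_def Df_def by (rule hnorm_Suc)
  have G: "hnorm a b (Suc n) \<alpha> g = sg + Dg" unfolding sg_def Dg_def by (rule hnorm_Suc)
  have nn: "0 \<le> sf" "0 \<le> sg" "0 \<le> Df" "0 \<le> Dg"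
    unfolding sf_def sg_def Df_def Dg_def using supnorm_nonneg f(1) g(1) hnorm_nonneg f(3) g(3) by auto
  have "1 \<le> Cn" unfolding Cn_def using emb_const_ge(1) by (intro one_le_power) simp
  then have Cn1: "1 \<le> Cn * emb_const" using mult_mono[OF _ emb_const_ge(1)] by fastforce
  have Cn0: "0 \<le> Cn" unfolding Cn_def using emb_const_ge by simp
  have sh: "supnorm a b ?h \<le> sf * sg"
  proof (rule supnorm_le)
    fix t assume t: "t \<in> {a..b}"
    show "cmod (?h t) \<le> sf * sg" unfolding norm_mult sf_def sg_def
      using norm_le_supnorm[OF f(1) t] norm_le_supnorm[OF g(1) t] supnorm_nonneg[OF f(1)] by (intro mult_mono) auto
  qed
  have "hnorm a b n \<alpha> ?h' \<le> Cn * (emb_const * (sf + Df)) * Dg + Cn * Df * (emb_const * (sg + Dg))"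
  proof -
    have "Cn * hnorm a b n \<alpha> f * Dg \<le> Cn * (emb_const * (sf + Df)) * Dg"
      using fn(2) F nn Cn0 by (intro mult_right_mono mult_left_mono) auto
    moreover have "Cn * Df * hnorm a b n \<alpha> g \<le> Cn * Df * (emb_const * (sg + Dg))"
      using gn(2) G nn Cn0 by (intro mult_left_mono) auto
    ultimately show ?thesis using h'(2) P1(2) P2(2) unfolding Cn_def Df_def Dg_def by linarith
  qed
  hence tot: "hnorm a b (Suc n) \<alpha> ?h \<le> sf * sg + Cn * emb_const * ((sf + Df) * Dg + Df * (sg + Dg))"
    unfolding hnorm_Suc[of a b n \<alpha> ?h] D1n using sh by (simp add: algebra_simps)
  have "1 * (sf * sg) \<le> Cn * emb_const * (sf * sg)" using mult_right_mono[OF Cn1, of "sf * sg"] nn by simp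
  hence "hnorm a b (Suc n) \<alpha> ?h \<le> Cn * emb_const * (sf * sg + (sf + Df) * Dg + Df * (sg + Dg))"
    using tot by (simp add: algebra_simps)
  also have "\<dots> \<le> Cn * emb_const * (2 * ((sf + Df) * (sg + Dg)))"
  proof (rule mult_left_mono)
    have "2 * ((sf + Df) * (sg + Dg)) - (sf * sg + (sf + Df) * Dg + Df * (sg + Dg)) = sf * sg + sf * Dg + Df * sg"
      by (simp add: algebra_simps)
    moreover have "0 \<le> sf * sg + sf * Dg + Df * sg" using nn by simp
    ultimately show "sf * sg + (sf + Df) * Dg + Df * (sg + Dg) \<le> 2 * ((sf + Df) * (sg + Dg))" by linarith
    show "0 \<le> Cn * emb_const" using Cn1 by simp
  qed
  also have "\<dots> = (2 * emb_const) ^ Suc n * hnorm a b (Suc n) \<alpha> f * hnorm a b (Suc n) \<alpha> g"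
    unfolding F G Cn_def by (simp add: algebra_simps)
  finally show ?case using hH by simp
qed



lemma uniformly_Cauchy_limit:
  fixes \<sigma> :: "nat \<Rightarrow> real \<Rightarrow> complex"
  assumes C: "\<And>e. e > 0 \<Longrightarrow> \<exists>K. \<forall>k\<ge>K. \<forall>l\<ge>K. \<forall>t\<in>{a..b}. cmod (\<sigma> k t - \<sigma> l t) \<le> e"
  shows "\<exists>g. (\<forall>t\<in>{a..b}. (\<lambda>k. \<sigma> k t) \<longlonglongrightarrow> g t) \<and> (\<forall>e>0. \<exists>K. \<forall>k\<ge>K. \<forall>t\<in>{a..b}. cmod (\<sigma> k t - g t) \<le> e)"
proof -
  define g where "g t = lim (\<lambda>k. \<sigma> k t)" for t
  have conv: "(\<lambda>k. \<sigma> k t) \<longlonglongrightarrow> g t" if t: "t \<in> {a..b}" for t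
  proof -
    have "Cauchy (\<lambda>k. \<sigma> k t)"
      unfolding Cauchy_iff
    proof (intro allI impI)
      fix e :: real assume "e > 0"
      then obtain K where "\<forall>k\<ge>K. \<forall>l\<ge>K. \<forall>t\<in>{a..b}. cmod (\<sigma> k t - \<sigma> l t) \<le> e / 2" using C[of "e/2"] by auto
      then have "\<forall>m\<ge>K. \<forall>n\<ge>K. norm (\<sigma> m t - \<sigma> n t) < e" using t \<open>e > 0\<close>
        by (smt (verit, best) field_sum_of_halves)
      then show "\<exists>M. \<forall>m\<ge>M. \<forall>n\<ge>M. norm (\<sigma> m t - \<sigma> n t) < e" by blast
    qed
    then show ?thesis unfolding g_def using Cauchy_convergent_iff convergent_LIMSEQ_iff by blast
  qed
  have bnd: "\<exists>K. \<forall>k\<ge>K. \<forall>t\<in>{a..b}. cmod (\<sigma> k t - g t) \<le> e" if e: "e > 0" for e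
  proof -
    obtain K where K: "\<forall>k\<ge>K. \<forall>l\<ge>K. \<forall>t\<in>{a..b}. cmod (\<sigma> k t - \<sigma> l t) \<le> e" using C[OF e] by blast
    have "cmod (\<sigma> k t - g t) \<le> e" if k: "k \<ge> K" and t: "t \<in> {a..b}" for k t
    proof (rule tendsto_upperbound)
      show "(\<lambda>l. cmod (\<sigma> k t - \<sigma> l t)) \<longlonglongrightarrow> cmod (\<sigma> k t - g t)"
        by (intro tendsto_norm tendsto_diff tendsto_const conv[OF t])
      show "\<forall>\<^sub>F l in sequentially. cmod (\<sigma> k t - \<sigma> l t) \<le> e"
        unfolding eventually_sequentially using K k t by blast
    qed simp
    then show ?thesis by blast
  qed
  show ?thesis using conv bnd by blast
qed

lemma Hoelder_Cauchy_uniformly_Cauchy: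
  fixes \<sigma> :: "nat \<Rightarrow> real \<Rightarrow> complex"
  assumes s: "\<And>k. \<sigma> k \<in> Hoelder a b n \<alpha>"
    and C: "\<And>e. e > 0 \<Longrightarrow> \<exists>K. \<forall>k\<ge>K. \<forall>l\<ge>K. hnorm a b n \<alpha> (\<lambda>t. \<sigma> k t - \<sigma> l t) < e"
    and e: "e > 0"
  shows "\<exists>K. \<forall>k\<ge>K. \<forall>l\<ge>K. \<forall>t\<in>{a..b}. cmod (\<sigma> k t - \<sigma> l t) \<le> e"
proof -
  obtain K where K: "\<forall>k\<ge>K. \<forall>l\<ge>K. hnorm a b n \<alpha> (\<lambda>t. \<sigma> k t - \<sigma> l t) < e" using C[OF e] by blast
  have "cmod (\<sigma> k t - \<sigma> l t) \<le> e" if "k \<ge> K" "l \<ge> K" "t \<in> {a..b}" for k l t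
  proof -
    have H: "(\<lambda>t. \<sigma> k t - \<sigma> l t) \<in> Hoelder a b n \<alpha>" using Hoelder_diff[OF s s] by blast
    have "cmod (\<sigma> k t - \<sigma> l t) \<le> supnorm a b (\<lambda>t. \<sigma> k t - \<sigma> l t)" using norm_le_supnorm[OF Hoelder_continuous_on[OF H] that(3)] .
    also have "\<dots> \<le> hnorm a b n \<alpha> (\<lambda>t. \<sigma> k t - \<sigma> l t)" using supnorm_le_hnorm[OF H] .
    finally show ?thesis using K that by force
  qed
  then show ?thesis by blast
qed

lemma Hoelder_0_complete:
  fixes \<sigma> :: "nat \<Rightarrow> real \<Rightarrow> complex"
  assumes "\<And>k. \<sigma> k \<in> Hoelder a b 0 \<alpha>"
    and "\<And>e. e > 0 \<Longrightarrow> \<exists>K. \<forall>k\<ge>K. \<forall>l\<ge>K. hnorm a b 0 \<alpha> (\<lambda>t. \<sigma> k t - \<sigma> l t) < e"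
  shows "\<exists>g\<in>Hoelder a b 0 \<alpha>. \<forall>e>0. \<exists>K. \<forall>k\<ge>K. hnorm a b 0 \<alpha> (\<lambda>t. \<sigma> k t - g t) < e"
proof -
  obtain g where g: "\<And>t. t \<in> {a..b} \<Longrightarrow> (\<lambda>k. \<sigma> k t) \<longlonglongrightarrow> g t"
    "\<And>e. e > 0 \<Longrightarrow> \<exists>K. \<forall>k\<ge>K. \<forall>t\<in>{a..b}. cmod (\<sigma> k t - g t) \<le> e"
    using uniformly_Cauchy_limit[OF Hoelder_Cauchy_uniformly_Cauchy[OF assms(1) assms(2)]] by blast
  have gc: "continuous_on {a..b} g"
  proof (rule uniform_limit_theorem)
    show "\<forall>\<^sub>F k in sequentially. continuous_on {a..b} (\<sigma> k)" using Hoelder_continuous_on[OF assms(1)] by simp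
    show "uniform_limit {a..b} \<sigma> g sequentially"
    proof (rule uniform_limitI)
      fix e :: real assume "e > 0"
      then obtain K where "\<forall>k\<ge>K. \<forall>t\<in>{a..b}. cmod (\<sigma> k t - g t) \<le> e / 2" using g(2)[of "e/2"] by auto
      then show "\<forall>\<^sub>F k in sequentially. \<forall>t\<in>{a..b}. dist (\<sigma> k t) (g t) < e"
        unfolding eventually_sequentially dist_norm using \<open>e > 0\<close> by force
    qed
  qed simp
  have claim: "\<exists>K. \<forall>k\<ge>K. (\<lambda>t. \<sigma> k t - g t) \<in> Hoelder a b 0 \<alpha> \<and> hnorm a b 0 \<alpha> (\<lambda>t. \<sigma> k t - g t) < e"
    if e: "e > 0" for e
  proof -
    obtain K1 where K1: "\<forall>k\<ge>K1. \<forall>l\<ge>K1. hnorm a b 0 \<alpha> (\<lambda>t. \<sigma> k t - \<sigma> l t) < e / 4" using assms(2)[of "e/4"] e by auto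
    obtain K2 where K2: "\<forall>k\<ge>K2. \<forall>t\<in>{a..b}. cmod (\<sigma> k t - g t) \<le> e / 4" using g(2)[of "e/4"] e by auto
    have "(\<lambda>t. \<sigma> k t - g t) \<in> Hoelder a b 0 \<alpha> \<and> hnorm a b 0 \<alpha> (\<lambda>t. \<sigma> k t - g t) < e"
      if k: "k \<ge> max K1 K2" for k
    proof -
      let ?d = "\<lambda>t. \<sigma> k t - g t"
      have hq: "cmod (?d t2 - ?d t1) \<le> (e / 4) * (t2 - t1) powr \<alpha>" if t: "a \<le> t1" "t1 < t2" "t2 \<le> b" for t1 t2
      proof (rule tendsto_upperbound)
        show "(\<lambda>l. cmod ((\<sigma> k t2 - \<sigma> l t2) - (\<sigma> k t1 - \<sigma> l t1))) \<longlonglongrightarrow> cmod (?d t2 - ?d t1)"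
          using t by (intro tendsto_norm tendsto_diff tendsto_const g(1)) auto
        show "\<forall>\<^sub>F l in sequentially. cmod ((\<sigma> k t2 - \<sigma> l t2) - (\<sigma> k t1 - \<sigma> l t1)) \<le> e / 4 * (t2 - t1) powr \<alpha>"
          unfolding eventually_sequentially
        proof (intro exI[of _ K1] allI impI)
          fix l assume l: "l \<ge> K1"
          have H: "(\<lambda>t. \<sigma> k t - \<sigma> l t) \<in> Hoelder a b 0 \<alpha>" using Hoelder_diff[OF assms(1) assms(1)] by blast
          have bd: "bdd_above (hquot a b \<alpha> (\<lambda>t. \<sigma> k t - \<sigma> l t))" using H unfolding Hoelder_0 by (rule conjunct2)
          have "cmod ((\<sigma> k t2 - \<sigma> l t2) - (\<sigma> k t1 - \<sigma> l t1)) \<le> Sup (hquot a b \<alpha> (\<lambda>t. \<sigma> k t - \<sigma> l t)) * (t2 - t1) powr \<alpha>"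
            using norm_diff_le_Sup_hquot[OF bd t] by simp
          also have "Sup (hquot a b \<alpha> (\<lambda>t. \<sigma> k t - \<sigma> l t)) \<le> e / 4"
          proof -
            have "Sup (hquot a b \<alpha> (\<lambda>t. \<sigma> k t - \<sigma> l t)) \<le> hnorm a b 0 \<alpha> (\<lambda>t. \<sigma> k t - \<sigma> l t)"
              unfolding hnorm_0 using supnorm_nonneg[OF Hoelder_continuous_on[OF H]] by simp
            then show ?thesis using K1 k l by force
          qed
          hence "Sup (hquot a b \<alpha> (\<lambda>t. \<sigma> k t - \<sigma> l t)) * (t2 - t1) powr \<alpha> \<le> e / 4 * (t2 - t1) powr \<alpha>"
            by (intro mult_right_mono) auto
          finally show "cmod ((\<sigma> k t2 - \<sigma> l t2) - (\<sigma> k t1 - \<sigma> l t1)) \<le> e / 4 * (t2 - t1) powr \<alpha>" .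
        qed
      qed simp
      then have hq2: "bdd_above (hquot a b \<alpha> ?d) \<and> Sup (hquot a b \<alpha> ?d) \<le> e / 4" by (rule Sup_hquot_le)
      have sd: "supnorm a b ?d \<le> e / 4" using K2 k by (intro supnorm_le) auto
      have dc: "continuous_on {a..b} ?d" using Hoelder_continuous_on[OF assms(1)] gc by (intro continuous_intros)
      have "?d \<in> Hoelder a b 0 \<alpha>" using dc hq2 by (simp add: Hoelder_0)
      moreover have "hnorm a b 0 \<alpha> ?d < e" unfolding hnorm_0 using hq2 sd e by linarith
      ultimately show ?thesis by blast
    qed
    then show ?thesis by blast
  qed
  obtain K where K: "\<forall>k\<ge>K. (\<lambda>t. \<sigma> k t - g t) \<in> Hoelder a b 0 \<alpha> \<and> hnorm a b 0 \<alpha> (\<lambda>t. \<sigma> k t - g t) < 1"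
    using claim[of 1] by auto
  have "(\<lambda>t. \<sigma> K t - (\<sigma> K t - g t)) \<in> Hoelder a b 0 \<alpha>" using Hoelder_diff[OF assms(1)] K by blast
  hence gH: "g \<in> Hoelder a b 0 \<alpha>" by simp
  show ?thesis using gH claim by blast
qed

lemma has_vector_derivative_uniform_limit:
  fixes \<sigma> \<sigma>' :: "nat \<Rightarrow> real \<Rightarrow> complex"
  assumes deriv: "\<And>k t. t \<in> {a..b} \<Longrightarrow> (\<sigma> k has_vector_derivative \<sigma>' k t) (at t within {a..b})"
    and lim: "\<And>t. t \<in> {a..b} \<Longrightarrow> (\<lambda>k. \<sigma> k t) \<longlonglongrightarrow> g t"
    and unif: "\<And>e. e > 0 \<Longrightarrow> \<exists>K. \<forall>k\<ge>K. \<forall>t\<in>{a..b}. cmod (\<sigma>' k t - g' t) < e"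
    and x: "x \<in> {a..b}"
  shows "(g has_vector_derivative g' x) (at x within {a..b})"
proof -
  have "\<exists>GG. \<forall>x\<in>{a..b}. (\<lambda>k. \<sigma> k x) \<longlonglongrightarrow> GG x \<and> (GG has_derivative (\<lambda>h. h *\<^sub>R g' x)) (at x within {a..b})"
  proof (rule has_derivative_sequence[of "{a..b}" \<sigma> "\<lambda>k x h. h *\<^sub>R \<sigma>' k x" "\<lambda>x h. h *\<^sub>R g' x" a "g a"])
    show "convex {a..b}" by simp
    show "\<And>k x. x \<in> {a..b} \<Longrightarrow> (\<sigma> k has_derivative (\<lambda>h. h *\<^sub>R \<sigma>' k x)) (at x within {a..b})"
      using deriv unfolding has_vector_derivative_def by blast
    show "\<forall>\<^sub>F k in sequentially. \<forall>x\<in>{a..b}. \<forall>h. norm (h *\<^sub>R \<sigma>' k x - h *\<^sub>R g' x) \<le> e * norm h"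
      if e: "e > 0" for e
    proof -
      obtain K where K: "\<forall>k\<ge>K. \<forall>t\<in>{a..b}. cmod (\<sigma>' k t - g' t) < e" using unif[OF e] by blast
      have "norm (h *\<^sub>R \<sigma>' k x - h *\<^sub>R g' x) \<le> e * norm h" if "k \<ge> K" "x \<in> {a..b}" for k x h
      proof -
        have "norm (h *\<^sub>R \<sigma>' k x - h *\<^sub>R g' x) = \<bar>h\<bar> * cmod (\<sigma>' k x - g' x)"
          by (simp add: scaleR_diff_right[symmetric])
        also have "\<dots> \<le> \<bar>h\<bar> * e" using K that by (intro mult_left_mono) (auto simp: less_imp_le)
        finally show ?thesis by (simp add: mult.commute)
      qed
      then show ?thesis unfolding eventually_sequentially by blast
    qed
    show "a \<in> {a..b}" using ab by simp
    show "(\<lambda>k. \<sigma> k a) \<longlonglongrightarrow> g a" using lim ab by simp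
  qed
then obtain GG where GG: "\<forall>x\<in>{a..b}. (\<lambda>k. \<sigma> k x) \<longlonglongrightarrow> GG x \<and> (GG has_derivative (\<lambda>h. h *\<^sub>R g' x)) (at x within {a..b})"
    by blast
  have "GG y = g y" if "y \<in> {a..b}" for y using GG lim that LIMSEQ_unique by blast
  moreover have "(GG has_vector_derivative g' x) (at x within {a..b})"
    using GG x unfolding has_vector_derivative_def by blast
  ultimately show ?thesis using has_vector_derivative_transform[OF x, of g GG] by simp
qed

lemma Hoelder_complete:
  fixes \<sigma> :: "nat \<Rightarrow> real \<Rightarrow> complex"
  assumes "\<And>k. \<sigma> k \<in> Hoelder a b n \<alpha>"
    and "\<And>e. e > 0 \<Longrightarrow> \<exists>K. \<forall>k\<ge>K. \<forall>l\<ge>K. hnorm a b n \<alpha> (\<lambda>t. \<sigma> k t - \<sigma> l t) < e"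
  shows "\<exists>g\<in>Hoelder a b n \<alpha>. \<forall>e>0. \<exists>K. \<forall>k\<ge>K. hnorm a b n \<alpha> (\<lambda>t. \<sigma> k t - g t) < e"
  using assms
proof (induction n arbitrary: \<sigma>)
  case 0
  then show ?case by (rule Hoelder_0_complete)
next
  case (Suc n)
  let ?D = "\<lambda>k. hderiv a b 1 (\<sigma> k)"
  have s: "continuous_on {a..b} (\<sigma> k)" "\<And>t. t \<in> {a..b} \<Longrightarrow> (\<sigma> k has_vector_derivative ?D k t) (at t within {a..b})"
    "?D k \<in> Hoelder a b n \<alpha>" for k using Suc.prems(1)[of k] unfolding Hoelder_Suc by auto
  have DC: "\<exists>K. \<forall>k\<ge>K. \<forall>l\<ge>K. hnorm a b n \<alpha> (\<lambda>t. ?D k t - ?D l t) < e" if e: "e > 0" for e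
  proof -
    obtain K where K: "\<forall>k\<ge>K. \<forall>l\<ge>K. hnorm a b (Suc n) \<alpha> (\<lambda>t. \<sigma> k t - \<sigma> l t) < e" using Suc.prems(2)[OF e] by blast
    have "hnorm a b n \<alpha> (\<lambda>t. ?D k t - ?D l t) \<le> hnorm a b (Suc n) \<alpha> (\<lambda>t. \<sigma> k t - \<sigma> l t)" for k l
    proof -
      have H: "(\<lambda>t. \<sigma> k t - \<sigma> l t) \<in> Hoelder a b (Suc n) \<alpha>" using Hoelder_diff[OF Suc.prems(1) Suc.prems(1)] by blast
      have "hnorm a b n \<alpha> (\<lambda>t. ?D k t - ?D l t) = hnorm a b n \<alpha> (hderiv a b 1 (\<lambda>t. \<sigma> k t - \<sigma> l t))"
        by (rule hnorm_cong) (use hderiv_diff[OF Suc.prems(1) Suc.prems(1), of 1] in auto)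
      also have "\<dots> \<le> hnorm a b (Suc n) \<alpha> (\<lambda>t. \<sigma> k t - \<sigma> l t)"
        unfolding hnorm_Suc[of a b n \<alpha> "\<lambda>t. \<sigma> k t - \<sigma> l t"] using supnorm_nonneg[OF Hoelder_continuous_on[OF H]] by simp
      finally show ?thesis .
    qed
    then show ?thesis using K by (meson le_less_trans)
  qed
  obtain G' where G': "G' \<in> Hoelder a b n \<alpha>" "\<And>e. e > 0 \<Longrightarrow> \<exists>K. \<forall>k\<ge>K. hnorm a b n \<alpha> (\<lambda>t. ?D k t - G' t) < e"
    using Suc.IH[OF s(3) DC] by blast
  obtain g where g: "\<And>t. t \<in> {a..b} \<Longrightarrow> (\<lambda>k. \<sigma> k t) \<longlonglongrightarrow> g t"
    "\<And>e. e > 0 \<Longrightarrow> \<exists>K. \<forall>k\<ge>K. \<forall>t\<in>{a..b}. cmod (\<sigma> k t - g t) \<le> e"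
    using uniformly_Cauchy_limit[OF Hoelder_Cauchy_uniformly_Cauchy[OF Suc.prems(1) Suc.prems(2)]] by blast
  have Dunif: "\<exists>K. \<forall>k\<ge>K. \<forall>t\<in>{a..b}. cmod (?D k t - G' t) < e" if e: "e > 0" for e
  proof -
    obtain K where K: "\<forall>k\<ge>K. hnorm a b n \<alpha> (\<lambda>t. ?D k t - G' t) < e" using G'(2)[OF e] by blast
    have "cmod (?D k t - G' t) < e" if "k \<ge> K" "t \<in> {a..b}" for k t
    proof -
      have H: "(\<lambda>t. ?D k t - G' t) \<in> Hoelder a b n \<alpha>" using Hoelder_diff[OF s(3) G'(1)] by blast
      have "cmod (?D k t - G' t) \<le> supnorm a b (\<lambda>t. ?D k t - G' t)" using norm_le_supnorm[OF Hoelder_continuous_on[OF H] that(2)] .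
      also have "\<dots> \<le> hnorm a b n \<alpha> (\<lambda>t. ?D k t - G' t)" using supnorm_le_hnorm[OF H] .
      finally show ?thesis using K that by force
    qed
    then show ?thesis by blast
  qed
  have gd: "(g has_vector_derivative G' x) (at x within {a..b})" if x: "x \<in> {a..b}" for x
    by (rule has_vector_derivative_uniform_limit[OF s(2) g(1) Dunif x])
  have gc: "continuous_on {a..b} g" using continuous_on_vector_derivative[OF gd] .
  have Dg: "hderiv a b 1 g t = G' t" if "t \<in> {a..b}" for t using hderiv_1_eq[OF that gd[OF that]] .
  have DgH: "hderiv a b 1 g \<in> Hoelder a b n \<alpha>" using Hoelder_cong[of a b "hderiv a b 1 g" G' n \<alpha>] Dg G'(1) by blast
  have gH: "g \<in> Hoelder a b (Suc n) \<alpha>" unfolding Hoelder_Suc using gc gd Dg DgH by auto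
  have "\<exists>K. \<forall>k\<ge>K. hnorm a b (Suc n) \<alpha> (\<lambda>t. \<sigma> k t - g t) < e" if e: "e > 0" for e
  proof -
    obtain K1 where K1: "\<forall>k\<ge>K1. hnorm a b n \<alpha> (\<lambda>t. ?D k t - G' t) < e / 2" using G'(2)[of "e/2"] e by auto
    obtain K2 where K2: "\<forall>k\<ge>K2. \<forall>t\<in>{a..b}. cmod (\<sigma> k t - g t) \<le> e / 4" using g(2)[of "e/4"] e by auto
    have "hnorm a b (Suc n) \<alpha> (\<lambda>t. \<sigma> k t - g t) < e" if k: "k \<ge> max K1 K2" for k
    proof -
      have "hnorm a b n \<alpha> (hderiv a b 1 (\<lambda>t. \<sigma> k t - g t)) = hnorm a b n \<alpha> (\<lambda>t. ?D k t - G' t)"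
        by (rule hnorm_cong) (use hderiv_diff[OF Suc.prems(1) gH, of 1] Dg in auto)
      moreover have "supnorm a b (\<lambda>t. \<sigma> k t - g t) \<le> e / 4" using K2 k by (intro supnorm_le) auto
      moreover have "hnorm a b n \<alpha> (\<lambda>t. ?D k t - G' t) < e / 2" using K1 k by auto
      ultimately show ?thesis unfolding hnorm_Suc using e by linarith
    qed
    then show ?thesis by blast
  qed
  then show ?case using gH by blast
qed



lemma Hoelder_zero: "(\<lambda>t. 0) \<in> Hoelder a b n \<alpha> \<and> hnorm a b n \<alpha> (\<lambda>t. 0) = 0"
proof (induction n)
  case 0
  have hq: "hquot a b \<alpha> (\<lambda>t. 0) \<subseteq> {0}" unfolding hquot_def by auto
  hence hq': "hquot a b \<alpha> (\<lambda>t. 0) = {0}" using hquot_nonempty by blast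
  have "supnorm a b (\<lambda>t. 0) = 0" unfolding supnorm_def using ab by simp
  then show ?case unfolding Hoelder_0 hnorm_0 hq' by simp
next
  case (Suc n)
  have d: "((\<lambda>t. 0::complex) has_vector_derivative 0) (at t within {a..b})" for t by simp
  have D: "hderiv a b 1 (\<lambda>t. 0) t = 0" if "t \<in> {a..b}" for t using hderiv_1_eq[OF that d] .
  have "hderiv a b 1 (\<lambda>t. 0) \<in> Hoelder a b n \<alpha>" using Hoelder_cong[of a b "hderiv a b 1 (\<lambda>t. 0)" "\<lambda>t. 0" n \<alpha>] D Suc by blast
  moreover have "hnorm a b n \<alpha> (hderiv a b 1 (\<lambda>t. 0)) = 0" using hnorm_cong[of a b "hderiv a b 1 (\<lambda>t. 0)" "\<lambda>t. 0" n \<alpha>] D Suc by simp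
  moreover have "supnorm a b (\<lambda>t. 0) = 0" unfolding supnorm_def using ab by simp
  ultimately show ?case unfolding Hoelder_Suc hnorm_Suc using D d by (simp add: continuous_on_const)
qed

lemma Hoelder_sum: "finite F \<Longrightarrow> (\<And>x. x \<in> F \<Longrightarrow> f x \<in> Hoelder a b n \<alpha>) \<Longrightarrow>
  (\<lambda>t. \<Sum>x\<in>F. f x t) \<in> Hoelder a b n \<alpha> \<and> hnorm a b n \<alpha> (\<lambda>t. \<Sum>x\<in>F. f x t) \<le> (\<Sum>x\<in>F. hnorm a b n \<alpha> (f x))"
proof (induction F rule: finite_induct)
  case empty then show ?case using Hoelder_zero by simp
next
  case (insert x F)
  have 1: "(\<lambda>t. \<Sum>x\<in>F. f x t) \<in> Hoelder a b n \<alpha>" "hnorm a b n \<alpha> (\<lambda>t. \<Sum>x\<in>F. f x t) \<le> (\<Sum>x\<in>F. hnorm a b n \<alpha> (f x))"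
    using insert by auto
  have 2: "f x \<in> Hoelder a b n \<alpha>" using insert by auto
  show ?case using Hoelder_add[OF 2 1(1)] 1(2) insert(1,2) by simp
qed

definition zero_ext :: "(real \<Rightarrow> 'v::zero) \<Rightarrow> real \<Rightarrow> 'v" where
  "zero_ext y = (\<lambda>t. if t \<in> {a..b} then y t else 0)"

text \<open>Hoelder functions are determined by their values on \<open>[a,b]\<close> only; normalising them to vanish
  outside makes \<open>hnormV\<close> a norm on \<open>HoelderV0\<close>.\<close>

definition HoelderV0 :: "nat \<Rightarrow> (real \<Rightarrow> complex^'m::finite) set" where
  "HoelderV0 N = {y \<in> HoelderV a b N \<alpha>. \<forall>t. t \<notin> {a..b} \<longrightarrow> y t = 0}"

lemma zero_ext_eq: "t \<in> {a..b} \<Longrightarrow> zero_ext y t = y t"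
  unfolding zero_ext_def by simp

lemma HoelderV_cong:
  assumes "\<And>t. t \<in> {a..b} \<Longrightarrow> y t = z t"
  shows "y \<in> HoelderV a b N \<alpha> \<longleftrightarrow> z \<in> HoelderV a b N \<alpha>" "hnormV a b N \<alpha> y = hnormV a b N \<alpha> z"
proof -
  have "(\<lambda>t. y t $ i) \<in> Hoelder a b N \<alpha> \<longleftrightarrow> (\<lambda>t. z t $ i) \<in> Hoelder a b N \<alpha>" for i
    using Hoelder_cong[of a b "\<lambda>t. y t $ i" "\<lambda>t. z t $ i" N \<alpha>] assms by simp
  then show "y \<in> HoelderV a b N \<alpha> \<longleftrightarrow> z \<in> HoelderV a b N \<alpha>" unfolding HoelderV_def by simp
  have "hnorm a b N \<alpha> (\<lambda>t. y t $ i) = hnorm a b N \<alpha> (\<lambda>t. z t $ i)" for i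
    using hnorm_cong[of a b "\<lambda>t. y t $ i" "\<lambda>t. z t $ i" N \<alpha>] assms by simp
  then show "hnormV a b N \<alpha> y = hnormV a b N \<alpha> z" unfolding hnormV_def by simp
qed

lemma zero_ext_HoelderV0: "y \<in> HoelderV a b N \<alpha> \<Longrightarrow> zero_ext y \<in> HoelderV0 N"
  unfolding HoelderV0_def using HoelderV_cong(1)[of "zero_ext y" y N] zero_ext_eq by (auto simp: zero_ext_def)

lemma hnormV_zero_ext: "hnormV a b N \<alpha> (zero_ext y) = hnormV a b N \<alpha> y"
  using HoelderV_cong(2)[of "zero_ext y" y N] zero_ext_eq by auto

lemma HoelderV0_eqI: "y \<in> HoelderV0 N \<Longrightarrow> z \<in> HoelderV0 N \<Longrightarrow> (\<And>t. t \<in> {a..b} \<Longrightarrow> y t = z t) \<Longrightarrow> y = z"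
  unfolding HoelderV0_def by (auto simp: fun_eq_iff) (metis)

lemma HoelderV_lincomb:
  assumes "y \<in> HoelderV a b N \<alpha>" "z \<in> HoelderV a b N \<alpha>"
  shows "(\<lambda>t. c *s y t + d *s z t) \<in> HoelderV a b N \<alpha> \<and>
    hnormV a b N \<alpha> (\<lambda>t. c *s y t + d *s z t) \<le> cmod c * hnormV a b N \<alpha> y + cmod d * hnormV a b N \<alpha> z"
proof -
  have H: "(\<lambda>t. c * y t $ i + d * z t $ i) \<in> Hoelder a b N \<alpha> \<and>
     hnorm a b N \<alpha> (\<lambda>t. c * y t $ i + d * z t $ i) \<le> cmod c * hnorm a b N \<alpha> (\<lambda>t. y t $ i) + cmod d * hnorm a b N \<alpha> (\<lambda>t. z t $ i)" for i
    using Hoelder_lincomb[of "\<lambda>t. y t $ i" N "\<lambda>t. z t $ i" c d] assms unfolding HoelderV_def by auto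
  have "(\<lambda>t. c *s y t + d *s z t) \<in> HoelderV a b N \<alpha>" unfolding HoelderV_def using H by simp
  moreover have "hnormV a b N \<alpha> (\<lambda>t. c *s y t + d *s z t) \<le> cmod c * hnormV a b N \<alpha> y + cmod d * hnormV a b N \<alpha> z"
    unfolding hnormV_def using H by (simp add: sum_distrib_left sum.distrib[symmetric] sum_mono)
  ultimately show ?thesis by blast
qed

lemma hnormV_nonneg: "y \<in> HoelderV a b N \<alpha> \<Longrightarrow> 0 \<le> hnormV a b N \<alpha> y"
  unfolding hnormV_def HoelderV_def using hnorm_nonneg by (simp add: sum_nonneg)

lemma hnorm_component_le_hnormV: "y \<in> HoelderV a b N \<alpha> \<Longrightarrow> hnorm a b N \<alpha> (\<lambda>t. y t $ i) \<le> hnormV a b N \<alpha> y"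
  unfolding hnormV_def HoelderV_def using hnorm_nonneg
  by (intro member_le_sum) auto

lemma hnormV_scale: "y \<in> HoelderV a b N \<alpha> \<Longrightarrow> hnormV a b N \<alpha> (\<lambda>t. c *s y t) = cmod c * hnormV a b N \<alpha> y"
  unfolding hnormV_def HoelderV_def using hnorm_scale[of _ N c] by (simp add: sum_distrib_left)

lemma HoelderV0_complete:
  fixes \<sigma> :: "nat \<Rightarrow> real \<Rightarrow> complex^'m::finite"
  assumes s: "\<And>k. \<sigma> k \<in> HoelderV0 N"
    and C: "\<And>e. e > 0 \<Longrightarrow> \<exists>K. \<forall>k\<ge>K. \<forall>l\<ge>K. hnormV a b N \<alpha> (\<sigma> k - \<sigma> l) < e"
  shows "\<exists>x\<in>HoelderV0 N. \<forall>e>0. \<exists>K. \<forall>k\<ge>K. hnormV a b N \<alpha> (\<sigma> k - x) < e"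
proof -
  have sH: "\<And>k. \<sigma> k \<in> HoelderV a b N \<alpha>" using s unfolding HoelderV0_def by auto
  have "\<exists>g\<in>Hoelder a b N \<alpha>. \<forall>e>0. \<exists>K. \<forall>k\<ge>K. hnorm a b N \<alpha> (\<lambda>t. \<sigma> k t $ i - g t) < e" for i
  proof (rule Hoelder_complete)
    show "\<And>k. (\<lambda>t. \<sigma> k t $ i) \<in> Hoelder a b N \<alpha>" using sH unfolding HoelderV_def by auto
    fix e :: real assume "e > 0"
    then obtain K where K: "\<forall>k\<ge>K. \<forall>l\<ge>K. hnormV a b N \<alpha> (\<sigma> k - \<sigma> l) < e" using C by blast
    have "hnorm a b N \<alpha> (\<lambda>t. \<sigma> k t $ i - \<sigma> l t $ i) \<le> hnormV a b N \<alpha> (\<sigma> k - \<sigma> l)" for k l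
    proof -
      have "(\<sigma> k - \<sigma> l) = (\<lambda>t. 1 *s \<sigma> k t + (-1) *s \<sigma> l t)" by (simp add: fun_eq_iff)
      hence "(\<sigma> k - \<sigma> l) \<in> HoelderV a b N \<alpha>" using HoelderV_lincomb[of "\<sigma> k" N "\<sigma> l" 1 "-1"] sH by simp
      from hnorm_component_le_hnormV[OF this, of i] show ?thesis by simp
    qed
    then show "\<exists>K. \<forall>k\<ge>K. \<forall>l\<ge>K. hnorm a b N \<alpha> (\<lambda>t. \<sigma> k t $ i - \<sigma> l t $ i) < e"
      using K by (meson le_less_trans)
  qed
  then obtain G where G: "\<And>i. G i \<in> Hoelder a b N \<alpha>"
    "\<And>i e. e > 0 \<Longrightarrow> \<exists>K. \<forall>k\<ge>K. hnorm a b N \<alpha> (\<lambda>t. \<sigma> k t $ i - G i t) < e"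
    by metis
  define g where "g = zero_ext (\<lambda>t. \<chi> i. G i t)"
  have gH0: "(\<lambda>t. \<chi> i. G i t) \<in> HoelderV a b N \<alpha>" unfolding HoelderV_def using G(1) by simp
  have gX: "g \<in> HoelderV0 N" unfolding g_def by (rule zero_ext_HoelderV0[OF gH0])
  have "\<exists>K. \<forall>k\<ge>K. hnormV a b N \<alpha> (\<sigma> k - g) < e" if e: "e > 0" for e
  proof -
    define e' where "e' = e / real CARD('m)"
    have e': "e' > 0" unfolding e'_def using e by simp
    have "\<forall>i. \<exists>K. \<forall>k\<ge>K. hnorm a b N \<alpha> (\<lambda>t. \<sigma> k t $ i - G i t) < e'" using G(2)[OF e'] by blast
    then obtain Kf where Kf: "\<And>i k. k \<ge> Kf i \<Longrightarrow> hnorm a b N \<alpha> (\<lambda>t. \<sigma> k t $ i - G i t) < e'" by metis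
    define K where "K = Max (range Kf)"
    have "hnormV a b N \<alpha> (\<sigma> k - g) < e" if k: "k \<ge> K" for k
    proof -
      have "hnorm a b N \<alpha> (\<lambda>t. (\<sigma> k - g) t $ i) = hnorm a b N \<alpha> (\<lambda>t. \<sigma> k t $ i - G i t)" for i
        by (rule hnorm_cong) (simp add: g_def zero_ext_eq)
      moreover have "hnorm a b N \<alpha> (\<lambda>t. \<sigma> k t $ i - G i t) < e'" for i
      proof -
        have "Kf i \<le> K" unfolding K_def by (simp add: Max_ge)
        then show ?thesis using Kf k by simp
      qed
      ultimately have "hnormV a b N \<alpha> (\<sigma> k - g) < (\<Sum>i\<in>(UNIV::'m set). e')"
        unfolding hnormV_def by (intro sum_strict_mono) auto
      also have "\<dots> = e" unfolding e'_def by simp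
      finally show ?thesis .
    qed
    then show ?thesis by blast
  qed
  then show "\<exists>x\<in>HoelderV0 N. \<forall>e>0. \<exists>K. \<forall>k\<ge>K. hnormV a b N \<alpha> (\<sigma> k - x) < e" using gX by blast
qed

lemma banach_set_HoelderV0: "banach_set (HoelderV0 N :: (real \<Rightarrow> complex^'m::finite) set) (hnormV a b N \<alpha>)"
proof
  show "0 \<in> (HoelderV0 N :: (real \<Rightarrow> complex^'m) set)"
    unfolding HoelderV0_def HoelderV_def using Hoelder_zero by simp
next
  fix x y :: "real \<Rightarrow> complex^'m" assume x: "x \<in> HoelderV0 N" and y: "y \<in> HoelderV0 N"
  have xy: "x \<in> HoelderV a b N \<alpha>" "y \<in> HoelderV a b N \<alpha>" using x y unfolding HoelderV0_def by auto
  have e: "x + y = (\<lambda>t. 1 *s x t + 1 *s y t)" by (simp add: fun_eq_iff)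
  show "x + y \<in> HoelderV0 N" using HoelderV_lincomb[OF xy, of 1 1] x y unfolding HoelderV0_def e by simp
  show "hnormV a b N \<alpha> (x + y) \<le> hnormV a b N \<alpha> x + hnormV a b N \<alpha> y"
    using HoelderV_lincomb[OF xy, of 1 1] unfolding e by simp
next
  fix x :: "real \<Rightarrow> complex^'m" and c :: real assume x: "x \<in> HoelderV0 N"
  have xH: "x \<in> HoelderV a b N \<alpha>" using x unfolding HoelderV0_def by auto
  have e: "c *\<^sub>R x = (\<lambda>t. complex_of_real c *s x t + 0 *s x t)" by (simp add: fun_eq_iff scaleR_vec_eq_smult)
  show "c *\<^sub>R x \<in> HoelderV0 N" using HoelderV_lincomb[OF xH xH, of "complex_of_real c" 0] x unfolding HoelderV0_def e by simp
  have e2: "c *\<^sub>R x = (\<lambda>t. complex_of_real c *s x t)" by (simp add: fun_eq_iff scaleR_vec_eq_smult)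
  show "hnormV a b N \<alpha> (c *\<^sub>R x) = \<bar>c\<bar> * hnormV a b N \<alpha> x" unfolding e2 using hnormV_scale[OF xH] by simp
next
  fix x :: "real \<Rightarrow> complex^'m" assume x: "x \<in> HoelderV0 N" and z: "hnormV a b N \<alpha> x = 0"
  have xH: "\<And>i. (\<lambda>t. x t $ i) \<in> Hoelder a b N \<alpha>" using x unfolding HoelderV0_def HoelderV_def by auto
  have "\<forall>i\<in>UNIV. hnorm a b N \<alpha> (\<lambda>t. x t $ i) = 0"
    using z unfolding hnormV_def by (subst (asm) sum_nonneg_eq_0_iff) (auto intro: hnorm_nonneg xH)
  hence "x t $ i = 0" if "t \<in> {a..b}" for t i using hnorm_eq_0_imp[OF xH] that by blast
  hence "x t = 0" if "t \<in> {a..b}" for t using that by (simp add: vec_eq_iff)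
  then show "x = 0" using x unfolding HoelderV0_def by (auto simp: fun_eq_iff)
next
  fix \<sigma> :: "nat \<Rightarrow> real \<Rightarrow> complex^'m"
  assume "\<And>k. \<sigma> k \<in> HoelderV0 N"
    and "\<And>e. e > 0 \<Longrightarrow> \<exists>K. \<forall>k\<ge>K. \<forall>l\<ge>K. hnormV a b N \<alpha> (\<sigma> k - \<sigma> l) < e"
  then show "\<exists>x\<in>HoelderV0 N. \<forall>e>0. \<exists>K. \<forall>k\<ge>K. hnormV a b N \<alpha> (\<sigma> k - x) < e"
    by (rule HoelderV0_complete)
qed



definition coeff_op :: "nat \<Rightarrow> (nat \<Rightarrow> real \<Rightarrow> complex^'m::finite^'m) \<Rightarrow> (real \<Rightarrow> complex^'m) \<Rightarrow> real \<Rightarrow> complex^'m" where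
  "coeff_op r M y t = (\<Sum>j\<in>{1..r}. M (r - j) t *v hderivV a b (r - j) y t)"

lemma Lop_eq_coeff_op: "Lop a b r A y t = hderivV a b r y t + coeff_op r A y t"
  unfolding Lop_def coeff_op_def ..

lemma coeff_op_component: "coeff_op r M y t $ i = (\<Sum>j\<in>{1..r}. \<Sum>l\<in>UNIV. M (r - j) t $ i $ l * hderiv a b (r - j) (\<lambda>s. y s $ l) t)"
  unfolding coeff_op_def by (simp add: matrix_vector_mult_def hderivV_def)

lemma Lop_component: "Lop a b r A y t $ i = hderiv a b r (\<lambda>s. y s $ i) t +
   (\<Sum>j\<in>{1..r}. \<Sum>l\<in>UNIV. A (r - j) t $ i $ l * hderiv a b (r - j) (\<lambda>s. y s $ l) t)"
  unfolding Lop_eq_coeff_op using coeff_op_component by (simp add: hderivV_def)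

lemma hderivV_HoelderV:
  assumes y: "y \<in> HoelderV a b (n + r) \<alpha>" and j: "j \<le> r"
  shows "hderivV a b j y \<in> HoelderV a b n \<alpha> \<and> hnormV a b n \<alpha> (hderivV a b j y) \<le> emb_const ^ r * hnormV a b (n + r) \<alpha> y"
proof -
  have e: "(\<lambda>t. hderivV a b j y t $ i) = hderiv a b j (\<lambda>s. y s $ i)" for i by (simp add: hderivV_def fun_eq_iff)
  have D: "hderiv a b j (\<lambda>s. y s $ i) \<in> Hoelder a b n \<alpha> \<and> hnorm a b n \<alpha> (hderiv a b j (\<lambda>s. y s $ i)) \<le> emb_const ^ r * hnorm a b (n + r) \<alpha> (\<lambda>s. y s $ i)" for i
    using hderiv_Hoelder_bound[of "\<lambda>s. y s $ i" n r j] y j unfolding HoelderV_def by auto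
  show ?thesis unfolding HoelderV_def hnormV_def mem_Collect_eq e using D by (simp add: sum_distrib_left sum_mono)
qed

lemma coeff_op_HoelderV:
  assumes y: "y \<in> HoelderV a b (n + r) \<alpha>" and M: "\<And>k. k < r \<Longrightarrow> M k \<in> HoelderM a b n \<alpha>"
  shows "coeff_op r M y \<in> HoelderV a b n \<alpha> \<and>
    hnormV a b n \<alpha> (coeff_op r M y) \<le> (2 * emb_const) ^ n * emb_const ^ r * (\<Sum>j\<in>{1..r}. hnormM a b n \<alpha> (M (r - j))) * hnormV a b (n + r) \<alpha> y"
proof -
  define C where "C = (2 * emb_const) ^ n * emb_const ^ r"
  have C0: "0 \<le> C" unfolding C_def using emb_const_ge by simp
  define Y where "Y = hnormV a b (n + r) \<alpha> y"
  have Y0: "0 \<le> Y" unfolding Y_def using hnormV_nonneg[OF y] .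
  let ?m = "\<lambda>j i l. (\<lambda>t. M (r - j) t $ i $ l)"
  let ?d = "\<lambda>j l. hderiv a b (r - j) (\<lambda>s. y s $ l)"
  have mH: "?m j i l \<in> Hoelder a b n \<alpha>" if "j \<in> {1..r}" for j i l
    using M[of "r - j"] that unfolding HoelderM_def by auto
  have dH: "?d j l \<in> Hoelder a b n \<alpha> \<and> hnorm a b n \<alpha> (?d j l) \<le> emb_const ^ r * hnorm a b (n + r) \<alpha> (\<lambda>s. y s $ l)" if "j \<in> {1..r}" for j l
    using hderiv_Hoelder_bound[of "\<lambda>s. y s $ l" n r "r - j"] y unfolding HoelderV_def by auto
  have T: "(\<lambda>t. ?m j i l t * ?d j l t) \<in> Hoelder a b n \<alpha> \<and>
      hnorm a b n \<alpha> (\<lambda>t. ?m j i l t * ?d j l t) \<le> C * hnorm a b n \<alpha> (?m j i l) * Y" if j: "j \<in> {1..r}" for j i l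
  proof -
    have P: "(\<lambda>t. ?m j i l t * ?d j l t) \<in> Hoelder a b n \<alpha>"
      "hnorm a b n \<alpha> (\<lambda>t. ?m j i l t * ?d j l t) \<le> (2 * emb_const) ^ n * hnorm a b n \<alpha> (?m j i l) * hnorm a b n \<alpha> (?d j l)"
      using Hoelder_mult[OF mH[OF j] conjunct1[OF dH[OF j]]] by auto
    have "hnorm a b n \<alpha> (?d j l) \<le> emb_const ^ r * Y"
    proof -
      have "hnorm a b (n + r) \<alpha> (\<lambda>s. y s $ l) \<le> Y" unfolding Y_def by (rule hnorm_component_le_hnormV[OF y])
      then show ?thesis using dH[OF j, of l] emb_const_ge by (meson mult_left_mono order_trans zero_le_power order.trans zero_le_one)
    qed
    moreover have "0 \<le> (2 * emb_const) ^ n * hnorm a b n \<alpha> (?m j i l)" using emb_const_ge hnorm_nonneg[OF mH[OF j]] by simp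
    ultimately have "(2 * emb_const) ^ n * hnorm a b n \<alpha> (?m j i l) * hnorm a b n \<alpha> (?d j l) \<le> (2 * emb_const) ^ n * hnorm a b n \<alpha> (?m j i l) * (emb_const ^ r * Y)"
      by (intro mult_left_mono) auto
    also have "\<dots> = C * hnorm a b n \<alpha> (?m j i l) * Y" unfolding C_def by (simp add: algebra_simps)
    finally show ?thesis using P by simp
  qed
  have comp: "(\<lambda>t. coeff_op r M y t $ i) = (\<lambda>t. \<Sum>j\<in>{1..r}. \<Sum>l\<in>UNIV. ?m j i l t * ?d j l t)" for i
    by (simp add: coeff_op_component fun_eq_iff)
  have inner: "(\<lambda>t. \<Sum>l\<in>UNIV. ?m j i l t * ?d j l t) \<in> Hoelder a b n \<alpha> \<and>
      hnorm a b n \<alpha> (\<lambda>t. \<Sum>l\<in>UNIV. ?m j i l t * ?d j l t) \<le> (\<Sum>l\<in>UNIV. C * hnorm a b n \<alpha> (?m j i l) * Y)"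
    if j: "j \<in> {1..r}" for j i
  proof -
    have "(\<lambda>t. \<Sum>l\<in>UNIV. ?m j i l t * ?d j l t) \<in> Hoelder a b n \<alpha> \<and>
      hnorm a b n \<alpha> (\<lambda>t. \<Sum>l\<in>UNIV. ?m j i l t * ?d j l t) \<le> (\<Sum>l\<in>UNIV. hnorm a b n \<alpha> (\<lambda>t. ?m j i l t * ?d j l t))"
      using Hoelder_sum[of UNIV "\<lambda>l t. ?m j i l t * ?d j l t" n] T[OF j] by auto
    moreover have "(\<Sum>l\<in>UNIV. hnorm a b n \<alpha> (\<lambda>t. ?m j i l t * ?d j l t)) \<le> (\<Sum>l\<in>UNIV. C * hnorm a b n \<alpha> (?m j i l) * Y)"
      using T[OF j] by (intro sum_mono) auto
    ultimately show ?thesis by linarith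
  qed
  have outer: "(\<lambda>t. coeff_op r M y t $ i) \<in> Hoelder a b n \<alpha> \<and>
      hnorm a b n \<alpha> (\<lambda>t. coeff_op r M y t $ i) \<le> (\<Sum>j\<in>{1..r}. \<Sum>l\<in>UNIV. C * hnorm a b n \<alpha> (?m j i l) * Y)" for i
  proof -
    have "(\<lambda>t. \<Sum>j\<in>{1..r}. \<Sum>l\<in>UNIV. ?m j i l t * ?d j l t) \<in> Hoelder a b n \<alpha> \<and>
      hnorm a b n \<alpha> (\<lambda>t. \<Sum>j\<in>{1..r}. \<Sum>l\<in>UNIV. ?m j i l t * ?d j l t) \<le> (\<Sum>j\<in>{1..r}. hnorm a b n \<alpha> (\<lambda>t. \<Sum>l\<in>UNIV. ?m j i l t * ?d j l t))"
      using Hoelder_sum[of "{1..r}" "\<lambda>j t. \<Sum>l\<in>UNIV. ?m j i l t * ?d j l t" n] inner by auto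
    moreover have "(\<Sum>j\<in>{1..r}. hnorm a b n \<alpha> (\<lambda>t. \<Sum>l\<in>UNIV. ?m j i l t * ?d j l t)) \<le> (\<Sum>j\<in>{1..r}. \<Sum>l\<in>UNIV. C * hnorm a b n \<alpha> (?m j i l) * Y)"
      using inner by (intro sum_mono) auto
    ultimately show ?thesis unfolding comp by linarith
  qed
  have QH: "coeff_op r M y \<in> HoelderV a b n \<alpha>" unfolding HoelderV_def using outer by blast
  have "hnormV a b n \<alpha> (coeff_op r M y) \<le> (\<Sum>i\<in>UNIV. \<Sum>j\<in>{1..r}. \<Sum>l\<in>UNIV. C * hnorm a b n \<alpha> (?m j i l) * Y)"
    unfolding hnormV_def using outer by (intro sum_mono) auto
  also have "\<dots> = C * (\<Sum>j\<in>{1..r}. \<Sum>i\<in>UNIV. \<Sum>l\<in>UNIV. hnorm a b n \<alpha> (?m j i l)) * Y"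
    by (subst sum.swap) (simp add: sum_distrib_left sum_distrib_right mult.commute mult.left_commute)
  also have "(\<Sum>j\<in>{1..r}. \<Sum>i\<in>UNIV. \<Sum>l\<in>UNIV. hnorm a b n \<alpha> (?m j i l)) = (\<Sum>j\<in>{1..r}. hnormM a b n \<alpha> (M (r - j)))"
    unfolding hnormM_def ..
  finally show ?thesis using QH unfolding C_def Y_def by simp
qed



lemma Lop_cong: "(\<And>s. s \<in> {a..b} \<Longrightarrow> y s = z s) \<Longrightarrow> t \<in> {a..b} \<Longrightarrow> Lop a b r A y t = Lop a b r A z t"
  unfolding vec_eq_iff Lop_component using hderiv_cong[of a b "\<lambda>s. y s $ _" "\<lambda>s. z s $ _"] by simp

lemma Lop_lincomb:
  assumes y: "y \<in> HoelderV a b (n + r) \<alpha>" and z: "z \<in> HoelderV a b (n + r) \<alpha>" and t: "t \<in> {a..b}"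
  shows "Lop a b r A (\<lambda>s. c *s y s + d *s z s) t = c *s Lop a b r A y t + d *s Lop a b r A z t"
proof -
  have D: "hderiv a b j (\<lambda>s. (c *s y s + d *s z s) $ l) t = c * hderiv a b j (\<lambda>s. y s $ l) t + d * hderiv a b j (\<lambda>s. z s $ l) t"
    if "j \<le> r" for j l
    using hderiv_lincomb[of "\<lambda>s. y s $ l" "n + r" "\<lambda>s. z s $ l" j t c d] y z t that unfolding HoelderV_def by simp
  have D': "hderiv a b j (\<lambda>s. c * y s $ l + d * z s $ l) t = c * hderiv a b j (\<lambda>s. y s $ l) t + d * hderiv a b j (\<lambda>s. z s $ l) t"
    if "j \<le> r" for j l using D[OF that, of l] by simp
  show ?thesis unfolding vec_eq_iff
    by (simp add: Lop_component D' sum_distrib_left sum.distrib algebra_simps)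
qed

lemma Lop_diff:
  assumes y: "y \<in> HoelderV a b (n + r) \<alpha>" and z: "z \<in> HoelderV a b (n + r) \<alpha>" and t: "t \<in> {a..b}"
  shows "Lop a b r A (\<lambda>s. y s - z s) t = Lop a b r A y t - Lop a b r A z t"
  using Lop_lincomb[OF y z t, of A 1 "-1"] by (simp add: vec_eq_iff)

lemma Lop_add:
  assumes y: "y \<in> HoelderV a b (n + r) \<alpha>" and z: "z \<in> HoelderV a b (n + r) \<alpha>" and t: "t \<in> {a..b}"
  shows "Lop a b r A (\<lambda>s. y s + z s) t = Lop a b r A y t + Lop a b r A z t"
  using Lop_lincomb[OF y z t, of A 1 1] by (simp add: vec_eq_iff)

lemma Lop_scale:
  assumes y: "y \<in> HoelderV a b (n + r) \<alpha>" and t: "t \<in> {a..b}"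
  shows "Lop a b r A (\<lambda>s. c *s y s) t = c *s Lop a b r A y t"
  using Lop_lincomb[OF y y t, of A c 0] by (simp add: vec_eq_iff)

lemma Lop_diff_coeffs: "Lop a b r A1 y t - Lop a b r A2 y t = coeff_op r (\<lambda>k t. A1 k t - A2 k t) y t"
  unfolding vec_eq_iff by (simp add: Lop_component coeff_op_component sum_subtractf[symmetric] algebra_simps)

lemma HoelderM_diff: "M1 \<in> HoelderM a b n \<alpha> \<Longrightarrow> M2 \<in> HoelderM a b n \<alpha> \<Longrightarrow> (\<lambda>t. M1 t - M2 t) \<in> HoelderM a b n \<alpha>"
  unfolding HoelderM_def using Hoelder_diff by simp

lemma Lop_HoelderV:
  assumes y: "y \<in> HoelderV a b (n + r) \<alpha>" and Areg: "\<And>k. k < r \<Longrightarrow> A k \<in> HoelderM a b n \<alpha>"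
  shows "Lop a b r A y \<in> HoelderV a b n \<alpha> \<and>
    hnormV a b n \<alpha> (Lop a b r A y) \<le> (emb_const ^ r + (2 * emb_const) ^ n * emb_const ^ r * (\<Sum>j\<in>{1..r}. hnormM a b n \<alpha> (A (r - j)))) * hnormV a b (n + r) \<alpha> y"
proof -
  have e: "Lop a b r A y = (\<lambda>t. 1 *s hderivV a b r y t + 1 *s coeff_op r A y t)"
    by (simp add: fun_eq_iff Lop_eq_coeff_op)
  have 1: "hderivV a b r y \<in> HoelderV a b n \<alpha>" "hnormV a b n \<alpha> (hderivV a b r y) \<le> emb_const ^ r * hnormV a b (n + r) \<alpha> y"
    using hderivV_HoelderV[OF y, of r] by auto
  have 2: "coeff_op r A y \<in> HoelderV a b n \<alpha>"
    "hnormV a b n \<alpha> (coeff_op r A y) \<le> (2 * emb_const) ^ n * emb_const ^ r * (\<Sum>j\<in>{1..r}. hnormM a b n \<alpha> (A (r - j))) * hnormV a b (n + r) \<alpha> y"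
    using coeff_op_HoelderV[of y n r A, OF y Areg] by auto
  show ?thesis unfolding e using HoelderV_lincomb[OF 1(1) 2(1), of 1 1] 1(2) 2(2) by (simp add: distrib_right)
qed

lemma HoelderV0_imp_HoelderV: "x \<in> HoelderV0 N \<Longrightarrow> x \<in> HoelderV a b N \<alpha>"
  unfolding HoelderV0_def by simp

lemma HoelderV_smult: "y \<in> HoelderV a b N \<alpha> \<Longrightarrow> (\<lambda>t. c *s y t) \<in> HoelderV a b N \<alpha>"
  using HoelderV_lincomb[of y N y c 0] by (simp add: vec_eq_iff)

lemma HoelderV_diff:
  "y \<in> HoelderV a b N \<alpha> \<Longrightarrow> z \<in> HoelderV a b N \<alpha> \<Longrightarrow> (\<lambda>t. y t - z t) \<in> HoelderV a b N \<alpha>"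
  using HoelderV_lincomb[of y N z 1 "-1"] by (simp add: vec_eq_iff)

lemma linear_on_zero_ext_Lop:
  fixes A :: "nat \<Rightarrow> real \<Rightarrow> complex^'m::finite^'m"
  shows "linear_on (HoelderV0 (n + r)) (\<lambda>x. zero_ext (Lop a b r A x))"
proof (rule linear_onI)
  fix x y :: "real \<Rightarrow> complex^'m" assume x: "x \<in> HoelderV0 (n + r)" and y: "y \<in> HoelderV0 (n + r)"
  show "zero_ext (Lop a b r A (x + y)) = zero_ext (Lop a b r A x) + zero_ext (Lop a b r A y)"
  proof
    fix t
    show "zero_ext (Lop a b r A (x + y)) t = (zero_ext (Lop a b r A x) + zero_ext (Lop a b r A y)) t"
    proof (cases "t \<in> {a..b}")
      case True
      then show ?thesis using Lop_add[OF HoelderV0_imp_HoelderV[OF x] HoelderV0_imp_HoelderV[OF y] True, of A]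
        by (simp add: zero_ext_eq plus_fun_def)
    qed (simp add: zero_ext_def del: atLeastAtMost_iff)
  qed
next
  fix c :: real and x :: "real \<Rightarrow> complex^'m" assume x: "x \<in> HoelderV0 (n + r)"
  have e: "c *\<^sub>R x = (\<lambda>s. complex_of_real c *s x s)" by (simp add: fun_eq_iff scaleR_vec_eq_smult)
  show "zero_ext (Lop a b r A (c *\<^sub>R x)) = c *\<^sub>R zero_ext (Lop a b r A x)"
  proof
    fix t
    show "zero_ext (Lop a b r A (c *\<^sub>R x)) t = (c *\<^sub>R zero_ext (Lop a b r A x)) t"
    proof (cases "t \<in> {a..b}")
      case True
      then show ?thesis using Lop_scale[OF HoelderV0_imp_HoelderV[OF x] True, of A "complex_of_real c"]
        unfolding e by (simp add: zero_ext_eq scaleR_vec_eq_smult)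
    qed (simp add: zero_ext_def del: atLeastAtMost_iff)
  qed
qed

lemma hnormV_zero_ext_Lop_diff:
  assumes x: "x \<in> HoelderV a b (n + r) \<alpha>"
    and A1: "\<And>k. k < r \<Longrightarrow> A1 k \<in> HoelderM a b n \<alpha>" and A2: "\<And>k. k < r \<Longrightarrow> A2 k \<in> HoelderM a b n \<alpha>"
  shows "hnormV a b n \<alpha> (zero_ext (Lop a b r A1 x) - zero_ext (Lop a b r A2 x))
    \<le> (2 * emb_const) ^ n * emb_const ^ r * (\<Sum>j\<in>{1..r}. hnormM a b n \<alpha> (\<lambda>t. A1 (r - j) t - A2 (r - j) t))
      * hnormV a b (n + r) \<alpha> x"
proof -
  have "hnormV a b n \<alpha> (zero_ext (Lop a b r A1 x) - zero_ext (Lop a b r A2 x))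
      = hnormV a b n \<alpha> (coeff_op r (\<lambda>k t. A1 k t - A2 k t) x)"
    by (rule HoelderV_cong(2)) (simp add: zero_ext_def Lop_diff_coeffs)
  also have "\<dots> \<le> (2 * emb_const) ^ n * emb_const ^ r * (\<Sum>j\<in>{1..r}. hnormM a b n \<alpha> (\<lambda>t. A1 (r - j) t - A2 (r - j) t))
      * hnormV a b (n + r) \<alpha> x"
    using coeff_op_HoelderV[OF x, of "\<lambda>k t. A1 k t - A2 k t"] HoelderM_diff[OF A1 A2] by auto
  finally show ?thesis .
qed

end

section \<open>The boundary-value problem\<close>

lemma is_cnormD:
  fixes N :: "complex^'k::finite \<Rightarrow> real"
  assumes N: "is_cnorm N"
  shows "N 0 = 0" "\<And>x. 0 \<le> N x" "\<And>x y. N (x + y) \<le> N x + N y" "\<And>c x. N (c *s x) = cmod c * N x"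
    "\<And>x. N x = 0 \<Longrightarrow> x = 0"
proof -
  have tri: "\<And>x y. N (x + y) \<le> N x + N y" and hom: "\<And>c x. N (c *s x) = cmod c * N x"
    and z: "\<And>x. N x = 0 \<Longrightarrow> x = 0" using N unfolding is_cnorm_def by auto
  show "N 0 = 0" using hom[of 0 0] by simp
  show "\<And>x y. N (x + y) \<le> N x + N y" by (rule tri)
  show "\<And>c x. N (c *s x) = cmod c * N x" by (rule hom)
  show "\<And>x. N x = 0 \<Longrightarrow> x = 0" by (rule z)
  fix x
  have "N (x + (-1) *s x) \<le> N x + N ((-1) *s x)" by (rule tri)
  moreover have "x + (-1) *s x = 0" by (simp add: vec_eq_iff)
  moreover have "N ((-1) *s x) = N x" using hom[of "-1" x] by simp
  moreover have "N 0 = 0" using hom[of 0 0] by simp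
  ultimately show "0 \<le> N x" by simp
qed

lemma is_cnorm_sum:
  fixes N :: "complex^'k::finite \<Rightarrow> real"
  assumes N: "is_cnorm N"
  shows "finite F \<Longrightarrow> N (\<Sum>i\<in>F. f i) \<le> (\<Sum>i\<in>F. N (f i))"
proof (induction F rule: finite_induct)
  case empty then show ?case using is_cnormD(1)[OF N] by simp
next
  case (insert x F)
  then show ?case using is_cnormD(3)[OF N, of "f x" "\<Sum>i\<in>F. f i"] by simp
qed

lemma is_cnorm_le_norm:
  fixes N :: "complex^'k::finite \<Rightarrow> real"
  assumes N: "is_cnorm N"
  shows "\<exists>C\<ge>0. \<forall>x. N x \<le> C * norm x"
proof -
  define C where "C = (\<Sum>i\<in>UNIV. N (axis i (1::complex)))"
  have C0: "C \<ge> 0" unfolding C_def using is_cnormD(2)[OF N] by (simp add: sum_nonneg)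
  have "N x \<le> C * norm x" for x
  proof -
    have "N x = N (\<Sum>i\<in>UNIV. (x$i) *s axis i 1)" using basis_expansion[of x] by simp
    also have "\<dots> \<le> (\<Sum>i\<in>UNIV. N ((x$i) *s axis i 1))" by (rule is_cnorm_sum[OF N]) simp
    also have "\<dots> = (\<Sum>i\<in>UNIV. cmod (x$i) * N (axis i 1))" using is_cnormD(4)[OF N] by simp
    also have "\<dots> \<le> (\<Sum>i\<in>UNIV. norm x * N (axis i 1))"
      by (intro sum_mono mult_right_mono Finite_Cartesian_Product.norm_nth_le is_cnormD(2)[OF N])
    also have "\<dots> = C * norm x" unfolding C_def by (simp add: sum_distrib_left mult.commute)
    finally show ?thesis .
  qed
  then show ?thesis using C0 by blast
qed

lemma norm_le_is_cnorm:
  fixes N :: "complex^'k::finite \<Rightarrow> real"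
  assumes N: "is_cnorm N"
  shows "\<exists>C>0. \<forall>x. norm x \<le> C * N x"
proof -
  obtain C1 where C1: "C1 \<ge> 0" "\<And>x. N x \<le> C1 * norm x" using is_cnorm_le_norm[OF N] by blast
  have Nsc: "N (r *\<^sub>R x) = \<bar>r\<bar> * N x" for r x
    using is_cnormD(4)[OF N, of "complex_of_real r" x] scaleR_vec_eq_smult[of r x] by simp
  have lip: "\<bar>N x - N y\<bar> \<le> C1 * norm (x - y)" for x y
  proof -
    have "N x \<le> N y + N (x - y)" using is_cnormD(3)[OF N, of y "x - y"] by simp
    moreover have "N y \<le> N x + N (y - x)" using is_cnormD(3)[OF N, of x "y - x"] by simp
    moreover have "N (y - x) = N (x - y)" using Nsc[of "-1" "x - y"] by simp
    ultimately show ?thesis using C1(2)[of "x - y"] by linarith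
  qed
  have cont: "continuous_on (sphere 0 1) N"
  proof (rule continuous_onI)
    fix x e assume "x \<in> sphere (0::complex^'k) 1" "(e::real) > 0"
    show "\<exists>d>0. \<forall>x'\<in>sphere 0 1. dist x' x < d \<longrightarrow> dist (N x') (N x) \<le> e"
    proof (intro exI[of _ "e / (C1 + 1)"] conjI ballI impI)
      show "e / (C1 + 1) > 0" using \<open>e > 0\<close> C1(1) by simp
      fix x' assume "x' \<in> sphere (0::complex^'k) 1" "dist x' x < e / (C1 + 1)"
      then have "(C1 + 1) * norm (x' - x) \<le> e" using C1(1) by (simp add: dist_norm field_simps)
      moreover have "C1 * norm (x' - x) \<le> (C1 + 1) * norm (x' - x)" by (simp add: distrib_right)
      ultimately show "dist (N x') (N x) \<le> e" using lip[of x' x] unfolding dist_real_def by linarith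
    qed
  qed
  obtain i :: 'k where True by blast
  define x0 where "x0 = axis i (1::complex)"
  have x0: "x0 \<noteq> 0" unfolding x0_def by (simp add: axis_eq_0_iff)
  have "(1 / norm x0) *\<^sub>R x0 \<in> sphere 0 1" using x0 by simp
  hence ne: "sphere (0::complex^'k) 1 \<noteq> {}" by blast
  obtain xm where xm: "xm \<in> sphere 0 1" "\<And>y. y \<in> sphere 0 1 \<Longrightarrow> N xm \<le> N y"
    using continuous_attains_inf[OF compact_sphere ne cont] by blast
  have m0: "N xm > 0"
  proof -
    have "xm \<noteq> 0" using xm(1) by auto
    then show ?thesis using is_cnormD(2,5)[OF N, of xm] by force
  qed
  have "norm x \<le> (1 / N xm) * N x" for x
  proof (cases "x = 0")
    case True then show ?thesis using is_cnormD(1)[OF N] by simp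
  next
    case False
    have "(1 / norm x) *\<^sub>R x \<in> sphere 0 1" using False by simp
    hence "N xm \<le> N ((1 / norm x) *\<^sub>R x)" using xm(2) by blast
    also have "\<dots> = N x / norm x" using Nsc by simp
    finally have "N xm * norm x \<le> N x" using False by (simp add: field_simps)
    then show ?thesis using m0 by (simp add: field_simps)
  qed
  then show ?thesis using m0 by (intro exI[of _ "1 / N xm"]) auto
qed

locale hoelder_bvp = hoelder_interval a b \<alpha>
  for a b \<alpha> :: real +
  fixes n r :: nat
    and A :: "real \<Rightarrow> nat \<Rightarrow> real \<Rightarrow> complex^'m::finite^'m"
    and B :: "real \<Rightarrow> (real \<Rightarrow> complex^'m) \<Rightarrow> complex^'k::finite"
    and \<epsilon>0 :: real
  assumes eps0: "0 < \<epsilon>0"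
    and A_reg: "\<forall>\<epsilon>\<in>{0..<\<epsilon>0}. \<forall>k<r. A \<epsilon> k \<in> HoelderM a b n \<alpha>"
    and B_local: "\<forall>\<epsilon>\<in>{0..<\<epsilon>0}. \<forall>y z. (\<forall>t\<in>{a..b}. y t = z t) \<longrightarrow> B \<epsilon> y = B \<epsilon> z"
    and B_add: "\<forall>\<epsilon>\<in>{0..<\<epsilon>0}. \<forall>y\<in>HoelderV a b (n + r) \<alpha>. \<forall>z\<in>HoelderV a b (n + r) \<alpha>.
                  B \<epsilon> (\<lambda>t. y t + z t) = B \<epsilon> y + B \<epsilon> z"
    and B_hom: "\<forall>\<epsilon>\<in>{0..<\<epsilon>0}. \<forall>y\<in>HoelderV a b (n + r) \<alpha>. \<forall>c::complex.
                  B \<epsilon> (\<lambda>t. c *s y t) = c *s B \<epsilon> y"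
    and B_cont: "\<forall>\<epsilon>\<in>{0..<\<epsilon>0}. \<exists>K. \<forall>y\<in>HoelderV a b (n + r) \<alpha>.
                  norm (B \<epsilon> y) \<le> K * hnormV a b (n + r) \<alpha> y"
    and H0: "\<forall>y\<in>HoelderV a b (n + r) \<alpha>.
               (\<forall>t\<in>{a..b}. Lop a b r (A 0) y t = 0) \<and> B 0 y = 0 \<longrightarrow> (\<forall>t\<in>{a..b}. y t = 0)"
    and HI: "\<forall>k<r. ((\<lambda>\<epsilon>. hnormM a b n \<alpha> (\<lambda>t. A \<epsilon> k t - A 0 k t)) \<longlongrightarrow> 0) (at_right 0)"
    and HII: "\<forall>y\<in>HoelderV a b (n + r) \<alpha>. ((\<lambda>\<epsilon>. B \<epsilon> y) \<longlongrightarrow> B 0 y) (at_right 0)"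
    and solvable: "\<forall>f\<in>HoelderV a b n \<alpha>. \<forall>c. \<exists>y\<in>HoelderV a b (n + r) \<alpha>.
                     (\<forall>t\<in>{a..b}. Lop a b r (A 0) y t = f t) \<and> B 0 y = c"
begin

lemma A_regular: "\<epsilon> \<in> {0..<\<epsilon>0} \<Longrightarrow> k < r \<Longrightarrow> A \<epsilon> k \<in> HoelderM a b n \<alpha>"
  using A_reg by blast

lemma linear_on_B: "\<epsilon> \<in> {0..<\<epsilon>0} \<Longrightarrow> linear_on (HoelderV0 (n + r)) (B \<epsilon>)"
proof (rule linear_onI)
  fix x y :: "real \<Rightarrow> complex^'m"
  assume "\<epsilon> \<in> {0..<\<epsilon>0}" and x: "x \<in> HoelderV0 (n + r)" and y: "y \<in> HoelderV0 (n + r)"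
  then show "B \<epsilon> (x + y) = B \<epsilon> x + B \<epsilon> y"
    unfolding plus_fun_def using B_add HoelderV0_imp_HoelderV[OF x] HoelderV0_imp_HoelderV[OF y] by blast
next
  fix c :: real and x :: "real \<Rightarrow> complex^'m" assume "\<epsilon> \<in> {0..<\<epsilon>0}" and x: "x \<in> HoelderV0 (n + r)"
  moreover have "c *\<^sub>R x = (\<lambda>s. complex_of_real c *s x s)" by (simp add: fun_eq_iff scaleR_vec_eq_smult)
  ultimately show "B \<epsilon> (c *\<^sub>R x) = c *\<^sub>R B \<epsilon> x"
    using B_hom HoelderV0_imp_HoelderV[OF x] unfolding scaleR_vec_eq_smult by simp
qed

lemma B_diff:
  assumes \<epsilon>: "\<epsilon> \<in> {0..<\<epsilon>0}" and y: "y \<in> HoelderV a b (n + r) \<alpha>" and z: "z \<in> HoelderV a b (n + r) \<alpha>"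
  shows "B \<epsilon> (\<lambda>t. y t - z t) = B \<epsilon> y - B \<epsilon> z"
proof -
  have eq: "(\<lambda>t. y t - z t) = (\<lambda>t. y t + (-1) *s z t)" by (simp add: fun_eq_iff vec_eq_iff)
  have "B \<epsilon> (\<lambda>t. y t + (-1) *s z t) = B \<epsilon> y + B \<epsilon> (\<lambda>t. (-1) *s z t)"
    by (rule B_add[rule_format, OF \<epsilon> y HoelderV_smult[OF z]])
  then have "B \<epsilon> (\<lambda>t. y t - z t) = B \<epsilon> y + B \<epsilon> (\<lambda>t. (-1) *s z t)" unfolding eq .
  also have "B \<epsilon> (\<lambda>t. (-1) *s z t) = (-1) *s B \<epsilon> z" by (rule B_hom[rule_format, OF \<epsilon> z])
  finally show ?thesis by (simp add: vec_eq_iff)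
qed

lemma coefficient_perturbation_tendsto:
  "\<exists>\<eta>. (\<eta> \<longlongrightarrow> 0) (at_right 0) \<and> (\<forall>\<epsilon>\<in>{0<..<\<epsilon>0}. \<forall>x\<in>HoelderV0 (n + r).
      hnormV a b n \<alpha> (zero_ext (Lop a b r (A \<epsilon>) x) - zero_ext (Lop a b r (A 0) x)) \<le> \<eta> \<epsilon> * hnormV a b (n + r) \<alpha> x)"
proof -
  define \<eta> where "\<eta> \<epsilon> = (2 * emb_const) ^ n * emb_const ^ r *
    (\<Sum>j\<in>{1..r}. hnormM a b n \<alpha> (\<lambda>t. A \<epsilon> (r - j) t - A 0 (r - j) t))" for \<epsilon>
  have "((\<lambda>\<epsilon>. hnormM a b n \<alpha> (\<lambda>t. A \<epsilon> (r - j) t - A 0 (r - j) t)) \<longlongrightarrow> 0) (at_right 0)" if "j \<in> {1..r}" for j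
    using HI that by auto
  then have "(\<eta> \<longlongrightarrow> 0) (at_right 0)"
    unfolding \<eta>_def by (intro tendsto_mult_right_zero tendsto_null_sum)
  moreover have "hnormV a b n \<alpha> (zero_ext (Lop a b r (A \<epsilon>) x) - zero_ext (Lop a b r (A 0) x)) \<le> \<eta> \<epsilon> * hnormV a b (n + r) \<alpha> x"
    if "\<epsilon> \<in> {0<..<\<epsilon>0}" "x \<in> HoelderV0 (n + r)" for \<epsilon> and x :: "real \<Rightarrow> complex^'m"
    unfolding \<eta>_def using that eps0
    by (intro hnormV_zero_ext_Lop_diff HoelderV0_imp_HoelderV A_regular) auto
  ultimately show ?thesis by blast
qed

sublocale perturbed_operator_pair "HoelderV0 (n + r)" "hnormV a b (n + r) \<alpha>" "HoelderV0 n" "hnormV a b n \<alpha>"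
  "\<lambda>\<epsilon> x. zero_ext (Lop a b r (A \<epsilon>) x)" B \<epsilon>0
proof (intro perturbed_operator_pair.intro perturbed_operator_pair_axioms.intro banach_set_HoelderV0)
  show "0 < \<epsilon>0" by (rule eps0)
  show "linear_on (HoelderV0 (n + r)) (\<lambda>x. zero_ext (Lop a b r (A 0) x))"
    by (rule linear_on_zero_ext_Lop)
  show "\<And>\<epsilon>. \<epsilon> \<in> {0..<\<epsilon>0} \<Longrightarrow> linear_on (HoelderV0 (n + r)) (B \<epsilon>)" by (rule linear_on_B)
  show "\<exists>\<eta>. (\<eta> \<longlongrightarrow> 0) (at_right 0) \<and> (\<forall>\<epsilon>\<in>{0<..<\<epsilon>0}. \<forall>x\<in>HoelderV0 (n + r).
      hnormV a b n \<alpha> (zero_ext (Lop a b r (A \<epsilon>) x) - zero_ext (Lop a b r (A 0) x)) \<le> \<eta> \<epsilon> * hnormV a b (n + r) \<alpha> x)"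
    by (rule coefficient_perturbation_tendsto)
  show "\<And>x. x \<in> HoelderV0 (n + r) \<Longrightarrow> ((\<lambda>\<epsilon>. B \<epsilon> x) \<longlongrightarrow> B 0 x) (at_right 0)"
    using HII HoelderV0_imp_HoelderV by blast
  show "\<And>\<epsilon>. \<epsilon> \<in> {0..<\<epsilon>0} \<Longrightarrow> \<exists>K. \<forall>x\<in>HoelderV0 (n + r). norm (B \<epsilon> x) \<le> K * hnormV a b (n + r) \<alpha> x"
    using B_cont HoelderV0_imp_HoelderV by blast
  show "zero_ext (Lop a b r (A \<epsilon>) x) \<in> HoelderV0 n"
    if "\<epsilon> \<in> {0..<\<epsilon>0}" and x: "x \<in> HoelderV0 (n + r)" for \<epsilon> and x :: "real \<Rightarrow> complex^'m"
  proof -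
    have "\<And>k. k < r \<Longrightarrow> A \<epsilon> k \<in> HoelderM a b n \<alpha>" using A_regular that(1) by blast
    then have "Lop a b r (A \<epsilon>) x \<in> HoelderV a b n \<alpha>"
      using Lop_HoelderV[where A = "A \<epsilon>", OF HoelderV0_imp_HoelderV[OF x]] by blast
    then show ?thesis by (rule zero_ext_HoelderV0)
  qed
  have A0: "\<And>k. k < r \<Longrightarrow> A 0 k \<in> HoelderM a b n \<alpha>" using A_regular eps0 by auto
  show "\<exists>K. \<forall>x\<in>HoelderV0 (n + r). hnormV a b n \<alpha> (zero_ext (Lop a b r (A 0) x)) \<le> K * hnormV a b (n + r) \<alpha> x"
    unfolding hnormV_zero_ext using Lop_HoelderV[where A = "A 0", OF HoelderV0_imp_HoelderV A0] by blast
  fix x :: "real \<Rightarrow> complex^'m"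
  assume x: "x \<in> HoelderV0 (n + r)" and L0: "zero_ext (Lop a b r (A 0) x) = 0" and B0: "B 0 x = 0"
  have "Lop a b r (A 0) x t = 0" if "t \<in> {a..b}" for t
    using fun_cong[OF L0, of t] zero_ext_eq[OF that, of "Lop a b r (A 0) x"] by simp
  then have "\<forall>t\<in>{a..b}. Lop a b r (A 0) x t = 0" by blast
  then have "\<forall>t\<in>{a..b}. x t = 0" using H0 HoelderV0_imp_HoelderV[OF x] B0 by blast
  moreover have "(0 :: real \<Rightarrow> complex^'m) \<in> HoelderV0 (n + r)"
    by (rule banach_set.zero_mem[OF banach_set_HoelderV0])
  ultimately show "x = 0" by (intro HoelderV0_eqI[OF x]) auto
next
  fix y :: "real \<Rightarrow> complex^'m" and c assume y: "y \<in> HoelderV0 n"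
  obtain z where z: "z \<in> HoelderV a b (n + r) \<alpha>" "\<forall>t\<in>{a..b}. Lop a b r (A 0) z t = y t" "B 0 z = c"
    using solvable HoelderV0_imp_HoelderV[OF y] by blast
  have "zero_ext (Lop a b r (A 0) (zero_ext z)) t = y t" for t
  proof (cases "t \<in> {a..b}")
    case True
    then show ?thesis using z(2) Lop_cong[of "zero_ext z" z t, OF zero_ext_eq True] by (simp add: zero_ext_eq)
  next
    case False
    then show ?thesis using y unfolding HoelderV0_def by (simp add: zero_ext_def del: atLeastAtMost_iff)
  qed
  moreover have "\<forall>t\<in>{a..b}. zero_ext z t = z t" by (simp add: zero_ext_eq)
  then have "B 0 (zero_ext z) = c" using B_local eps0 z(3) by auto
  ultimately show "\<exists>x\<in>HoelderV0 (n + r). zero_ext (Lop a b r (A 0) x) = y \<and> B 0 x = c"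
    using zero_ext_HoelderV0[OF z(1)] by (intro bexI[of _ "zero_ext z"]) (auto simp: fun_eq_iff)
qed

theorem uniform_norm_equivalence:
  assumes N: "is_cnorm N"
  obtains \<delta> \<kappa>1 \<kappa>2 where "\<delta> > 0" "\<kappa>1 > 0" "\<kappa>2 > 0"
    "\<And>\<epsilon> z. \<epsilon> \<in> {0<..<\<delta>} \<Longrightarrow> z \<in> HoelderV a b (n + r) \<alpha> \<Longrightarrow>
       \<kappa>1 * (hnormV a b n \<alpha> (Lop a b r (A \<epsilon>) z) + N (B \<epsilon> z)) \<le> hnormV a b (n + r) \<alpha> z \<and>
       hnormV a b (n + r) \<alpha> z \<le> \<kappa>2 * (hnormV a b n \<alpha> (Lop a b r (A \<epsilon>) z) + N (B \<epsilon> z))"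
proof -
  obtain \<delta> \<kappa>1 \<kappa>2 where est: "\<delta> > 0" "\<kappa>1 > 0" "\<kappa>2 > 0"
    "\<And>\<epsilon> x. \<epsilon> \<in> {0<..<\<delta>} \<Longrightarrow> x \<in> HoelderV0 (n + r) \<Longrightarrow>
       \<kappa>1 * (hnormV a b n \<alpha> (zero_ext (Lop a b r (A \<epsilon>) x)) + norm (B \<epsilon> x)) \<le> hnormV a b (n + r) \<alpha> x \<and>
       hnormV a b (n + r) \<alpha> x \<le> \<kappa>2 * (hnormV a b n \<alpha> (zero_ext (Lop a b r (A \<epsilon>) x)) + norm (B \<epsilon> x))"
    using two_sided_estimate by blast
  obtain C1 where C1: "\<And>x. N x \<le> C1 * norm x" using is_cnorm_le_norm[OF N] by blast
  obtain C2 where C2: "\<And>x. norm x \<le> C2 * N x" using norm_le_is_cnorm[OF N] by blast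
  have N0: "0 \<le> N x" for x using is_cnormD(2)[OF N] .
  define \<delta>' where "\<delta>' = min \<delta> \<epsilon>0"
  have "\<kappa>1 / max 1 C1 * (hnormV a b n \<alpha> (Lop a b r (A \<epsilon>) z) + N (B \<epsilon> z)) \<le> hnormV a b (n + r) \<alpha> z \<and>
        hnormV a b (n + r) \<alpha> z \<le> \<kappa>2 * max 1 C2 * (hnormV a b n \<alpha> (Lop a b r (A \<epsilon>) z) + N (B \<epsilon> z))"
    if \<epsilon>: "\<epsilon> \<in> {0<..<\<delta>'}" and z: "z \<in> HoelderV a b (n + r) \<alpha>" for \<epsilon> z
  proof -
    let ?l = "hnormV a b n \<alpha> (Lop a b r (A \<epsilon>) z)"
    have "hnormV a b n \<alpha> (zero_ext (Lop a b r (A \<epsilon>) (zero_ext z))) = ?l"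
      unfolding hnormV_zero_ext by (rule HoelderV_cong(2), rule Lop_cong, rule zero_ext_eq)
    moreover have "B \<epsilon> (zero_ext z) = B \<epsilon> z"
    proof -
      have "\<forall>t\<in>{a..b}. zero_ext z t = z t" by (simp add: zero_ext_eq)
      moreover have "\<epsilon> \<in> {0..<\<epsilon>0}" using \<epsilon> unfolding \<delta>'_def by auto
      ultimately show ?thesis using B_local by blast
    qed
    ultimately have E: "\<kappa>1 * (?l + norm (B \<epsilon> z)) \<le> hnormV a b (n + r) \<alpha> z"
      "hnormV a b (n + r) \<alpha> z \<le> \<kappa>2 * (?l + norm (B \<epsilon> z))"
      using est(4)[of \<epsilon> "zero_ext z"] \<epsilon> zero_ext_HoelderV0[OF z] unfolding \<delta>'_def hnormV_zero_ext by auto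
    have "\<And>k. k < r \<Longrightarrow> A \<epsilon> k \<in> HoelderM a b n \<alpha>" using A_regular \<epsilon> unfolding \<delta>'_def by auto
    then have l0: "0 \<le> ?l" using hnormV_nonneg[OF conjunct1[OF Lop_HoelderV[where A = "A \<epsilon>", OF z]]] by blast
    have "?l + N (B \<epsilon> z) \<le> max 1 C1 * (?l + norm (B \<epsilon> z))"
    proof -
      have "1 * ?l \<le> max 1 C1 * ?l" by (rule mult_right_mono[OF max.cobounded1 l0])
      moreover have "C1 * norm (B \<epsilon> z) \<le> max 1 C1 * norm (B \<epsilon> z)"
        by (rule mult_right_mono[OF max.cobounded2 norm_ge_zero])
      ultimately show ?thesis using C1[of "B \<epsilon> z"] by (simp add: distrib_left)
    qed
    then have "(?l + N (B \<epsilon> z)) / max 1 C1 \<le> ?l + norm (B \<epsilon> z)"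
      by (simp add: divide_le_eq mult.commute)
    then have "\<kappa>1 * ((?l + N (B \<epsilon> z)) / max 1 C1) \<le> \<kappa>1 * (?l + norm (B \<epsilon> z))"
      using est(2) by (intro mult_left_mono) auto
    then have "\<kappa>1 / max 1 C1 * (?l + N (B \<epsilon> z)) \<le> \<kappa>1 * (?l + norm (B \<epsilon> z))" by simp
    moreover have "?l + norm (B \<epsilon> z) \<le> max 1 C2 * (?l + N (B \<epsilon> z))"
    proof -
      have "1 * ?l \<le> max 1 C2 * ?l" by (rule mult_right_mono[OF max.cobounded1 l0])
      moreover have "C2 * N (B \<epsilon> z) \<le> max 1 C2 * N (B \<epsilon> z)"
        by (rule mult_right_mono[OF max.cobounded2 N0])
      ultimately show ?thesis using C2[of "B \<epsilon> z"] by (simp add: distrib_left)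
    qed
    then have "\<kappa>2 * (?l + norm (B \<epsilon> z)) \<le> \<kappa>2 * max 1 C2 * (?l + N (B \<epsilon> z))"
      using est(3) by (simp add: mult.assoc)
    ultimately show ?thesis using E by linarith
  qed
  moreover have "\<delta>' > 0" "\<kappa>1 / max 1 C1 > 0" "\<kappa>2 * max 1 C2 > 0" unfolding \<delta>'_def using est eps0 by auto
  ultimately show ?thesis by (intro that[of \<delta>' "\<kappa>1 / max 1 C1" "\<kappa>2 * max 1 C2"])
qed

theorem solution_difference_estimate:
  fixes \<epsilon>1 :: real and N :: "complex^'k \<Rightarrow> real"
  assumes N: "is_cnorm N" and eps1: "0 < \<epsilon>1" "\<epsilon>1 < \<epsilon>0"
  shows "\<exists>\<epsilon>2 \<kappa>1 \<kappa>2. 0 < \<epsilon>2 \<and> \<epsilon>2 < \<epsilon>1 \<and> 0 < \<kappa>1 \<and> 0 < \<kappa>2 \<and>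
           (\<forall>f c y. (\<forall>\<epsilon>\<in>{0..<\<epsilon>1}. f \<epsilon> \<in> HoelderV a b n \<alpha> \<and> y \<epsilon> \<in> HoelderV a b (n + r) \<alpha>
                      \<and> (\<forall>t\<in>{a..b}. Lop a b r (A \<epsilon>) (y \<epsilon>) t = f \<epsilon> t) \<and> B \<epsilon> (y \<epsilon>) = c \<epsilon>)
             \<longrightarrow> (\<forall>\<epsilon>\<in>{0<..<\<epsilon>2}.
                   let d = hnormV a b n \<alpha> (\<lambda>t. Lop a b r (A \<epsilon>) (y 0) t - f \<epsilon> t)
                           + N (B \<epsilon> (y 0) - c \<epsilon>)
                   in \<kappa>1 * d \<le> hnormV a b (n + r) \<alpha> (\<lambda>t. y 0 t - y \<epsilon> t)
                    \<and> hnormV a b (n + r) \<alpha> (\<lambda>t. y 0 t - y \<epsilon> t) \<le> \<kappa>2 * d))"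
proof -
  obtain \<delta> \<kappa>1 \<kappa>2 where \<delta>: "\<delta> > 0" and \<kappa>: "\<kappa>1 > 0" "\<kappa>2 > 0"
    and est: "\<And>\<epsilon> z. \<epsilon> \<in> {0<..<\<delta>} \<Longrightarrow> z \<in> HoelderV a b (n + r) \<alpha> \<Longrightarrow>
       \<kappa>1 * (hnormV a b n \<alpha> (Lop a b r (A \<epsilon>) z) + N (B \<epsilon> z)) \<le> hnormV a b (n + r) \<alpha> z \<and>
       hnormV a b (n + r) \<alpha> z \<le> \<kappa>2 * (hnormV a b n \<alpha> (Lop a b r (A \<epsilon>) z) + N (B \<epsilon> z))"
    using uniform_norm_equivalence[OF N] by blast
  show ?thesis
  proof (rule exI[of _ "min \<delta> (\<epsilon>1 / 2)"], rule exI[of _ \<kappa>1], rule exI[of _ \<kappa>2],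
      intro conjI allI impI ballI)
    show "0 < min \<delta> (\<epsilon>1 / 2)" "min \<delta> (\<epsilon>1 / 2) < \<epsilon>1" using \<delta> eps1 by auto
    show "0 < \<kappa>1" "0 < \<kappa>2" by (fact \<kappa>)+
  next
    fix f c y \<epsilon>
    assume sol: "\<forall>\<epsilon>\<in>{0..<\<epsilon>1}. f \<epsilon> \<in> HoelderV a b n \<alpha> \<and> y \<epsilon> \<in> HoelderV a b (n + r) \<alpha>
                   \<and> (\<forall>t\<in>{a..b}. Lop a b r (A \<epsilon>) (y \<epsilon>) t = f \<epsilon> t) \<and> B \<epsilon> (y \<epsilon>) = c \<epsilon>"
      and \<epsilon>: "\<epsilon> \<in> {0<..<min \<delta> (\<epsilon>1 / 2)}"
    have "0 \<in> {0..<\<epsilon>1}" "\<epsilon> \<in> {0..<\<epsilon>1}" using \<epsilon> eps1 by auto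
    then have y0: "y 0 \<in> HoelderV a b (n + r) \<alpha>" and y\<epsilon>: "y \<epsilon> \<in> HoelderV a b (n + r) \<alpha>"
      and L\<epsilon>: "\<forall>t\<in>{a..b}. Lop a b r (A \<epsilon>) (y \<epsilon>) t = f \<epsilon> t" and B\<epsilon>: "B \<epsilon> (y \<epsilon>) = c \<epsilon>"
      using sol by blast+
    have "hnormV a b n \<alpha> (Lop a b r (A \<epsilon>) (\<lambda>t. y 0 t - y \<epsilon> t))
        = hnormV a b n \<alpha> (\<lambda>t. Lop a b r (A \<epsilon>) (y 0) t - f \<epsilon> t)"
      by (rule HoelderV_cong(2)) (simp add: Lop_diff[OF y0 y\<epsilon>] L\<epsilon>)
    moreover have "B \<epsilon> (\<lambda>t. y 0 t - y \<epsilon> t) = B \<epsilon> (y 0) - c \<epsilon>"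
      using B_diff[OF _ y0 y\<epsilon>, of \<epsilon>] \<epsilon> eps1 B\<epsilon> by auto
    ultimately show "let d = hnormV a b n \<alpha> (\<lambda>t. Lop a b r (A \<epsilon>) (y 0) t - f \<epsilon> t) + N (B \<epsilon> (y 0) - c \<epsilon>)
        in \<kappa>1 * d \<le> hnormV a b (n + r) \<alpha> (\<lambda>t. y 0 t - y \<epsilon> t)
         \<and> hnormV a b (n + r) \<alpha> (\<lambda>t. y 0 t - y \<epsilon> t) \<le> \<kappa>2 * d"
      using est[OF _ HoelderV_diff[OF y0 y\<epsilon>], of \<epsilon>] \<epsilon> by (simp add: Let_def)
  qed
qed

end

theorem theorem1:
  fixes a b \<alpha> \<epsilon>0 \<epsilon>1 :: real and n r :: nat
    and A :: "real \<Rightarrow> nat \<Rightarrow> real \<Rightarrow> complex^'m::finite^'m"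
    and B :: "real \<Rightarrow> (real \<Rightarrow> complex^'m) \<Rightarrow> complex^'k::finite"
    and N :: "complex^'k \<Rightarrow> real"
  assumes ab: "a < b"
    and r2: "r \<ge> 2"
    and alpha: "0 < \<alpha>" "\<alpha> \<le> 1"
    and eps0: "0 < \<epsilon>0"
    and dimk: "CARD('k) = r * CARD('m)"
    and N: "is_cnorm N"
    and A_reg: "\<forall>\<epsilon>\<in>{0..<\<epsilon>0}. \<forall>k<r. A \<epsilon> k \<in> HoelderM a b n \<alpha>"
    and B_local: "\<forall>\<epsilon>\<in>{0..<\<epsilon>0}. \<forall>y z. (\<forall>t\<in>{a..b}. y t = z t) \<longrightarrow> B \<epsilon> y = B \<epsilon> z"
    and B_add: "\<forall>\<epsilon>\<in>{0..<\<epsilon>0}. \<forall>y\<in>HoelderV a b (n + r) \<alpha>. \<forall>z\<in>HoelderV a b (n + r) \<alpha>.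
                  B \<epsilon> (\<lambda>t. y t + z t) = B \<epsilon> y + B \<epsilon> z"
    and B_hom: "\<forall>\<epsilon>\<in>{0..<\<epsilon>0}. \<forall>y\<in>HoelderV a b (n + r) \<alpha>. \<forall>c::complex.
                  B \<epsilon> (\<lambda>t. c *s y t) = c *s B \<epsilon> y"
    and B_cont: "\<forall>\<epsilon>\<in>{0..<\<epsilon>0}. \<exists>K. \<forall>y\<in>HoelderV a b (n + r) \<alpha>.
                  norm (B \<epsilon> y) \<le> K * hnormV a b (n + r) \<alpha> y"
    and H0: "\<forall>y\<in>HoelderV a b (n + r) \<alpha>.
               (\<forall>t\<in>{a..b}. Lop a b r (A 0) y t = 0) \<and> B 0 y = 0 \<longrightarrow> (\<forall>t\<in>{a..b}. y t = 0)"
    and HI: "\<forall>k<r. ((\<lambda>\<epsilon>. hnormM a b n \<alpha> (\<lambda>t. A \<epsilon> k t - A 0 k t)) \<longlongrightarrow> 0) (at_right 0)"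
    and HII: "\<forall>y\<in>HoelderV a b (n + r) \<alpha>. ((\<lambda>\<epsilon>. B \<epsilon> y) \<longlongrightarrow> B 0 y) (at_right 0)"
    and eps1: "0 < \<epsilon>1" "\<epsilon>1 < \<epsilon>0"
    and uniq: "\<forall>\<epsilon>\<in>{0..<\<epsilon>1}. \<forall>f\<in>HoelderV a b n \<alpha>. \<forall>c.
                 \<exists>y\<in>HoelderV a b (n + r) \<alpha>.
                   (\<forall>t\<in>{a..b}. Lop a b r (A \<epsilon>) y t = f t) \<and> B \<epsilon> y = c
                 \<and> (\<forall>z\<in>HoelderV a b (n + r) \<alpha>.
                      (\<forall>t\<in>{a..b}. Lop a b r (A \<epsilon>) z t = f t) \<and> B \<epsilon> z = c
                      \<longrightarrow> (\<forall>t\<in>{a..b}. z t = y t))"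
  shows "\<exists>\<epsilon>2 \<kappa>1 \<kappa>2. 0 < \<epsilon>2 \<and> \<epsilon>2 < \<epsilon>1 \<and> 0 < \<kappa>1 \<and> 0 < \<kappa>2 \<and>
           (\<forall>f c y. (\<forall>\<epsilon>\<in>{0..<\<epsilon>1}. f \<epsilon> \<in> HoelderV a b n \<alpha> \<and> y \<epsilon> \<in> HoelderV a b (n + r) \<alpha>
                      \<and> (\<forall>t\<in>{a..b}. Lop a b r (A \<epsilon>) (y \<epsilon>) t = f \<epsilon> t) \<and> B \<epsilon> (y \<epsilon>) = c \<epsilon>)
             \<longrightarrow> (\<forall>\<epsilon>\<in>{0<..<\<epsilon>2}.
                   let d = hnormV a b n \<alpha> (\<lambda>t. Lop a b r (A \<epsilon>) (y 0) t - f \<epsilon> t)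
                           + N (B \<epsilon> (y 0) - c \<epsilon>)
                   in \<kappa>1 * d \<le> hnormV a b (n + r) \<alpha> (\<lambda>t. y 0 t - y \<epsilon> t)
                    \<and> hnormV a b (n + r) \<alpha> (\<lambda>t. y 0 t - y \<epsilon> t) \<le> \<kappa>2 * d))"
proof -
  have "0 \<in> {0..<\<epsilon>1}" using eps1(1) by simp
  then have solvable: "\<forall>f\<in>HoelderV a b n \<alpha>. \<forall>c. \<exists>y\<in>HoelderV a b (n + r) \<alpha>.
      (\<forall>t\<in>{a..b}. Lop a b r (A 0) y t = f t) \<and> B 0 y = c"
    using uniq by blast
  interpret hoelder_bvp a b \<alpha> n r A B \<epsilon>0
    using ab alpha eps0 A_reg B_local B_add B_hom B_cont H0 HI HII solvable by unfold_locales auto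
  show ?thesis by (rule solution_difference_estimate[OF N eps1])
qed

end
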